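(* Let $(\mathcal C,\mathbb E,\mathfrak s)$ and $(\mathcal D,\mathbb F,\mathfrak t)$ be $n$-exangulated categories and $(\mathscr F,\Gamma)\colon(\mathcal C,\mathbb E,\mathfrak s)\to(\mathcal D,\mathbb F,\mathfrak t)$ an $n$-exangulated functor. Then $(\widetilde{\mathscr F},\widetilde\Gamma)$ is an $n$-exangulated functor $(\widetilde{\mathcal C},\widetilde{\mathbb E},\widetilde{\mathfrak s})\to(\widetilde{\mathcal D},\widetilde{\mathbb F},\widetilde{\mathfrak t})$.
   Context: $n\ge1$. An $n$-exangulated category $(\mathcal C,\mathbb E,\mathfrak s)$ (Herschend–Liu–Nakaoka) consists of an additive category $\mathcal C$, a biadditive functor $\mathbb E\colon\mathcal C^{\mathrm{op}}\times\mathcal C\to\mathsf{Ab}$, and an exact realisation $\mathfrak s$ assigning to each $\alpha\in\mathbb E(C,A)$ a homotopy class $[X_\bullet]$ of $(n+2)$-term complexes $X_0\to X_1\to\cdots\to X_{n+1}$ with $X_0=A$, $X_{n+1}=C$, satisfying axioms (EA1), (EA2), (EA2$^{\mathrm{op}}$). Write $a_*\alpha=\mathbb E(C,a)(\alpha)$ and $c^*\alpha=\mathbb E(c,A)(\alpha)$. A morphism of $\mathbb E$-extensions $\alpha\to\beta$ ($\alpha\in\mathbb E(C,A)$, $\beta\in\mathbb E(D,B)$) is a pair $(a\colon A\to B,c\colon C\to D)$ with $a_*\alpha=c^*\beta$. An $n$-exangulated functor $(\mathscr F,\Gamma)$ is an additive functor $\mathscr F\colon\mathcal C\to\mathcal D$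 with a natural transformation $\Gamma\colon\mathbb E(-,-)\Rightarrow\mathbb F(\mathscr F-,\mathscr F-)$ such that $\mathfrak s(\alpha)=[X_\bullet]$ implies $\mathfrak t(\Gamma(\alpha))=[\mathscr FX_\bullet]$. Idempotent completion: $\widetilde{\mathcal C}$ has objects $(X,e)$ with $e\colon X\to X$ idempotent, morphisms $(e_Y,f,e_X)\colon(X,e_X)\to(Y,e_Y)$ with $fe_X=f=e_Yf$, composition $(e_Z,g,e_Y)(e_Y,f,e_X)=(e_Z,gf,e_X)$, identity $(e,e,e)$; for additive $\mathscr F$, $\widetilde{\mathscr F}(X,e)=(\mathscr FX,\mathscr Fe)$, $\widetilde{\mathscr F}(e_Y,f,e_X)=(\mathscr Fe_Y,\mathscr Ff,\mathscr Fe_X)$. The biadditive functor $\widetilde{\mathbb E}$ on $\widetilde{\mathcal C}$: $\widetilde{\mathbb E}((C,e_C),(A,e_A))=\{(e_A,\alpha,e_C)\mid\alpha\in\mathbb E(C,A),\ (e_A)_*\alpha=\alpha=(e_C)^*\alpha\}$ with addition in the middle component, and $\widetilde{\mathbb E}((e_C,d,e_D),(e_B,a,e_A))(e_A,\alpha,e_C)=(e_B,\mathbb E(d,a)(\alpha),e_D)$. The realisation $\widetilde{\mathfrak s}$: given $(e_A,\alpha,e_C)$, choose $X_\bullet$ with $\mathfrak s(\alpha)=[X_\bullet]$ (differentials $d_i$) and an idempotent morphism of complexes $e_\bullet\colon X_\bullet\to X_\bullet$ with $e_0=e_A$, $e_{n+1}=e_C$ (one exists, and the result is independent of choices); then $\widetilde{\mathfrak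 s}(e_A,\alpha,e_C)=[(X_\bullet,e_\bullet)]$, where $(X_\bullet,e_\bullet)$ is the complex in $\widetilde{\mathcal C}$ with terms $(X_i,e_i)$ and differentials $(e_{i+1},e_{i+1}d_i,e_i)$. Then $(\widetilde{\mathcal C},\widetilde{\mathbb E},\widetilde{\mathfrak s})$ is $n$-exangulated. Given $(\mathscr F,\Gamma)$, $\widetilde\Gamma$ is defined by $\widetilde\Gamma(e_A,\alpha,e_C)=(\mathscr Fe_A,\Gamma(\alpha),\mathscr Fe_C)$. *)

theory Defs
  imports "HOL-Algebra.Group"
begin

section \<open>Additive categories (objects 'o, morphisms 'm, operations indexed by objects)\<close>

record ('o,'m) addcat =
  Ob  :: "'o set"
  Hm  :: "'o \<Rightarrow> 'o \<Rightarrow> 'm set"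
  Cp  :: "'o \<Rightarrow> 'o \<Rightarrow> 'o \<Rightarrow> 'm \<Rightarrow> 'm \<Rightarrow> 'm"           (* Cp X Y Z g f = g o f *)
  Idn :: "'o \<Rightarrow> 'm"
  Ad  :: "'o \<Rightarrow> 'o \<Rightarrow> 'm \<Rightarrow> 'm \<Rightarrow> 'm"
  Zr  :: "'o \<Rightarrow> 'o \<Rightarrow> 'm"

definition hom_group :: "('o,'m) addcat \<Rightarrow> 'o \<Rightarrow> 'o \<Rightarrow> 'm monoid" where
  "hom_group C X Y = \<lparr>carrier = Hm C X Y, mult = Ad C X Y, one = Zr C X Y\<rparr>"

definition is_category :: "('o,'m) addcat \<Rightarrow> bool" where
  "is_category C \<longleftrightarrow>
     (\<forall>X Y. (X \<notin> Ob C \<or> Y \<notin> Ob C) \<longrightarrow> Hm C X Y = {}) \<and>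
     (\<forall>X\<in>Ob C. Idn C X \<in> Hm C X X) \<and>
     (\<forall>X\<in>Ob C. \<forall>Y\<in>Ob C. \<forall>Z\<in>Ob C. \<forall>f\<in>Hm C X Y. \<forall>g\<in>Hm C Y Z. Cp C X Y Z g f \<in> Hm C X Z) \<and>
     (\<forall>X\<in>Ob C. \<forall>Y\<in>Ob C. \<forall>Z\<in>Ob C. \<forall>W\<in>Ob C. \<forall>f\<in>Hm C X Y. \<forall>g\<in>Hm C Y Z. \<forall>h\<in>Hm C Z W.
        Cp C X Z W h (Cp C X Y Z g f) = Cp C X Y W (Cp C Y Z W h g) f) \<and>
     (\<forall>X\<in>Ob C. \<forall>Y\<in>Ob C. \<forall>f\<in>Hm C X Y.
        Cp C X Y Y (Idn C Y) f = f \<and> Cp C X X Y f (Idn C X) = f)"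

definition is_preadditive :: "('o,'m) addcat \<Rightarrow> bool" where
  "is_preadditive C \<longleftrightarrow> is_category C \<and>
     (\<forall>X\<in>Ob C. \<forall>Y\<in>Ob C. comm_group (hom_group C X Y)) \<and>
     (\<forall>X\<in>Ob C. \<forall>Y\<in>Ob C. \<forall>Z\<in>Ob C.
        (\<forall>f\<in>Hm C X Y. \<forall>f'\<in>Hm C X Y. \<forall>g\<in>Hm C Y Z.
           Cp C X Y Z g (Ad C X Y f f') = Ad C X Z (Cp C X Y Z g f) (Cp C X Y Z g f')) \<and>
        (\<forall>f\<in>Hm C X Y. \<forall>g\<in>Hm C Y Z. \<forall>g'\<in>Hm C Y Z.
           Cp C X Y Z (Ad C Y Z g g') f = Ad C X Z (Cp C X Y Z g f) (Cp C X Y Z g' f)))"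

definition is_zero_obj :: "('o,'m) addcat \<Rightarrow> 'o \<Rightarrow> bool" where
  "is_zero_obj C Z \<longleftrightarrow> Z \<in> Ob C \<and> Idn C Z = Zr C Z Z"

definition is_biproduct :: "('o,'m) addcat \<Rightarrow> 'o \<Rightarrow> 'o \<Rightarrow> 'o \<Rightarrow> 'm \<Rightarrow> 'm \<Rightarrow> 'm \<Rightarrow> 'm \<Rightarrow> bool" where
  "is_biproduct C X Y P i1 i2 p1 p2 \<longleftrightarrow> P \<in> Ob C \<and>
     i1 \<in> Hm C X P \<and> i2 \<in> Hm C Y P \<and> p1 \<in> Hm C P X \<and> p2 \<in> Hm C P Y \<and>
     Cp C X P X p1 i1 = Idn C X \<and> Cp C Y P Y p2 i2 = Idn C Y \<and>
     Cp C Y P X p1 i2 = Zr C Y X \<and> Cp C X P Y p2 i1 = Zr C X Y \<and>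
     Ad C P P (Cp C P X P i1 p1) (Cp C P Y P i2 p2) = Idn C P"

definition is_additive :: "('o,'m) addcat \<Rightarrow> bool" where
  "is_additive C \<longleftrightarrow> is_preadditive C \<and> (\<exists>Z. is_zero_obj C Z) \<and>
     (\<forall>X\<in>Ob C. \<forall>Y\<in>Ob C. \<exists>P i1 i2 p1 p2. is_biproduct C X Y P i1 i2 p1 p2)"

section \<open>Biadditive functors E : C^op x C \<rightarrow> Ab\<close>

record ('o,'m,'x) bifun =
  Ex  :: "'o \<Rightarrow> 'o \<Rightarrow> 'x set"                           (* Ex C A = E(C,A) *)
  EAd :: "'o \<Rightarrow> 'o \<Rightarrow> 'x \<Rightarrow> 'x \<Rightarrow> 'x"
  EZr :: "'o \<Rightarrow> 'o \<Rightarrow> 'x"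
  EMp :: "'o \<Rightarrow> 'o \<Rightarrow> 'o \<Rightarrow> 'o \<Rightarrow> 'm \<Rightarrow> 'm \<Rightarrow> 'x \<Rightarrow> 'x"
    (* EMp C' C A A' c a = E(c,a) : E(C,A) \<rightarrow> E(C',A') for c : C' \<rightarrow> C, a : A \<rightarrow> A' *)

definition ext_group :: "('o,'m,'x) bifun \<Rightarrow> 'o \<Rightarrow> 'o \<Rightarrow> 'x monoid" where
  "ext_group E Cc A = \<lparr>carrier = Ex E Cc A, mult = EAd E Cc A, one = EZr E Cc A\<rparr>"

definition pushE :: "('o,'m) addcat \<Rightarrow> ('o,'m,'x) bifun \<Rightarrow> 'o \<Rightarrow> 'o \<Rightarrow> 'o \<Rightarrow> 'm \<Rightarrow> 'x \<Rightarrow> 'x" where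
  "pushE C E Cc A A' a \<alpha> = EMp E Cc Cc A A' (Idn C Cc) a \<alpha>"

definition pullE :: "('o,'m) addcat \<Rightarrow> ('o,'m,'x) bifun \<Rightarrow> 'o \<Rightarrow> 'o \<Rightarrow> 'o \<Rightarrow> 'm \<Rightarrow> 'x \<Rightarrow> 'x" where
  "pullE C E C' Cc A c \<alpha> = EMp E C' Cc A A c (Idn C A) \<alpha>"

definition is_biadditive :: "('o,'m) addcat \<Rightarrow> ('o,'m,'x) bifun \<Rightarrow> bool" where
  "is_biadditive C E \<longleftrightarrow>
     (\<forall>Cc A. (Cc \<notin> Ob C \<or> A \<notin> Ob C) \<longrightarrow> Ex E Cc A = {}) \<and>
     (\<forall>Cc\<in>Ob C. \<forall>A\<in>Ob C. comm_group (ext_group E Cc A)) \<and>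
     (\<forall>C'\<in>Ob C. \<forall>Cc\<in>Ob C. \<forall>A\<in>Ob C. \<forall>A'\<in>Ob C. \<forall>c\<in>Hm C C' Cc. \<forall>a\<in>Hm C A A'.
        EMp E C' Cc A A' c a \<in> hom (ext_group E Cc A) (ext_group E C' A')) \<and>
     (\<forall>Cc\<in>Ob C. \<forall>A\<in>Ob C. \<forall>\<alpha>\<in>Ex E Cc A. EMp E Cc Cc A A (Idn C Cc) (Idn C A) \<alpha> = \<alpha>) \<and>
     (\<forall>C''\<in>Ob C. \<forall>C'\<in>Ob C. \<forall>Cc\<in>Ob C. \<forall>A\<in>Ob C. \<forall>A'\<in>Ob C. \<forall>A''\<in>Ob C.
      \<forall>c'\<in>Hm C C'' C'. \<forall>c\<in>Hm C C' Cc. \<forall>a\<in>Hm C A A'. \<forall>a'\<in>Hm C A' A''. \<forall>\<alpha>\<in>Ex E Cc A.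
        EMp E C'' Cc A A'' (Cp C C'' C' Cc c c') (Cp C A A' A'' a' a) \<alpha>
          = EMp E C'' C' A' A'' c' a' (EMp E C' Cc A A' c a \<alpha>)) \<and>
     (\<forall>C'\<in>Ob C. \<forall>Cc\<in>Ob C. \<forall>A\<in>Ob C. \<forall>A'\<in>Ob C. \<forall>\<alpha>\<in>Ex E Cc A.
        (\<forall>c\<in>Hm C C' Cc. \<forall>c'\<in>Hm C C' Cc. \<forall>a\<in>Hm C A A'.
           EMp E C' Cc A A' (Ad C C' Cc c c') a \<alpha>
             = EAd E C' A' (EMp E C' Cc A A' c a \<alpha>) (EMp E C' Cc A A' c' a \<alpha>)) \<and>
        (\<forall>c\<in>Hm C C' Cc. \<forall>a\<in>Hm C A A'. \<forall>a'\<in>Hm C A A'.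
           EMp E C' Cc A A' c (Ad C A A' a a') \<alpha>
             = EAd E C' A' (EMp E C' Cc A A' c a \<alpha>) (EMp E C' Cc A A' c a' \<alpha>)))"

section \<open>(n+2)-term complexes X_0 \<rightarrow> ... \<rightarrow> X_{n+1} and their homotopy classes\<close>

type_synonym ('o,'m) cx = "(nat \<Rightarrow> 'o) \<times> (nat \<Rightarrow> 'm)"

definition is_cx :: "('o,'m) addcat \<Rightarrow> nat \<Rightarrow> (nat \<Rightarrow> 'o) \<Rightarrow> (nat \<Rightarrow> 'm) \<Rightarrow> bool" where
  "is_cx C n X d \<longleftrightarrow> (\<forall>i\<le>Suc n. X i \<in> Ob C) \<and> (\<forall>i\<le>n. d i \<in> Hm C (X i) (X (Suc i))) \<and>
     (\<forall>i<n. Cp C (X i) (X (Suc i)) (X (Suc (Suc i))) (d (Suc i)) (d i) = Zr C (X i) (X (Suc (Suc i))))"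

definition cxAC :: "('o,'m) addcat \<Rightarrow> nat \<Rightarrow> 'o \<Rightarrow> 'o \<Rightarrow> (nat \<Rightarrow> 'o) \<Rightarrow> (nat \<Rightarrow> 'm) \<Rightarrow> bool" where
  "cxAC C n A B X d \<longleftrightarrow> is_cx C n X d \<and> X 0 = A \<and> X (Suc n) = B"

definition is_cmor :: "('o,'m) addcat \<Rightarrow> nat \<Rightarrow> (nat \<Rightarrow> 'o) \<Rightarrow> (nat \<Rightarrow> 'm) \<Rightarrow> (nat \<Rightarrow> 'o) \<Rightarrow> (nat \<Rightarrow> 'm) \<Rightarrow> (nat \<Rightarrow> 'm) \<Rightarrow> bool" where
  "is_cmor C n X d Y d' f \<longleftrightarrow> (\<forall>i\<le>Suc n. f i \<in> Hm C (X i) (Y i)) \<and>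
     (\<forall>i\<le>n. Cp C (X i) (X (Suc i)) (Y (Suc i)) (f (Suc i)) (d i) = Cp C (X i) (Y i) (Y (Suc i)) (d' i) (f i))"

text \<open>f ~ g: f_i = g_i + d'_{i-1} phi_i + phi_{i+1} d_i (phi_0 = 0, phi_{n+2} = 0)\<close>
definition homotopic :: "('o,'m) addcat \<Rightarrow> nat \<Rightarrow> (nat \<Rightarrow> 'o) \<Rightarrow> (nat \<Rightarrow> 'm) \<Rightarrow> (nat \<Rightarrow> 'o) \<Rightarrow> (nat \<Rightarrow> 'm) \<Rightarrow> (nat \<Rightarrow> 'm) \<Rightarrow> (nat \<Rightarrow> 'm) \<Rightarrow> bool" where
  "homotopic C n X d Y d' f g \<longleftrightarrow> (\<exists>\<phi>.
     (\<forall>i. 1 \<le> i \<and> i \<le> Suc n \<longrightarrow> \<phi> i \<in> Hm C (X i) (Y (i - 1))) \<and>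
     (\<forall>i\<le>Suc n. f i = Ad C (X i) (Y i) (g i)
        (Ad C (X i) (Y i)
           (if i = 0 then Zr C (X i) (Y i) else Cp C (X i) (Y (i - 1)) (Y i) (d' (i - 1)) (\<phi> i))
           (if i = Suc n then Zr C (X i) (Y i) else Cp C (X i) (X (Suc i)) (Y i) (\<phi> (Suc i)) (d i)))))"

definition heq :: "('o,'m) addcat \<Rightarrow> nat \<Rightarrow> 'o \<Rightarrow> 'o \<Rightarrow> (nat \<Rightarrow> 'o) \<Rightarrow> (nat \<Rightarrow> 'm) \<Rightarrow> (nat \<Rightarrow> 'o) \<Rightarrow> (nat \<Rightarrow> 'm) \<Rightarrow> bool" where
  "heq C n A B X d Y d' \<longleftrightarrow> cxAC C n A B X d \<and> cxAC C n A B Y d' \<and>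
     (\<exists>f g. is_cmor C n X d Y d' f \<and> f 0 = Idn C A \<and> f (Suc n) = Idn C B \<and>
            is_cmor C n Y d' X d g \<and> g 0 = Idn C A \<and> g (Suc n) = Idn C B \<and>
            homotopic C n X d X d (\<lambda>i. Cp C (X i) (Y i) (X i) (g i) (f i)) (\<lambda>i. Idn C (X i)) \<and>
            homotopic C n Y d' Y d' (\<lambda>i. Cp C (Y i) (X i) (Y i) (f i) (g i)) (\<lambda>i. Idn C (Y i)))"

definition hclass :: "('o,'m) addcat \<Rightarrow> nat \<Rightarrow> 'o \<Rightarrow> 'o \<Rightarrow> (nat \<Rightarrow> 'o) \<Rightarrow> (nat \<Rightarrow> 'm) \<Rightarrow> ('o,'m) cx set" where
  "hclass C n A B X d = {(Y, d'). heq C n A B X d Y d'}"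

section \<open>n-exangles, realisations, mapping cones\<close>

definition nexangle :: "('o,'m) addcat \<Rightarrow> ('o,'m,'x) bifun \<Rightarrow> nat \<Rightarrow> (nat \<Rightarrow> 'o) \<Rightarrow> (nat \<Rightarrow> 'm) \<Rightarrow> 'x \<Rightarrow> bool" where
  "nexangle C E n X d \<delta> \<longleftrightarrow> is_cx C n X d \<and> \<delta> \<in> Ex E (X (Suc n)) (X 0) \<and>
     pullE C E (X n) (X (Suc n)) (X 0) (d n) \<delta> = EZr E (X n) (X 0) \<and>
     pushE C E (X (Suc n)) (X 0) (X 1) (d 0) \<delta> = EZr E (X (Suc n)) (X 1) \<and>
     (\<forall>W\<in>Ob C.
        (\<forall>i. 1 \<le> i \<and> i \<le> n \<longrightarrow> (\<forall>h\<in>Hm C W (X i).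
            Cp C W (X i) (X (Suc i)) (d i) h = Zr C W (X (Suc i)) \<longrightarrow>
            (\<exists>h'\<in>Hm C W (X (i - 1)). h = Cp C W (X (i - 1)) (X i) (d (i - 1)) h'))) \<and>
        (\<forall>h\<in>Hm C W (X (Suc n)).
            pullE C E W (X (Suc n)) (X 0) h \<delta> = EZr E W (X 0) \<longrightarrow>
            (\<exists>h'\<in>Hm C W (X n). h = Cp C W (X n) (X (Suc n)) (d n) h')) \<and>
        (\<forall>i. 1 \<le> i \<and> i \<le> n \<longrightarrow> (\<forall>h\<in>Hm C (X i) W.
            Cp C (X (i - 1)) (X i) W h (d (i - 1)) = Zr C (X (i - 1)) W \<longrightarrow>
            (\<exists>h'\<in>Hm C (X (Suc i)) W. h = Cp C (X i) (X (Suc i)) W h' (d i)))) \<and>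
        (\<forall>h\<in>Hm C (X 0) W.
            pushE C E (X (Suc n)) (X 0) W h \<delta> = EZr E (X (Suc n)) W \<longrightarrow>
            (\<exists>h'\<in>Hm C (X 1) W. h = Cp C (X 0) (X 1) W h' (d 0))))"

text \<open>s Cc A delta is the class s(delta) for delta in E(Cc,A)\<close>
definition is_realisation :: "('o,'m) addcat \<Rightarrow> ('o,'m,'x) bifun \<Rightarrow> nat \<Rightarrow> ('o \<Rightarrow> 'o \<Rightarrow> 'x \<Rightarrow> ('o,'m) cx set) \<Rightarrow> bool" where
  "is_realisation C E n s \<longleftrightarrow> (\<forall>Cc\<in>Ob C. \<forall>A\<in>Ob C. \<forall>\<delta>\<in>Ex E Cc A.
      \<exists>X d. cxAC C n A Cc X d \<and> s Cc A \<delta> = hclass C n A Cc X d)"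

text \<open>(M, dM) is a mapping cone of f : X \<rightarrow> Y (f_0 = 1):
  X_1 \<rightarrow> X_2 + Y_1 \<rightarrow> ... \<rightarrow> X_{n+1} + Y_n \<rightarrow> Y_{n+1}\<close>
definition is_cone :: "('o,'m) addcat \<Rightarrow> nat \<Rightarrow> (nat \<Rightarrow> 'o) \<Rightarrow> (nat \<Rightarrow> 'm) \<Rightarrow> (nat \<Rightarrow> 'o) \<Rightarrow> (nat \<Rightarrow> 'm) \<Rightarrow> (nat \<Rightarrow> 'm) \<Rightarrow> (nat \<Rightarrow> 'o) \<Rightarrow> (nat \<Rightarrow> 'm) \<Rightarrow> bool" where
  "is_cone C n X d Y d' f M dM \<longleftrightarrow> M 0 = X 1 \<and> M (Suc n) = Y (Suc n) \<and>
     (\<exists>i1 i2 p1 p2.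
        (\<forall>i. 1 \<le> i \<and> i \<le> n \<longrightarrow> is_biproduct C (X (Suc i)) (Y i) (M i) (i1 i) (i2 i) (p1 i) (p2 i)) \<and>
        dM 0 \<in> Hm C (M 0) (M 1) \<and>
        Ad C (X 1) (X 2) (Cp C (X 1) (M 1) (X 2) (p1 1) (dM 0)) (d 1) = Zr C (X 1) (X 2) \<and>
        Cp C (X 1) (M 1) (Y 1) (p2 1) (dM 0) = f 1 \<and>
        (\<forall>i. 1 \<le> i \<and> i < n \<longrightarrow>
           dM i \<in> Hm C (M i) (M (Suc i)) \<and>
           Ad C (X (Suc i)) (X (Suc (Suc i)))
             (Cp C (X (Suc i)) (M (Suc i)) (X (Suc (Suc i))) (p1 (Suc i))
                (Cp C (X (Suc i)) (M i) (M (Suc i)) (dM i) (i1 i))) (d (Suc i))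
             = Zr C (X (Suc i)) (X (Suc (Suc i))) \<and>
           Cp C (Y i) (M (Suc i)) (X (Suc (Suc i))) (p1 (Suc i))
             (Cp C (Y i) (M i) (M (Suc i)) (dM i) (i2 i)) = Zr C (Y i) (X (Suc (Suc i))) \<and>
           Cp C (X (Suc i)) (M (Suc i)) (Y (Suc i)) (p2 (Suc i))
             (Cp C (X (Suc i)) (M i) (M (Suc i)) (dM i) (i1 i)) = f (Suc i) \<and>
           Cp C (Y i) (M (Suc i)) (Y (Suc i)) (p2 (Suc i))
             (Cp C (Y i) (M i) (M (Suc i)) (dM i) (i2 i)) = d' i) \<and>
        dM n \<in> Hm C (M n) (M (Suc n)) \<and>
        Cp C (X (Suc n)) (M n) (Y (Suc n)) (dM n) (i1 n) = f (Suc n) \<and>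
        Cp C (Y n) (M n) (Y (Suc n)) (dM n) (i2 n) = d' n)"

text \<open>(M, dM) is a mapping cocone of g : Y \<rightarrow> X (g_{n+1} = 1):
  Y_0 \<rightarrow> Y_1 + X_0 \<rightarrow> ... \<rightarrow> Y_n + X_{n-1} \<rightarrow> X_n\<close>
definition is_cocone :: "('o,'m) addcat \<Rightarrow> nat \<Rightarrow> (nat \<Rightarrow> 'o) \<Rightarrow> (nat \<Rightarrow> 'm) \<Rightarrow> (nat \<Rightarrow> 'o) \<Rightarrow> (nat \<Rightarrow> 'm) \<Rightarrow> (nat \<Rightarrow> 'm) \<Rightarrow> (nat \<Rightarrow> 'o) \<Rightarrow> (nat \<Rightarrow> 'm) \<Rightarrow> bool" where
  "is_cocone C n Y d' X d g M dM \<longleftrightarrow> M 0 = Y 0 \<and> M (Suc n) = X n \<and>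
     (\<exists>i1 i2 p1 p2.
        (\<forall>i. 1 \<le> i \<and> i \<le> n \<longrightarrow> is_biproduct C (Y i) (X (i - 1)) (M i) (i1 i) (i2 i) (p1 i) (p2 i)) \<and>
        dM 0 \<in> Hm C (M 0) (M 1) \<and>
        Ad C (Y 0) (Y 1) (Cp C (Y 0) (M 1) (Y 1) (p1 1) (dM 0)) (d' 0) = Zr C (Y 0) (Y 1) \<and>
        Cp C (Y 0) (M 1) (X 0) (p2 1) (dM 0) = g 0 \<and>
        (\<forall>i. 1 \<le> i \<and> i < n \<longrightarrow>
           dM i \<in> Hm C (M i) (M (Suc i)) \<and>
           Ad C (Y i) (Y (Suc i))
             (Cp C (Y i) (M (Suc i)) (Y (Suc i)) (p1 (Suc i))
                (Cp C (Y i) (M i) (M (Suc i)) (dM i) (i1 i))) (d' i)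
             = Zr C (Y i) (Y (Suc i)) \<and>
           Cp C (X (i - 1)) (M (Suc i)) (Y (Suc i)) (p1 (Suc i))
             (Cp C (X (i - 1)) (M i) (M (Suc i)) (dM i) (i2 i)) = Zr C (X (i - 1)) (Y (Suc i)) \<and>
           Cp C (Y i) (M (Suc i)) (X i) (p2 (Suc i))
             (Cp C (Y i) (M i) (M (Suc i)) (dM i) (i1 i)) = g i \<and>
           Cp C (X (i - 1)) (M (Suc i)) (X i) (p2 (Suc i))
             (Cp C (X (i - 1)) (M i) (M (Suc i)) (dM i) (i2 i)) = d (i - 1)) \<and>
        dM n \<in> Hm C (M n) (M (Suc n)) \<and>
        Cp C (Y n) (M n) (X n) (dM n) (i1 n) = g n \<and>
        Cp C (X (n - 1)) (M n) (X n) (dM n) (i2 n) = d (n - 1))"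

definition inflation :: "('o,'m) addcat \<Rightarrow> ('o,'m,'x) bifun \<Rightarrow> ('o \<Rightarrow> 'o \<Rightarrow> 'x \<Rightarrow> ('o,'m) cx set) \<Rightarrow> 'o \<Rightarrow> 'o \<Rightarrow> 'm \<Rightarrow> bool" where
  "inflation C E s A B f \<longleftrightarrow> (\<exists>Cc \<delta> X d. Cc \<in> Ob C \<and> \<delta> \<in> Ex E Cc A \<and> (X, d) \<in> s Cc A \<delta> \<and> X 1 = B \<and> d 0 = f)"

definition deflation :: "('o,'m) addcat \<Rightarrow> ('o,'m,'x) bifun \<Rightarrow> ('o \<Rightarrow> 'o \<Rightarrow> 'x \<Rightarrow> ('o,'m) cx set) \<Rightarrow> nat \<Rightarrow> 'o \<Rightarrow> 'o \<Rightarrow> 'm \<Rightarrow> bool" where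
  "deflation C E s n B Cc g \<longleftrightarrow> (\<exists>A \<delta> X d. A \<in> Ob C \<and> \<delta> \<in> Ex E Cc A \<and> (X, d) \<in> s Cc A \<delta> \<and> X n = B \<and> d n = g)"

definition is_nexangulated :: "('o,'m) addcat \<Rightarrow> ('o,'m,'x) bifun \<Rightarrow> ('o \<Rightarrow> 'o \<Rightarrow> 'x \<Rightarrow> ('o,'m) cx set) \<Rightarrow> nat \<Rightarrow> bool" where
  "is_nexangulated C E s n \<longleftrightarrow> 1 \<le> n \<and> is_additive C \<and> is_biadditive C E \<and> is_realisation C E n s \<and>
     \<comment> \<open>(R0)\<close>
     (\<forall>A\<in>Ob C. \<forall>B\<in>Ob C. \<forall>Cc\<in>Ob C. \<forall>D\<in>Ob C. \<forall>\<delta>\<in>Ex E Cc A. \<forall>\<rho>\<in>Ex E D B.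
      \<forall>a\<in>Hm C A B. \<forall>c\<in>Hm C Cc D.
        pushE C E Cc A B a \<delta> = pullE C E Cc D B c \<rho> \<longrightarrow>
        (\<forall>X d Y d'. (X, d) \<in> s Cc A \<delta> \<longrightarrow> (Y, d') \<in> s D B \<rho> \<longrightarrow>
           (\<exists>f. is_cmor C n X d Y d' f \<and> f 0 = a \<and> f (Suc n) = c))) \<and>
     \<comment> \<open>(R1)\<close>
     (\<forall>Cc\<in>Ob C. \<forall>A\<in>Ob C. \<forall>\<delta>\<in>Ex E Cc A. \<forall>X d. (X, d) \<in> s Cc A \<delta> \<longrightarrow> nexangle C E n X d \<delta>) \<and>
     \<comment> \<open>(R2)\<close>
     (\<forall>A\<in>Ob C. \<forall>Z. is_zero_obj C Z \<longrightarrow>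
        (let X = (\<lambda>i. if i \<le> 1 then A else Z) in
           (X, \<lambda>i. if i = 0 then Idn C A else Zr C (X i) (X (Suc i))) \<in> s Z A (EZr E Z A)) \<and>
        (let X = (\<lambda>i. if n \<le> i then A else Z) in
           (X, \<lambda>i. if i = n then Idn C A else Zr C (X i) (X (Suc i))) \<in> s A Z (EZr E A Z))) \<and>
     \<comment> \<open>(EA1)\<close>
     (\<forall>A\<in>Ob C. \<forall>B\<in>Ob C. \<forall>Cc\<in>Ob C. \<forall>f\<in>Hm C A B. \<forall>g\<in>Hm C B Cc.
        (inflation C E s A B f \<and> inflation C E s B Cc g \<longrightarrow> inflation C E s A Cc (Cp C A B Cc g f)) \<and>
        (deflation C E s n A B f \<and> deflation C E s n B Cc g \<longrightarrow> deflation C E s n A Cc (Cp C A B Cc g f))) \<and>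
     \<comment> \<open>(EA2)\<close>
     (\<forall>A\<in>Ob C. \<forall>Cc\<in>Ob C. \<forall>D\<in>Ob C. \<forall>\<rho>\<in>Ex E D A. \<forall>c\<in>Hm C Cc D. \<forall>X d Y d'.
        (X, d) \<in> s Cc A (pullE C E Cc D A c \<rho>) \<longrightarrow> (Y, d') \<in> s D A \<rho> \<longrightarrow>
        (\<exists>f. is_cmor C n X d Y d' f \<and> f 0 = Idn C A \<and> f (Suc n) = c \<and>
           (\<exists>M dM. is_cone C n X d Y d' f M dM \<and>
              (M, dM) \<in> s D (X 1) (pushE C E D A (X 1) (d 0) \<rho>)))) \<and>
     \<comment> \<open>(EA2op)\<close>
     (\<forall>A\<in>Ob C. \<forall>B\<in>Ob C. \<forall>Cc\<in>Ob C. \<forall>\<rho>\<in>Ex E Cc A. \<forall>a\<in>Hm C A B. \<forall>X d Y d'.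
        (X, d) \<in> s Cc B (pushE C E Cc A B a \<rho>) \<longrightarrow> (Y, d') \<in> s Cc A \<rho> \<longrightarrow>
        (\<exists>g. is_cmor C n Y d' X d g \<and> g 0 = a \<and> g (Suc n) = Idn C Cc \<and>
           (\<exists>M dM. is_cocone C n Y d' X d g M dM \<and>
              (M, dM) \<in> s (X n) A (pullE C E (X n) Cc A (d n) \<rho>))))"

section \<open>n-exangulated functors\<close>

definition is_add_functor :: "('o,'m) addcat \<Rightarrow> ('p,'q) addcat \<Rightarrow> ('o \<Rightarrow> 'p) \<Rightarrow> ('o \<Rightarrow> 'o \<Rightarrow> 'm \<Rightarrow> 'q) \<Rightarrow> bool" where
  "is_add_functor C D Fo Fm \<longleftrightarrow>
     (\<forall>X\<in>Ob C. Fo X \<in> Ob D) \<and>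
     (\<forall>X\<in>Ob C. \<forall>Y\<in>Ob C. \<forall>f\<in>Hm C X Y. Fm X Y f \<in> Hm D (Fo X) (Fo Y)) \<and>
     (\<forall>X\<in>Ob C. Fm X X (Idn C X) = Idn D (Fo X)) \<and>
     (\<forall>X\<in>Ob C. \<forall>Y\<in>Ob C. \<forall>Z\<in>Ob C. \<forall>f\<in>Hm C X Y. \<forall>g\<in>Hm C Y Z.
        Fm X Z (Cp C X Y Z g f) = Cp D (Fo X) (Fo Y) (Fo Z) (Fm Y Z g) (Fm X Y f)) \<and>
     (\<forall>X\<in>Ob C. \<forall>Y\<in>Ob C. \<forall>f\<in>Hm C X Y. \<forall>g\<in>Hm C X Y.
        Fm X Y (Ad C X Y f g) = Ad D (Fo X) (Fo Y) (Fm X Y f) (Fm X Y g))"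

definition is_nat_trans :: "('o,'m) addcat \<Rightarrow> ('o,'m,'x) bifun \<Rightarrow> ('p,'q) addcat \<Rightarrow> ('p,'q,'y) bifun \<Rightarrow> ('o \<Rightarrow> 'p) \<Rightarrow> ('o \<Rightarrow> 'o \<Rightarrow> 'm \<Rightarrow> 'q) \<Rightarrow> ('o \<Rightarrow> 'o \<Rightarrow> 'x \<Rightarrow> 'y) \<Rightarrow> bool" where
  "is_nat_trans C E D F Fo Fm \<Gamma> \<longleftrightarrow>
     (\<forall>Cc\<in>Ob C. \<forall>A\<in>Ob C. \<Gamma> Cc A \<in> hom (ext_group E Cc A) (ext_group F (Fo Cc) (Fo A))) \<and>
     (\<forall>C'\<in>Ob C. \<forall>Cc\<in>Ob C. \<forall>A\<in>Ob C. \<forall>A'\<in>Ob C. \<forall>c\<in>Hm C C' Cc. \<forall>a\<in>Hm C A A'. \<forall>\<alpha>\<in>Ex E Cc A.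
        \<Gamma> C' A' (EMp E C' Cc A A' c a \<alpha>)
          = EMp F (Fo C') (Fo Cc) (Fo A) (Fo A') (Fm C' Cc c) (Fm A A' a) (\<Gamma> Cc A \<alpha>))"

definition is_nexfun :: "('o,'m) addcat \<Rightarrow> ('o,'m,'x) bifun \<Rightarrow> ('o \<Rightarrow> 'o \<Rightarrow> 'x \<Rightarrow> ('o,'m) cx set) \<Rightarrow>
    ('p,'q) addcat \<Rightarrow> ('p,'q,'y) bifun \<Rightarrow> ('p \<Rightarrow> 'p \<Rightarrow> 'y \<Rightarrow> ('p,'q) cx set) \<Rightarrow> nat \<Rightarrow>
    ('o \<Rightarrow> 'p) \<Rightarrow> ('o \<Rightarrow> 'o \<Rightarrow> 'm \<Rightarrow> 'q) \<Rightarrow> ('o \<Rightarrow> 'o \<Rightarrow> 'x \<Rightarrow> 'y) \<Rightarrow> bool" where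
  "is_nexfun C E s D F t n Fo Fm \<Gamma> \<longleftrightarrow> is_add_functor C D Fo Fm \<and> is_nat_trans C E D F Fo Fm \<Gamma> \<and>
     (\<forall>Cc\<in>Ob C. \<forall>A\<in>Ob C. \<forall>\<delta>\<in>Ex E Cc A. \<forall>X d. (X, d) \<in> s Cc A \<delta> \<longrightarrow>
        t (Fo Cc) (Fo A) (\<Gamma> Cc A \<delta>)
          = hclass D n (Fo A) (Fo Cc) (\<lambda>i. Fo (X i)) (\<lambda>i. Fm (X i) (X (Suc i)) (d i)))"

section \<open>Idempotent completion\<close>

definition ic :: "('o,'m) addcat \<Rightarrow> ('o \<times> 'm, 'm \<times> 'm \<times> 'm) addcat" where
  "ic C = \<lparr>
     Ob = {(X, e). X \<in> Ob C \<and> e \<in> Hm C X X \<and> Cp C X X X e e = e},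
     Hm = (\<lambda>(X, eX) (Y, eY).
             if (X, eX) \<in> {(X, e). X \<in> Ob C \<and> e \<in> Hm C X X \<and> Cp C X X X e e = e} \<and>
                (Y, eY) \<in> {(X, e). X \<in> Ob C \<and> e \<in> Hm C X X \<and> Cp C X X X e e = e}
             then {(eY, f, eX) | f. f \<in> Hm C X Y \<and> Cp C X X Y f eX = f \<and> Cp C X Y Y eY f = f}
             else {}),
     Cp = (\<lambda>(X, eX) (Y, eY) (Z, eZ) (a, g, b) (a', f, b'). (eZ, Cp C X Y Z g f, eX)),
     Idn = (\<lambda>(X, e). (e, e, e)),
     Ad = (\<lambda>(X, eX) (Y, eY) (a, f, b) (a', g, b'). (eY, Ad C X Y f g, eX)),
     Zr = (\<lambda>(X, eX) (Y, eY). (eY, Zr C X Y, eX)) \<rparr>"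

definition icE :: "('o,'m) addcat \<Rightarrow> ('o,'m,'x) bifun \<Rightarrow> ('o \<times> 'm, 'm \<times> 'm \<times> 'm, 'm \<times> 'x \<times> 'm) bifun" where
  "icE C E = \<lparr>
     Ex = (\<lambda>(Cc, eC) (A, eA).
             if (Cc, eC) \<in> Ob (ic C) \<and> (A, eA) \<in> Ob (ic C)
             then {(eA, \<alpha>, eC) | \<alpha>. \<alpha> \<in> Ex E Cc A \<and> pushE C E Cc A A eA \<alpha> = \<alpha> \<and> pullE C E Cc Cc A eC \<alpha> = \<alpha>}
             else {}),
     EAd = (\<lambda>(Cc, eC) (A, eA) (x, \<alpha>, y) (x', \<beta>, y'). (eA, EAd E Cc A \<alpha> \<beta>, eC)),
     EZr = (\<lambda>(Cc, eC) (A, eA). (eA, EZr E Cc A, eC)),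
     EMp = (\<lambda>(C', eC') (Cc, eC) (A, eA) (A', eA') (x, c, y) (x', a, y') (u, \<alpha>, v).
              (x', EMp E C' Cc A A' c a \<alpha>, y)) \<rparr>"

definition lift_cx :: "('o,'m) addcat \<Rightarrow> (nat \<Rightarrow> 'o) \<Rightarrow> (nat \<Rightarrow> 'm) \<Rightarrow> (nat \<Rightarrow> 'm) \<Rightarrow> ('o \<times> 'm, 'm \<times> 'm \<times> 'm) cx" where
  "lift_cx C X d e = (\<lambda>i. (X i, e i), \<lambda>i. (e (Suc i), Cp C (X i) (X (Suc i)) (X (Suc i)) (e (Suc i)) (d i), e i))"

text \<open>s~(e_A, alpha, e_C): the homotopy classes of (X, e) for X in s(alpha) and e an idempotent
  endomorphism of X with e_0 = e_A, e_{n+1} = e_C (union over all such choices)\<close>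
definition ics :: "('o,'m) addcat \<Rightarrow> ('o \<Rightarrow> 'o \<Rightarrow> 'x \<Rightarrow> ('o,'m) cx set) \<Rightarrow> nat \<Rightarrow>
    ('o \<times> 'm) \<Rightarrow> ('o \<times> 'm) \<Rightarrow> ('m \<times> 'x \<times> 'm) \<Rightarrow> ('o \<times> 'm, 'm \<times> 'm \<times> 'm) cx set" where
  "ics C s n = (\<lambda>(Cc, eC) (A, eA) (x, \<alpha>, y).
     {Z. \<exists>X d e. (X, d) \<in> s Cc A \<alpha> \<and> is_cmor C n X d X d e \<and>
          (\<forall>i\<le>Suc n. Cp C (X i) (X i) (X i) (e i) (e i) = e i) \<and>
          e 0 = eA \<and> e (Suc n) = eC \<and>
          heq (ic C) n (A, eA) (Cc, eC) (fst (lift_cx C X d e)) (snd (lift_cx C X d e)) (fst Z) (snd Z)})"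

definition icFo :: "('o \<Rightarrow> 'p) \<Rightarrow> ('o \<Rightarrow> 'o \<Rightarrow> 'm \<Rightarrow> 'q) \<Rightarrow> ('o \<times> 'm) \<Rightarrow> ('p \<times> 'q)" where
  "icFo Fo Fm = (\<lambda>(X, e). (Fo X, Fm X X e))"

definition icFm :: "('o \<Rightarrow> 'o \<Rightarrow> 'm \<Rightarrow> 'q) \<Rightarrow> ('o \<times> 'm) \<Rightarrow> ('o \<times> 'm) \<Rightarrow> ('m \<times> 'm \<times> 'm) \<Rightarrow> ('q \<times> 'q \<times> 'q)" where
  "icFm Fm = (\<lambda>(X, eX) (Y, eY) (a, f, b). (Fm Y Y a, Fm X Y f, Fm X X b))"

definition ic\<Gamma> :: "('o \<Rightarrow> 'o \<Rightarrow> 'm \<Rightarrow> 'q) \<Rightarrow> ('o \<Rightarrow> 'o \<Rightarrow> 'x \<Rightarrow> 'y) \<Rightarrow> ('o \<times> 'm) \<Rightarrow> ('o \<times> 'm) \<Rightarrow> ('m \<times> 'x \<times> 'm) \<Rightarrow> ('q \<times> 'y \<times> 'q)" where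
  "ic\<Gamma> Fm \<Gamma> = (\<lambda>(Cc, eC) (A, eA) (x, \<alpha>, y). (Fm A A x, \<Gamma> Cc A \<alpha>, Fm Cc Cc y))"

end

theory Submission
  imports Defs
begin

(* A realisation in the idempotent completion is the homotopy class of the lift (X, e) of a
   realisation X of C along an idempotent chain endomorphism e. The functor maps such a lift to
   the lift of F X along F e, and F X lies in the realisation class of Gamma alpha; so everything
   reduces to the independence of the choices: if X and Y are homotopy equivalent, X is exact
   under every Hom(-, W), and e, e' are idempotent chain endomorphisms of X and Y agreeing at the
   ends, then (X, e) and (Y, e') are homotopy equivalent.
   For this let f, g be mutually inverse homotopy equivalences. Then u = e' f e and v = e g e' are
   inverse up to maps 1 + N and 1 + M, where N and M factor through w = e' f - f e, which vanishes
   at both ends. Exactness makes w null-homotopic in all degrees but the top one, which suffices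
   for N^2 and M^2 to be null-homotopic; so 1 + N and 1 + M are invertible up to homotopy and u is
   a homotopy equivalence. *)

section \<open>Preadditive categories\<close>

locale preadditive =
  fixes C :: "('o,'m) addcat"
  assumes preadd: "is_preadditive C"
begin

lemma is_cat: "is_category C"
  using preadd unfolding is_preadditive_def by blast

lemma Hm_Ob: "f \<in> Hm C X Y \<Longrightarrow> X \<in> Ob C \<and> Y \<in> Ob C"
  using is_cat unfolding is_category_def by blast

lemma Idn_Hm[simp]: "X \<in> Ob C \<Longrightarrow> Idn C X \<in> Hm C X X"
  using is_cat unfolding is_category_def by blast

lemma Cp_Hm[simp]: "f \<in> Hm C X Y \<Longrightarrow> g \<in> Hm C Y Z \<Longrightarrow> Cp C X Y Z g f \<in> Hm C X Z"
  using is_cat Hm_Ob unfolding is_category_def by metis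

lemma Cp_assoc: "f \<in> Hm C X Y \<Longrightarrow> g \<in> Hm C Y Z \<Longrightarrow> h \<in> Hm C Z W \<Longrightarrow>
   Cp C X Z W h (Cp C X Y Z g f) = Cp C X Y W (Cp C Y Z W h g) f"
  using is_cat Hm_Ob unfolding is_category_def by metis

lemma Cp_Idn_left[simp]: "f \<in> Hm C X Y \<Longrightarrow> Cp C X Y Y (Idn C Y) f = f"
  using is_cat Hm_Ob unfolding is_category_def by metis

lemma Cp_Idn_right[simp]: "f \<in> Hm C X Y \<Longrightarrow> Cp C X X Y f (Idn C X) = f"
  using is_cat Hm_Ob unfolding is_category_def by metis

lemma hom_comm_group: "X \<in> Ob C \<Longrightarrow> Y \<in> Ob C \<Longrightarrow> comm_group (hom_group C X Y)"
  using preadd unfolding is_preadditive_def by blast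

lemma hom_comm_group_of: "f \<in> Hm C X Y \<Longrightarrow> comm_group (hom_group C X Y)"
  using hom_comm_group Hm_Ob by blast

lemma hom_group_simps[simp]:
  "carrier (hom_group C X Y) = Hm C X Y" "mult (hom_group C X Y) = Ad C X Y"
  "one (hom_group C X Y) = Zr C X Y"
  by (simp_all add: hom_group_def)

definition neg :: "'o \<Rightarrow> 'o \<Rightarrow> 'm \<Rightarrow> 'm" where
  "neg X Y f = inv\<^bsub>hom_group C X Y\<^esub> f"

lemma Zr_Hm[simp]: "X \<in> Ob C \<Longrightarrow> Y \<in> Ob C \<Longrightarrow> Zr C X Y \<in> Hm C X Y"
  using monoid.one_closed[OF group.is_monoid[OF comm_group.axioms(2)[OF hom_comm_group]]] by simp

context
  fixes X Y f
  assumes f: "f \<in> Hm C X Y"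
begin

interpretation comm_group "hom_group C X Y"
  using hom_comm_group_of[OF f] .

lemma Ad_Hm[simp]: "g \<in> Hm C X Y \<Longrightarrow> Ad C X Y f g \<in> Hm C X Y"
  using m_closed f by simp

lemma neg_Hm[simp]: "neg X Y f \<in> Hm C X Y"
  using inv_closed f by (simp add: neg_def)

lemma Ad_assoc:
  "g \<in> Hm C X Y \<Longrightarrow> h \<in> Hm C X Y \<Longrightarrow> Ad C X Y (Ad C X Y f g) h = Ad C X Y f (Ad C X Y g h)"
  using m_assoc f by simp

lemma Ad_commute: "g \<in> Hm C X Y \<Longrightarrow> Ad C X Y f g = Ad C X Y g f"
  using m_comm f by simp

lemma Ad_left_commute:
  "g \<in> Hm C X Y \<Longrightarrow> h \<in> Hm C X Y \<Longrightarrow> Ad C X Y f (Ad C X Y g h) = Ad C X Y g (Ad C X Y f h)"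
  using m_lcomm f by simp

lemma Ad_Zr_left[simp]: "Ad C X Y (Zr C X Y) f = f"
  using l_one f by simp

lemma Ad_Zr_right[simp]: "Ad C X Y f (Zr C X Y) = f"
  using r_one f by simp

lemma Ad_neg_right[simp]: "Ad C X Y f (neg X Y f) = Zr C X Y"
  using r_inv f by (simp add: neg_def)

lemma Ad_neg_left[simp]: "Ad C X Y (neg X Y f) f = Zr C X Y"
  using l_inv f by (simp add: neg_def)

lemma Ad_left_cancel:
  "g \<in> Hm C X Y \<Longrightarrow> h \<in> Hm C X Y \<Longrightarrow> Ad C X Y f g = Ad C X Y f h \<Longrightarrow> g = h"
  using Units_l_cancel f by (simp add: Units_eq)

lemma neg_Ad: "g \<in> Hm C X Y \<Longrightarrow> neg X Y (Ad C X Y f g) = Ad C X Y (neg X Y f) (neg X Y g)"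
  using inv_mult f by (simp add: neg_def)

end

lemma Ad_neg_cancel_left[simp]:
  "f \<in> Hm C X Y \<Longrightarrow> g \<in> Hm C X Y \<Longrightarrow> Ad C X Y f (Ad C X Y (neg X Y f) g) = g"
  by (simp flip: Ad_assoc)

lemma Ad_neg_cancel_left'[simp]:
  "f \<in> Hm C X Y \<Longrightarrow> g \<in> Hm C X Y \<Longrightarrow> Ad C X Y (neg X Y f) (Ad C X Y f g) = g"
  by (simp flip: Ad_assoc)

lemma Ad_neg_cancel_right[simp]:
  "f \<in> Hm C X Y \<Longrightarrow> g \<in> Hm C X Y \<Longrightarrow> Ad C X Y f (Ad C X Y g (neg X Y f)) = g"
  by (simp add: Ad_commute[of g X Y])

lemma neg_unique:
  "f \<in> Hm C X Y \<Longrightarrow> g \<in> Hm C X Y \<Longrightarrow> Ad C X Y f g = Zr C X Y \<Longrightarrow> g = neg X Y f"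
  using Ad_left_cancel[of f X Y g "neg X Y f"] by simp

lemma neg_neg[simp]: "f \<in> Hm C X Y \<Longrightarrow> neg X Y (neg X Y f) = f"
  using neg_unique[of "neg X Y f" X Y f] by simp

lemma neg_Zr[simp]: "X \<in> Ob C \<Longrightarrow> Y \<in> Ob C \<Longrightarrow> neg X Y (Zr C X Y) = Zr C X Y"
  using neg_unique[of "Zr C X Y" X Y "Zr C X Y"] by simp

lemma Ad_swap_middle:
  "a \<in> Hm C X Y \<Longrightarrow> b \<in> Hm C X Y \<Longrightarrow> c \<in> Hm C X Y \<Longrightarrow> e \<in> Hm C X Y \<Longrightarrow>
   Ad C X Y (Ad C X Y a b) (Ad C X Y c e) = Ad C X Y (Ad C X Y a c) (Ad C X Y b e)"
  by (simp add: Ad_assoc Ad_left_commute[of b X Y c])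

lemma Cp_Ad_right: "f \<in> Hm C X Y \<Longrightarrow> f' \<in> Hm C X Y \<Longrightarrow> g \<in> Hm C Y Z \<Longrightarrow>
   Cp C X Y Z g (Ad C X Y f f') = Ad C X Z (Cp C X Y Z g f) (Cp C X Y Z g f')"
  using preadd Hm_Ob[of f X Y] Hm_Ob[of g Y Z] unfolding is_preadditive_def by blast

lemma Cp_Ad_left: "f \<in> Hm C X Y \<Longrightarrow> g \<in> Hm C Y Z \<Longrightarrow> g' \<in> Hm C Y Z \<Longrightarrow>
   Cp C X Y Z (Ad C Y Z g g') f = Ad C X Z (Cp C X Y Z g f) (Cp C X Y Z g' f)"
  using preadd Hm_Ob[of f X Y] Hm_Ob[of g Y Z] unfolding is_preadditive_def by blast

lemma Cp_Zr_right[simp]: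
  assumes X: "X \<in> Ob C" and g: "g \<in> Hm C Y Z"
  shows "Cp C X Y Z g (Zr C X Y) = Zr C X Z"
proof -
  have Y: "Y \<in> Ob C" "Z \<in> Ob C" using g Hm_Ob by auto
  have "Ad C X Z (Cp C X Y Z g (Zr C X Y)) (Cp C X Y Z g (Zr C X Y))
      = Ad C X Z (Cp C X Y Z g (Zr C X Y)) (Zr C X Z)"
    using Cp_Ad_right[of "Zr C X Y" X Y "Zr C X Y" g Z] X Y g by simp
  from Ad_left_cancel[OF _ _ _ this] show ?thesis using X Y g by simp
qed

lemma Cp_Zr_left[simp]:
  assumes f: "f \<in> Hm C X Y" and Z: "Z \<in> Ob C"
  shows "Cp C X Y Z (Zr C Y Z) f = Zr C X Z"
proof -
  have Y: "X \<in> Ob C" "Y \<in> Ob C" using f Hm_Ob by auto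
  have "Ad C X Z (Cp C X Y Z (Zr C Y Z) f) (Cp C X Y Z (Zr C Y Z) f)
      = Ad C X Z (Cp C X Y Z (Zr C Y Z) f) (Zr C X Z)"
    using Cp_Ad_left[of f X Y "Zr C Y Z" Z "Zr C Y Z"] Z Y f by simp
  from Ad_left_cancel[OF _ _ _ this] show ?thesis using Z Y f by simp
qed

lemma Cp_neg_right:
  assumes "f \<in> Hm C X Y" "g \<in> Hm C Y Z"
  shows "Cp C X Y Z g (neg X Y f) = neg X Z (Cp C X Y Z g f)"
  using assms Hm_Ob neg_unique[of "Cp C X Y Z g f" X Z "Cp C X Y Z g (neg X Y f)"]
  by (simp add: Cp_Ad_right[symmetric])

lemma Cp_neg_left:
  assumes "f \<in> Hm C X Y" "g \<in> Hm C Y Z"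
  shows "Cp C X Y Z (neg Y Z g) f = neg X Z (Cp C X Y Z g f)"
  using assms Hm_Ob neg_unique[of "Cp C X Y Z g f" X Z "Cp C X Y Z (neg Y Z g) f"]
  by (simp add: Cp_Ad_left[symmetric])

section \<open>Complexes, chain maps and homotopies\<close>

definition is_htpy :: "nat \<Rightarrow> (nat \<Rightarrow> 'o) \<Rightarrow> (nat \<Rightarrow> 'o) \<Rightarrow> (nat \<Rightarrow> 'm) \<Rightarrow> bool" where
  "is_htpy n X Y \<phi> \<longleftrightarrow> (\<forall>i. 1 \<le> i \<and> i \<le> Suc n \<longrightarrow> \<phi> i \<in> Hm C (X i) (Y (i - 1)))"

definition htpy_term :: "nat \<Rightarrow> (nat \<Rightarrow> 'o) \<Rightarrow> (nat \<Rightarrow> 'm) \<Rightarrow> (nat \<Rightarrow> 'o) \<Rightarrow> (nat \<Rightarrow> 'm) \<Rightarrow> (nat \<Rightarrow> 'm) \<Rightarrow> nat \<Rightarrow> 'm" where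
  "htpy_term n X d Y d' \<phi> i = Ad C (X i) (Y i)
           (if i = 0 then Zr C (X i) (Y i) else Cp C (X i) (Y (i - 1)) (Y i) (d' (i - 1)) (\<phi> i))
           (if i = Suc n then Zr C (X i) (Y i) else Cp C (X i) (X (Suc i)) (Y i) (\<phi> (Suc i)) (d i))"

lemma homotopic_iff: "homotopic C n X d Y d' f g \<longleftrightarrow>
   (\<exists>\<phi>. is_htpy n X Y \<phi> \<and> (\<forall>i\<le>Suc n. f i = Ad C (X i) (Y i) (g i) (htpy_term n X d Y d' \<phi> i)))"
  unfolding homotopic_def is_htpy_def htpy_term_def by simp

definition gmor :: "nat \<Rightarrow> (nat \<Rightarrow> 'o) \<Rightarrow> (nat \<Rightarrow> 'o) \<Rightarrow> (nat \<Rightarrow> 'm) \<Rightarrow> bool" where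
  "gmor n X Y f \<longleftrightarrow> (\<forall>i\<le>Suc n. f i \<in> Hm C (X i) (Y i))"

lemma cx_Ob: "is_cx C n X d \<Longrightarrow> i \<le> Suc n \<Longrightarrow> X i \<in> Ob C"
  unfolding is_cx_def by blast
lemma cx_diff_Hm: "is_cx C n X d \<Longrightarrow> i \<le> n \<Longrightarrow> d i \<in> Hm C (X i) (X (Suc i))"
  unfolding is_cx_def by blast
lemma cx_diff_diff: "is_cx C n X d \<Longrightarrow> i < n \<Longrightarrow>
   Cp C (X i) (X (Suc i)) (X (Suc (Suc i))) (d (Suc i)) (d i) = Zr C (X i) (X (Suc (Suc i)))"
  unfolding is_cx_def by blast

lemma cmor_gmor: "is_cmor C n X d Y d' f \<Longrightarrow> gmor n X Y f"
  unfolding is_cmor_def gmor_def by blast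
lemma gmor_Hm: "gmor n X Y f \<Longrightarrow> i \<le> Suc n \<Longrightarrow> f i \<in> Hm C (X i) (Y i)"
  unfolding gmor_def by blast
lemma cmor_commute: "is_cmor C n X d Y d' f \<Longrightarrow> i \<le> n \<Longrightarrow>
   Cp C (X i) (X (Suc i)) (Y (Suc i)) (f (Suc i)) (d i) = Cp C (X i) (Y i) (Y (Suc i)) (d' i) (f i)"
  unfolding is_cmor_def by blast
lemma is_htpy_Hm: "is_htpy n X Y \<phi> \<Longrightarrow> 1 \<le> i \<Longrightarrow> i \<le> Suc n \<Longrightarrow> \<phi> i \<in> Hm C (X i) (Y (i - 1))"
  unfolding is_htpy_def by blast

lemma htpy_term_Hm:
  assumes X: "is_cx C n X d" and Y: "is_cx C n Y d'" and h: "is_htpy n X Y \<phi>" and i: "i \<le> Suc n"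
  shows "htpy_term n X d Y d' \<phi> i \<in> Hm C (X i) (Y i)"
proof -
  have o: "X i \<in> Ob C" "Y i \<in> Ob C" using X Y i cx_Ob by auto
  have a: "(if i = 0 then Zr C (X i) (Y i) else Cp C (X i) (Y (i - 1)) (Y i) (d' (i - 1)) (\<phi> i)) \<in> Hm C (X i) (Y i)"
  proof (cases "i = 0")
    case False
    then have "d' (i - 1) \<in> Hm C (Y (i - 1)) (Y i)" using cx_diff_Hm[OF Y, of "i - 1"] i by simp
    then show ?thesis using False is_htpy_Hm[OF h, of i] i by simp
  qed (use o in simp)
  have b: "(if i = Suc n then Zr C (X i) (Y i) else Cp C (X i) (X (Suc i)) (Y i) (\<phi> (Suc i)) (d i)) \<in> Hm C (X i) (Y i)"
  proof (cases "i = Suc n")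
    case False
    then have "d i \<in> Hm C (X i) (X (Suc i))" using cx_diff_Hm[OF X, of i] i by simp
    then show ?thesis using False is_htpy_Hm[OF h, of "Suc i"] i by simp
  qed (use o in simp)
  show ?thesis unfolding htpy_term_def using a b by simp
qed

definition cadd :: "(nat \<Rightarrow> 'o) \<Rightarrow> (nat \<Rightarrow> 'o) \<Rightarrow> (nat \<Rightarrow> 'm) \<Rightarrow> (nat \<Rightarrow> 'm) \<Rightarrow> nat \<Rightarrow> 'm" where
  "cadd X Y f g = (\<lambda>i. Ad C (X i) (Y i) (f i) (g i))"
definition cneg :: "(nat \<Rightarrow> 'o) \<Rightarrow> (nat \<Rightarrow> 'o) \<Rightarrow> (nat \<Rightarrow> 'm) \<Rightarrow> nat \<Rightarrow> 'm" where
  "cneg X Y f = (\<lambda>i. neg (X i) (Y i) (f i))"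
definition czero :: "(nat \<Rightarrow> 'o) \<Rightarrow> (nat \<Rightarrow> 'o) \<Rightarrow> nat \<Rightarrow> 'm" where
  "czero X Y = (\<lambda>i. Zr C (X i) (Y i))"
definition ccomp :: "(nat \<Rightarrow> 'o) \<Rightarrow> (nat \<Rightarrow> 'o) \<Rightarrow> (nat \<Rightarrow> 'o) \<Rightarrow> (nat \<Rightarrow> 'm) \<Rightarrow> (nat \<Rightarrow> 'm) \<Rightarrow> nat \<Rightarrow> 'm" where
  "ccomp X Y Z g f = (\<lambda>i. Cp C (X i) (Y i) (Z i) (g i) (f i))"
definition cidn :: "(nat \<Rightarrow> 'o) \<Rightarrow> nat \<Rightarrow> 'm" where
  "cidn X = (\<lambda>i. Idn C (X i))"

definition hpost :: "(nat \<Rightarrow> 'o) \<Rightarrow> (nat \<Rightarrow> 'o) \<Rightarrow> (nat \<Rightarrow> 'o) \<Rightarrow> (nat \<Rightarrow> 'm) \<Rightarrow> (nat \<Rightarrow> 'm) \<Rightarrow> nat \<Rightarrow> 'm" where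
  "hpost X Y Z h \<phi> = (\<lambda>i. Cp C (X i) (Y (i - 1)) (Z (i - 1)) (h (i - 1)) (\<phi> i))"
definition hpre :: "(nat \<Rightarrow> 'o) \<Rightarrow> (nat \<Rightarrow> 'o) \<Rightarrow> (nat \<Rightarrow> 'o) \<Rightarrow> (nat \<Rightarrow> 'm) \<Rightarrow> (nat \<Rightarrow> 'm) \<Rightarrow> nat \<Rightarrow> 'm" where
  "hpre W X Y \<phi> k = (\<lambda>i. Cp C (W i) (X i) (Y (i - 1)) (\<phi> i) (k i))"
definition hadd :: "(nat \<Rightarrow> 'o) \<Rightarrow> (nat \<Rightarrow> 'o) \<Rightarrow> (nat \<Rightarrow> 'm) \<Rightarrow> (nat \<Rightarrow> 'm) \<Rightarrow> nat \<Rightarrow> 'm" where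
  "hadd X Y \<phi> \<psi> = (\<lambda>i. Ad C (X i) (Y (i - 1)) (\<phi> i) (\<psi> i))"
definition hneg :: "(nat \<Rightarrow> 'o) \<Rightarrow> (nat \<Rightarrow> 'o) \<Rightarrow> (nat \<Rightarrow> 'm) \<Rightarrow> nat \<Rightarrow> 'm" where
  "hneg X Y \<phi> = (\<lambda>i. neg (X i) (Y (i - 1)) (\<phi> i))"

lemma is_htpy_hadd: "is_htpy n X Y \<phi> \<Longrightarrow> is_htpy n X Y \<psi> \<Longrightarrow> is_htpy n X Y (hadd X Y \<phi> \<psi>)"
  unfolding is_htpy_def hadd_def by simp
lemma is_htpy_hneg: "is_htpy n X Y \<phi> \<Longrightarrow> is_htpy n X Y (hneg X Y \<phi>)"
  unfolding is_htpy_def hneg_def by simp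
lemma is_htpy_hpost: "is_htpy n X Y \<phi> \<Longrightarrow> gmor n Y Z h \<Longrightarrow> is_htpy n X Z (hpost X Y Z h \<phi>)"
  unfolding is_htpy_def hpost_def gmor_def
proof (intro allI impI)
  fix i assume a: "\<forall>i. 1 \<le> i \<and> i \<le> Suc n \<longrightarrow> \<phi> i \<in> Hm C (X i) (Y (i - 1))" "\<forall>i\<le>Suc n. h i \<in> Hm C (Y i) (Z i)"
    "1 \<le> i \<and> i \<le> Suc n"
  then have "i - 1 \<le> Suc n" by linarith
  then show "Cp C (X i) (Y (i - 1)) (Z (i - 1)) (h (i - 1)) (\<phi> i) \<in> Hm C (X i) (Z (i - 1))"
    using a by simp
qed
lemma is_htpy_hpre: "is_htpy n X Y \<phi> \<Longrightarrow> gmor n W X k \<Longrightarrow> is_htpy n W Y (hpre W X Y \<phi> k)"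
  unfolding is_htpy_def hpre_def gmor_def by simp
lemma is_htpy_zero: "is_cx C n X d \<Longrightarrow> is_cx C n Y d' \<Longrightarrow> is_htpy n X Y (\<lambda>i. Zr C (X i) (Y (i - 1)))"
  unfolding is_htpy_def
proof (intro allI impI)
  fix i assume a: "is_cx C n X d" "is_cx C n Y d'" "1 \<le> i \<and> i \<le> Suc n"
  then show "Zr C (X i) (Y (i - 1)) \<in> Hm C (X i) (Y (i - 1))"
  proof -
    have "i - 1 \<le> Suc n" using a(3) by linarith
    then show ?thesis using cx_Ob[OF a(1), of i] cx_Ob[OF a(2), of "i - 1"] a(3) by simp
  qed
qed

lemma degree_cases:
  assumes "i \<le> Suc n"
    and "i = 0 \<Longrightarrow> i \<noteq> Suc n \<Longrightarrow> P"
    and "i = Suc n \<Longrightarrow> i \<noteq> 0 \<Longrightarrow> P"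
    and "i \<noteq> 0 \<Longrightarrow> i \<noteq> Suc n \<Longrightarrow> i \<le> n \<Longrightarrow> P"
  shows P
  using assms by (cases "i = 0"; cases "i = Suc n") auto

lemma htpy_term_0: "htpy_term n X d Y d' \<phi> 0 =
   Ad C (X 0) (Y 0) (Zr C (X 0) (Y 0)) (Cp C (X 0) (X 1) (Y 0) (\<phi> 1) (d 0))"
  unfolding htpy_term_def by simp
lemma htpy_term_top: "htpy_term n X d Y d' \<phi> (Suc n) =
   Ad C (X (Suc n)) (Y (Suc n)) (Cp C (X (Suc n)) (Y n) (Y (Suc n)) (d' n) (\<phi> (Suc n))) (Zr C (X (Suc n)) (Y (Suc n)))"
  unfolding htpy_term_def by simp
lemma htpy_term_mid: "i \<noteq> 0 \<Longrightarrow> i \<noteq> Suc n \<Longrightarrow> htpy_term n X d Y d' \<phi> i =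
   Ad C (X i) (Y i) (Cp C (X i) (Y (i - 1)) (Y i) (d' (i - 1)) (\<phi> i)) (Cp C (X i) (X (Suc i)) (Y i) (\<phi> (Suc i)) (d i))"
  unfolding htpy_term_def by simp

lemma htpy_term_hadd:
  assumes X: "is_cx C n X d" and Y: "is_cx C n Y d'" and h1: "is_htpy n X Y \<phi>" and h2: "is_htpy n X Y \<psi>" and i: "i \<le> Suc n"
  shows "htpy_term n X d Y d' (hadd X Y \<phi> \<psi>) i = Ad C (X i) (Y i) (htpy_term n X d Y d' \<phi> i) (htpy_term n X d Y d' \<psi> i)"
  using i
proof (rule degree_cases)
  assume a: "i = 0" "i \<noteq> Suc n"
  have m: "\<phi> 1 \<in> Hm C (X 1) (Y 0)" "\<psi> 1 \<in> Hm C (X 1) (Y 0)" "d 0 \<in> Hm C (X 0) (X 1)"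
    using is_htpy_Hm[OF h1, of 1] is_htpy_Hm[OF h2, of 1] cx_diff_Hm[OF X, of 0] a by auto
  show ?thesis using a m by (simp add: htpy_term_0 hadd_def Cp_Ad_left)
next
  assume a: "i = Suc n" "i \<noteq> 0"
  have m: "\<phi> (Suc n) \<in> Hm C (X (Suc n)) (Y n)" "\<psi> (Suc n) \<in> Hm C (X (Suc n)) (Y n)" "d' n \<in> Hm C (Y n) (Y (Suc n))"
    using is_htpy_Hm[OF h1, of "Suc n"] is_htpy_Hm[OF h2, of "Suc n"] cx_diff_Hm[OF Y, of n] by auto
  show ?thesis using a m by (simp add: htpy_term_top hadd_def Cp_Ad_right)
next
  assume a: "i \<noteq> 0" "i \<noteq> Suc n" "i \<le> n"
  have m: "\<phi> i \<in> Hm C (X i) (Y (i - 1))" "\<psi> i \<in> Hm C (X i) (Y (i - 1))" "d' (i - 1) \<in> Hm C (Y (i - 1)) (Y i)"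
    "\<phi> (Suc i) \<in> Hm C (X (Suc i)) (Y i)" "\<psi> (Suc i) \<in> Hm C (X (Suc i)) (Y i)" "d i \<in> Hm C (X i) (X (Suc i))"
    using is_htpy_Hm[OF h1, of i] is_htpy_Hm[OF h2, of i] is_htpy_Hm[OF h1, of "Suc i"] is_htpy_Hm[OF h2, of "Suc i"]
      cx_diff_Hm[OF Y, of "i - 1"] cx_diff_Hm[OF X, of i] a by auto
  show ?thesis using a m by (simp add: htpy_term_mid hadd_def Cp_Ad_right Cp_Ad_left Ad_swap_middle)
qed

lemma htpy_term_hneg:
  assumes X: "is_cx C n X d" and Y: "is_cx C n Y d'" and h1: "is_htpy n X Y \<phi>" and i: "i \<le> Suc n"
  shows "htpy_term n X d Y d' (hneg X Y \<phi>) i = neg (X i) (Y i) (htpy_term n X d Y d' \<phi> i)"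
  using i
proof (rule degree_cases)
  assume a: "i = 0" "i \<noteq> Suc n"
  have m: "\<phi> 1 \<in> Hm C (X 1) (Y 0)" "d 0 \<in> Hm C (X 0) (X 1)"
    using is_htpy_Hm[OF h1, of 1] cx_diff_Hm[OF X, of 0] a by auto
  show ?thesis using a m by (simp add: htpy_term_0 hneg_def Cp_neg_left)
next
  assume a: "i = Suc n" "i \<noteq> 0"
  have m: "\<phi> (Suc n) \<in> Hm C (X (Suc n)) (Y n)" "d' n \<in> Hm C (Y n) (Y (Suc n))"
    using is_htpy_Hm[OF h1, of "Suc n"] cx_diff_Hm[OF Y, of n] by auto
  show ?thesis using a m by (simp add: htpy_term_top hneg_def Cp_neg_right)
next
  assume a: "i \<noteq> 0" "i \<noteq> Suc n" "i \<le> n"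
  have m: "\<phi> i \<in> Hm C (X i) (Y (i - 1))" "d' (i - 1) \<in> Hm C (Y (i - 1)) (Y i)"
    "\<phi> (Suc i) \<in> Hm C (X (Suc i)) (Y i)" "d i \<in> Hm C (X i) (X (Suc i))"
    using is_htpy_Hm[OF h1, of i] is_htpy_Hm[OF h1, of "Suc i"]
      cx_diff_Hm[OF Y, of "i - 1"] cx_diff_Hm[OF X, of i] a by auto
  show ?thesis using a m by (simp add: htpy_term_mid hneg_def Cp_neg_right Cp_neg_left neg_Ad)
qed

lemma htpy_term_zero:
  assumes X: "is_cx C n X d" and Y: "is_cx C n Y d'" and i: "i \<le> Suc n"
  shows "htpy_term n X d Y d' (\<lambda>i. Zr C (X i) (Y (i - 1))) i = Zr C (X i) (Y i)"
  using i
proof (rule degree_cases)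
  assume a: "i = 0" "i \<noteq> Suc n"
  have m: "d 0 \<in> Hm C (X 0) (X 1)" "Y 0 \<in> Ob C" using cx_diff_Hm[OF X, of 0] cx_Ob[OF Y, of 0] by auto
  show ?thesis using a m Hm_Ob by (simp add: htpy_term_0)
next
  assume a: "i = Suc n" "i \<noteq> 0"
  have m: "d' n \<in> Hm C (Y n) (Y (Suc n))" "X (Suc n) \<in> Ob C" using cx_diff_Hm[OF Y, of n] cx_Ob[OF X, of "Suc n"] by auto
  show ?thesis using a m Hm_Ob by (simp add: htpy_term_top)
next
  assume a: "i \<noteq> 0" "i \<noteq> Suc n" "i \<le> n"
  have m: "d' (i - 1) \<in> Hm C (Y (i - 1)) (Y i)" "d i \<in> Hm C (X i) (X (Suc i))"
    using cx_diff_Hm[OF Y, of "i - 1"] cx_diff_Hm[OF X, of i] a by auto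
  show ?thesis using a m Hm_Ob by (simp add: htpy_term_mid)
qed

lemma htpy_term_post:
  assumes X: "is_cx C n X d" and Y: "is_cx C n Y d'" and Z: "is_cx C n Z d''" and h1: "is_htpy n X Y \<phi>"
    and hm: "is_cmor C n Y d' Z d'' h" and i: "i \<le> Suc n"
  shows "Cp C (X i) (Y i) (Z i) (h i) (htpy_term n X d Y d' \<phi> i) = htpy_term n X d Z d'' (hpost X Y Z h \<phi>) i"
  using i
proof (rule degree_cases)
  assume a: "i = 0" "i \<noteq> Suc n"
  have m: "\<phi> 1 \<in> Hm C (X 1) (Y 0)" "d 0 \<in> Hm C (X 0) (X 1)" "h 0 \<in> Hm C (Y 0) (Z 0)"
    using is_htpy_Hm[OF h1, of 1] cx_diff_Hm[OF X, of 0] gmor_Hm[OF cmor_gmor[OF hm], of 0] a by auto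
  show ?thesis using a m by (simp add: htpy_term_0 hpost_def Cp_assoc)
next
  assume a: "i = Suc n" "i \<noteq> 0"
  have m: "\<phi> (Suc n) \<in> Hm C (X (Suc n)) (Y n)" "d' n \<in> Hm C (Y n) (Y (Suc n))"
    "h n \<in> Hm C (Y n) (Z n)" "h (Suc n) \<in> Hm C (Y (Suc n)) (Z (Suc n))" "d'' n \<in> Hm C (Z n) (Z (Suc n))"
    using is_htpy_Hm[OF h1, of "Suc n"] cx_diff_Hm[OF Y, of n] cx_diff_Hm[OF Z, of n] gmor_Hm[OF cmor_gmor[OF hm], of n]
     gmor_Hm[OF cmor_gmor[OF hm], of "Suc n"] by auto
  have c: "Cp C (Y n) (Y (Suc n)) (Z (Suc n)) (h (Suc n)) (d' n) = Cp C (Y n) (Z n) (Z (Suc n)) (d'' n) (h n)"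
    using cmor_commute[OF hm, of n] by simp
  show ?thesis using a m Hm_Ob[OF m(1)] by (simp add: htpy_term_top hpost_def Cp_assoc c)
next
  assume a: "i \<noteq> 0" "i \<noteq> Suc n" "i \<le> n"
  then obtain j where j: "i = Suc j" by (cases i) auto
  have m: "\<phi> (Suc j) \<in> Hm C (X (Suc j)) (Y j)" "d' j \<in> Hm C (Y j) (Y (Suc j))"
    "\<phi> (Suc (Suc j)) \<in> Hm C (X (Suc (Suc j))) (Y (Suc j))" "d (Suc j) \<in> Hm C (X (Suc j)) (X (Suc (Suc j)))"
    "h j \<in> Hm C (Y j) (Z j)" "h (Suc j) \<in> Hm C (Y (Suc j)) (Z (Suc j))" "d'' j \<in> Hm C (Z j) (Z (Suc j))"
    using is_htpy_Hm[OF h1, of i] is_htpy_Hm[OF h1, of "Suc i"] gmor_Hm[OF cmor_gmor[OF hm], of i] gmor_Hm[OF cmor_gmor[OF hm], of "i - 1"]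
      cx_diff_Hm[OF Y, of "i - 1"] cx_diff_Hm[OF Z, of "i - 1"] cx_diff_Hm[OF X, of i] a j by auto
  have c: "Cp C (Y j) (Y (Suc j)) (Z (Suc j)) (h (Suc j)) (d' j) = Cp C (Y j) (Z j) (Z (Suc j)) (d'' j) (h j)"
    using cmor_commute[OF hm, of j] a j by simp
  show ?thesis using a m j by (simp add: htpy_term_mid hpost_def Cp_Ad_right Cp_assoc c)
qed

lemma htpy_term_pre:
  assumes W: "is_cx C n W dW" and X: "is_cx C n X d" and Y: "is_cx C n Y d'" and h1: "is_htpy n X Y \<phi>"
    and km: "is_cmor C n W dW X d k" and i: "i \<le> Suc n"
  shows "Cp C (W i) (X i) (Y i) (htpy_term n X d Y d' \<phi> i) (k i) = htpy_term n W dW Y d' (hpre W X Y \<phi> k) i"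
  using i
proof (rule degree_cases)
  assume a: "i = 0" "i \<noteq> Suc n"
  have m: "\<phi> 1 \<in> Hm C (X 1) (Y 0)" "d 0 \<in> Hm C (X 0) (X 1)" "k 0 \<in> Hm C (W 0) (X 0)"
    "k 1 \<in> Hm C (W 1) (X 1)" "dW 0 \<in> Hm C (W 0) (W 1)"
    using is_htpy_Hm[OF h1, of 1] cx_diff_Hm[OF X, of 0] cx_diff_Hm[OF W, of 0] gmor_Hm[OF cmor_gmor[OF km], of 0]
     gmor_Hm[OF cmor_gmor[OF km], of 1] a by auto
  have c: "Cp C (W 0) (W (Suc 0)) (X (Suc 0)) (k (Suc 0)) (dW 0) = Cp C (W 0) (X 0) (X (Suc 0)) (d 0) (k 0)"
    using cmor_commute[OF km, of 0] by simp
  show ?thesis using a m Hm_Ob[OF m(1)] by (simp add: htpy_term_0 hpre_def flip: Cp_assoc c)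
next
  assume a: "i = Suc n" "i \<noteq> 0"
  have m: "\<phi> (Suc n) \<in> Hm C (X (Suc n)) (Y n)" "d' n \<in> Hm C (Y n) (Y (Suc n))"
    "k (Suc n) \<in> Hm C (W (Suc n)) (X (Suc n))"
    using is_htpy_Hm[OF h1, of "Suc n"] cx_diff_Hm[OF Y, of n] gmor_Hm[OF cmor_gmor[OF km], of "Suc n"] by auto
  show ?thesis using a m Hm_Ob[OF m(1)] by (simp add: htpy_term_top hpre_def Cp_assoc)
next
  assume a: "i \<noteq> 0" "i \<noteq> Suc n" "i \<le> n"
  have m: "\<phi> i \<in> Hm C (X i) (Y (i - 1))" "d' (i - 1) \<in> Hm C (Y (i - 1)) (Y i)"
    "\<phi> (Suc i) \<in> Hm C (X (Suc i)) (Y i)" "d i \<in> Hm C (X i) (X (Suc i))"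
    "k i \<in> Hm C (W i) (X i)" "k (Suc i) \<in> Hm C (W (Suc i)) (X (Suc i))" "dW i \<in> Hm C (W i) (W (Suc i))"
    using is_htpy_Hm[OF h1, of i] is_htpy_Hm[OF h1, of "Suc i"] gmor_Hm[OF cmor_gmor[OF km], of i] gmor_Hm[OF cmor_gmor[OF km], of "Suc i"]
      cx_diff_Hm[OF Y, of "i - 1"] cx_diff_Hm[OF W, of i] cx_diff_Hm[OF X, of i] a by auto
  have c: "Cp C (W i) (W (Suc i)) (X (Suc i)) (k (Suc i)) (dW i) = Cp C (W i) (X i) (X (Suc i)) (d i) (k i)"
    using cmor_commute[OF km, of i] a by simp
  show ?thesis using a m by (simp add: htpy_term_mid hpre_def Cp_Ad_left flip: Cp_assoc c)
qed

lemma homotopicI: "is_htpy n X Y \<phi> \<Longrightarrow> (\<And>i. i \<le> Suc n \<Longrightarrow> f i = Ad C (X i) (Y i) (g i) (htpy_term n X d Y d' \<phi> i)) \<Longrightarrow>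
  homotopic C n X d Y d' f g"
  unfolding homotopic_iff by blast

lemma homotopicE: "homotopic C n X d Y d' f g \<Longrightarrow>
  (\<And>\<phi>. is_htpy n X Y \<phi> \<Longrightarrow> (\<And>i. i \<le> Suc n \<Longrightarrow> f i = Ad C (X i) (Y i) (g i) (htpy_term n X d Y d' \<phi> i)) \<Longrightarrow> P) \<Longrightarrow> P"
  unfolding homotopic_iff by blast

lemma homotopic_refl: "is_cx C n X d \<Longrightarrow> is_cx C n Y d' \<Longrightarrow> gmor n X Y f \<Longrightarrow> homotopic C n X d Y d' f f"
proof (rule homotopicI[OF is_htpy_zero], assumption+)
  fix i assume a: "is_cx C n X d" "is_cx C n Y d'" "gmor n X Y f" "i \<le> Suc n"
  have "htpy_term n X d Y d' (\<lambda>i. Zr C (X i) (Y (i - 1))) i = Zr C (X i) (Y i)" using htpy_term_zero a by blast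
  then show "f i = Ad C (X i) (Y i) (f i) (htpy_term n X d Y d' (\<lambda>i. Zr C (X i) (Y (i - 1))) i)"
    using gmor_Hm[OF a(3) a(4)] by simp
qed

lemma homotopic_sym:
  assumes X: "is_cx C n X d" and Y: "is_cx C n Y d'" and g: "gmor n X Y g" and h: "homotopic C n X d Y d' f g"
  shows "homotopic C n X d Y d' g f"
proof -
  obtain \<phi> where p: "is_htpy n X Y \<phi>" and e: "\<And>i. i \<le> Suc n \<Longrightarrow> f i = Ad C (X i) (Y i) (g i) (htpy_term n X d Y d' \<phi> i)"
    using h unfolding homotopic_iff by blast
  show ?thesis
  proof (rule homotopicI[OF is_htpy_hneg[OF p]])
    fix i assume i: "i \<le> Suc n"
    have m: "g i \<in> Hm C (X i) (Y i)" "htpy_term n X d Y d' \<phi> i \<in> Hm C (X i) (Y i)"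
      using gmor_Hm[OF g i] htpy_term_Hm[OF X Y p i] by auto
    show "g i = Ad C (X i) (Y i) (f i) (htpy_term n X d Y d' (hneg X Y \<phi>) i)"
      using m by (simp add: e[OF i] htpy_term_hneg[OF X Y p i] Ad_assoc)
  qed
qed

lemma homotopic_gmor: "is_cx C n X d \<Longrightarrow> is_cx C n Y d' \<Longrightarrow> gmor n X Y g \<Longrightarrow>
   homotopic C n X d Y d' f g \<Longrightarrow> gmor n X Y f"
  unfolding gmor_def by (auto elim!: homotopicE simp: htpy_term_Hm)

lemma homotopic_trans:
  assumes X: "is_cx C n X d" and Y: "is_cx C n Y d'" and h: "gmor n X Y h"
    and fg: "homotopic C n X d Y d' f g" and gh: "homotopic C n X d Y d' g h"
  shows "homotopic C n X d Y d' f h"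
proof -
  obtain \<phi> where p: "is_htpy n X Y \<phi>" and e: "\<And>i. i \<le> Suc n \<Longrightarrow> f i = Ad C (X i) (Y i) (g i) (htpy_term n X d Y d' \<phi> i)"
    using fg unfolding homotopic_iff by blast
  obtain \<psi> where q: "is_htpy n X Y \<psi>" and e2: "\<And>i. i \<le> Suc n \<Longrightarrow> g i = Ad C (X i) (Y i) (h i) (htpy_term n X d Y d' \<psi> i)"
    using gh unfolding homotopic_iff by blast
  show ?thesis
  proof (rule homotopicI[OF is_htpy_hadd[OF q p]])
    fix i assume i: "i \<le> Suc n"
    have m: "h i \<in> Hm C (X i) (Y i)" "htpy_term n X d Y d' \<phi> i \<in> Hm C (X i) (Y i)" "htpy_term n X d Y d' \<psi> i \<in> Hm C (X i) (Y i)"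
      using gmor_Hm[OF h i] htpy_term_Hm[OF X Y p i] htpy_term_Hm[OF X Y q i] by auto
    show "f i = Ad C (X i) (Y i) (h i) (htpy_term n X d Y d' (hadd X Y \<psi> \<phi>) i)"
      using m by (simp add: e[OF i] e2[OF i] htpy_term_hadd[OF X Y q p i] Ad_assoc)
  qed
qed

lemma homotopic_post:
  assumes X: "is_cx C n X d" and Y: "is_cx C n Y d'" and Z: "is_cx C n Z d''" and g: "gmor n X Y g"
    and hm: "is_cmor C n Y d' Z d'' h" and fg: "homotopic C n X d Y d' f g"
  shows "homotopic C n X d Z d'' (ccomp X Y Z h f) (ccomp X Y Z h g)"
proof -
  obtain \<phi> where p: "is_htpy n X Y \<phi>" and e: "\<And>i. i \<le> Suc n \<Longrightarrow> f i = Ad C (X i) (Y i) (g i) (htpy_term n X d Y d' \<phi> i)"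
    using fg unfolding homotopic_iff by blast
  show ?thesis
  proof (rule homotopicI[OF is_htpy_hpost[OF p cmor_gmor[OF hm]]])
    fix i assume i: "i \<le> Suc n"
    have m: "g i \<in> Hm C (X i) (Y i)" "htpy_term n X d Y d' \<phi> i \<in> Hm C (X i) (Y i)" "h i \<in> Hm C (Y i) (Z i)"
      using gmor_Hm[OF g i] htpy_term_Hm[OF X Y p i] gmor_Hm[OF cmor_gmor[OF hm] i] by auto
    show "ccomp X Y Z h f i = Ad C (X i) (Z i) (ccomp X Y Z h g i) (htpy_term n X d Z d'' (hpost X Y Z h \<phi>) i)"
      using m by (simp add: ccomp_def e[OF i] Cp_Ad_right htpy_term_post[OF X Y Z p hm i])
  qed
qed

lemma homotopic_pre:
  assumes W: "is_cx C n W dW" and X: "is_cx C n X d" and Y: "is_cx C n Y d'" and g: "gmor n X Y g"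
    and km: "is_cmor C n W dW X d k" and fg: "homotopic C n X d Y d' f g"
  shows "homotopic C n W dW Y d' (ccomp W X Y f k) (ccomp W X Y g k)"
proof -
  obtain \<phi> where p: "is_htpy n X Y \<phi>" and e: "\<And>i. i \<le> Suc n \<Longrightarrow> f i = Ad C (X i) (Y i) (g i) (htpy_term n X d Y d' \<phi> i)"
    using fg unfolding homotopic_iff by blast
  show ?thesis
  proof (rule homotopicI[OF is_htpy_hpre[OF p cmor_gmor[OF km]]])
    fix i assume i: "i \<le> Suc n"
    have m: "g i \<in> Hm C (X i) (Y i)" "htpy_term n X d Y d' \<phi> i \<in> Hm C (X i) (Y i)" "k i \<in> Hm C (W i) (X i)"
      using gmor_Hm[OF g i] htpy_term_Hm[OF X Y p i] gmor_Hm[OF cmor_gmor[OF km] i] by auto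
    show "ccomp W X Y f k i = Ad C (W i) (Y i) (ccomp W X Y g k i) (htpy_term n W dW Y d' (hpre W X Y \<phi> k) i)"
      using m by (simp add: ccomp_def e[OF i] Cp_Ad_left htpy_term_pre[OF W X Y p km i])
  qed
qed

lemma homotopic_add_right:
  assumes X: "is_cx C n X d" and Y: "is_cx C n Y d'" and g: "gmor n X Y g" and k: "gmor n X Y k"
    and fg: "homotopic C n X d Y d' f g"
  shows "homotopic C n X d Y d' (cadd X Y f k) (cadd X Y g k)"
proof -
  obtain \<phi> where p: "is_htpy n X Y \<phi>" and e: "\<And>i. i \<le> Suc n \<Longrightarrow> f i = Ad C (X i) (Y i) (g i) (htpy_term n X d Y d' \<phi> i)"
    using fg unfolding homotopic_iff by blast
  show ?thesis
  proof (rule homotopicI[OF p])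
    fix i assume i: "i \<le> Suc n"
    have m: "g i \<in> Hm C (X i) (Y i)" "htpy_term n X d Y d' \<phi> i \<in> Hm C (X i) (Y i)" "k i \<in> Hm C (X i) (Y i)"
      using gmor_Hm[OF g i] htpy_term_Hm[OF X Y p i] gmor_Hm[OF k i] by auto
    show "cadd X Y f k i = Ad C (X i) (Y i) (cadd X Y g k i) (htpy_term n X d Y d' \<phi> i)"
      using m by (simp add: cadd_def e[OF i] Ad_assoc Ad_commute[of "k i"])
  qed
qed

lemma homotopic_cong:
  assumes "homotopic C n X d Y d' f g"
    and "\<And>i. i \<le> Suc n \<Longrightarrow> f i = f' i" "\<And>i. i \<le> Suc n \<Longrightarrow> g i = g' i"
  shows "homotopic C n X d Y d' f' g'"
  using assms unfolding homotopic_iff by metis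

lemma homotopic_eq: "is_cx C n X d \<Longrightarrow> is_cx C n Y d' \<Longrightarrow> gmor n X Y f \<Longrightarrow> (\<And>i. i \<le> Suc n \<Longrightarrow> f i = g i) \<Longrightarrow>
  homotopic C n X d Y d' f g"
  by (rule homotopic_cong[where f=f and g=f, OF homotopic_refl]) auto

lemma homotopic_neg:
  assumes X: "is_cx C n X d" and Y: "is_cx C n Y d'" and g: "gmor n X Y g"
    and fg: "homotopic C n X d Y d' f g"
  shows "homotopic C n X d Y d' (cneg X Y f) (cneg X Y g)"
proof -
  obtain \<phi> where p: "is_htpy n X Y \<phi>" and e: "\<And>i. i \<le> Suc n \<Longrightarrow> f i = Ad C (X i) (Y i) (g i) (htpy_term n X d Y d' \<phi> i)"
    using fg unfolding homotopic_iff by blast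
  show ?thesis
  proof (rule homotopicI[OF is_htpy_hneg[OF p]])
    fix i assume i: "i \<le> Suc n"
    have m: "g i \<in> Hm C (X i) (Y i)" "htpy_term n X d Y d' \<phi> i \<in> Hm C (X i) (Y i)"
      using gmor_Hm[OF g i] htpy_term_Hm[OF X Y p i] by auto
    show "cneg X Y f i = Ad C (X i) (Y i) (cneg X Y g i) (htpy_term n X d Y d' (hneg X Y \<phi>) i)"
      using m by (simp add: cneg_def e[OF i] htpy_term_hneg[OF X Y p i] neg_Ad)
  qed
qed

lemma homotopic_add_left:
  assumes X: "is_cx C n X d" and Y: "is_cx C n Y d'" and g: "gmor n X Y g" and k: "gmor n X Y k"
    and fg: "homotopic C n X d Y d' f g"
  shows "homotopic C n X d Y d' (cadd X Y k f) (cadd X Y k g)"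
proof -
  have f: "gmor n X Y f" by (rule homotopic_gmor[OF X Y g fg])
  show ?thesis
    by (rule homotopic_cong[OF homotopic_add_right[OF X Y g k fg]])
      (use gmor_Hm[OF f] gmor_Hm[OF g] gmor_Hm[OF k] in \<open>auto simp: cadd_def Ad_commute\<close>)
qed

lemma gmor_ccomp: "gmor n X Y f \<Longrightarrow> gmor n Y Z g \<Longrightarrow> gmor n X Z (ccomp X Y Z g f)"
  unfolding gmor_def ccomp_def by simp
lemma gmor_cadd: "gmor n X Y f \<Longrightarrow> gmor n X Y g \<Longrightarrow> gmor n X Y (cadd X Y f g)"
  unfolding gmor_def cadd_def by simp
lemma gmor_cneg: "gmor n X Y f \<Longrightarrow> gmor n X Y (cneg X Y f)"
  unfolding gmor_def cneg_def by simp
lemma gmor_cidn: "is_cx C n X d \<Longrightarrow> gmor n X X (cidn X)"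
  unfolding gmor_def cidn_def using cx_Ob by simp
lemma gmor_czero: "is_cx C n X d \<Longrightarrow> is_cx C n Y d' \<Longrightarrow> gmor n X Y (czero X Y)"
  unfolding gmor_def czero_def using cx_Ob by simp

lemma cmorI: "(\<And>i. i \<le> Suc n \<Longrightarrow> f i \<in> Hm C (X i) (Y i)) \<Longrightarrow>
  (\<And>i. i \<le> n \<Longrightarrow> Cp C (X i) (X (Suc i)) (Y (Suc i)) (f (Suc i)) (d i) = Cp C (X i) (Y i) (Y (Suc i)) (d' i) (f i)) \<Longrightarrow>
  is_cmor C n X d Y d' f"
  unfolding is_cmor_def by blast

lemma cmor_ccomp:
  assumes X: "is_cx C n X d" and Y: "is_cx C n Y d'" and Z: "is_cx C n Z d''"
    and f: "is_cmor C n X d Y d' f" and g: "is_cmor C n Y d' Z d'' g"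
  shows "is_cmor C n X d Z d'' (ccomp X Y Z g f)"
proof (rule cmorI)
  fix i assume "i \<le> Suc n" then show "ccomp X Y Z g f i \<in> Hm C (X i) (Z i)"
    using gmor_Hm[OF cmor_gmor[OF f]] gmor_Hm[OF cmor_gmor[OF g]] by (simp add: ccomp_def)
next
  fix i assume i: "i \<le> n"
  have m: "f i \<in> Hm C (X i) (Y i)" "g i \<in> Hm C (Y i) (Z i)" "f (Suc i) \<in> Hm C (X (Suc i)) (Y (Suc i))"
    "g (Suc i) \<in> Hm C (Y (Suc i)) (Z (Suc i))" "d i \<in> Hm C (X i) (X (Suc i))" "d' i \<in> Hm C (Y i) (Y (Suc i))"
    "d'' i \<in> Hm C (Z i) (Z (Suc i))"
    using i gmor_Hm[OF cmor_gmor[OF f]] gmor_Hm[OF cmor_gmor[OF g]] cx_diff_Hm[OF X] cx_diff_Hm[OF Y] cx_diff_Hm[OF Z] by auto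
  have c1: "Cp C (X i) (X (Suc i)) (Y (Suc i)) (f (Suc i)) (d i) = Cp C (X i) (Y i) (Y (Suc i)) (d' i) (f i)"
    using cmor_commute[OF f i] .
  have c2: "Cp C (Y i) (Y (Suc i)) (Z (Suc i)) (g (Suc i)) (d' i) = Cp C (Y i) (Z i) (Z (Suc i)) (d'' i) (g i)"
    using cmor_commute[OF g i] .
  show "Cp C (X i) (X (Suc i)) (Z (Suc i)) (ccomp X Y Z g f (Suc i)) (d i) = Cp C (X i) (Z i) (Z (Suc i)) (d'' i) (ccomp X Y Z g f i)"
  proof -
    have "Cp C (X i) (X (Suc i)) (Z (Suc i)) (Cp C (X (Suc i)) (Y (Suc i)) (Z (Suc i)) (g (Suc i)) (f (Suc i))) (d i)
      = Cp C (X i) (Y (Suc i)) (Z (Suc i)) (g (Suc i)) (Cp C (X i) (X (Suc i)) (Y (Suc i)) (f (Suc i)) (d i))"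
      using m by (simp add: Cp_assoc)
    also have "\<dots> = Cp C (X i) (Y (Suc i)) (Z (Suc i)) (g (Suc i)) (Cp C (X i) (Y i) (Y (Suc i)) (d' i) (f i))"
      using c1 by simp
    also have "\<dots> = Cp C (X i) (Y i) (Z (Suc i)) (Cp C (Y i) (Y (Suc i)) (Z (Suc i)) (g (Suc i)) (d' i)) (f i)"
      using m by (simp add: Cp_assoc)
    also have "\<dots> = Cp C (X i) (Y i) (Z (Suc i)) (Cp C (Y i) (Z i) (Z (Suc i)) (d'' i) (g i)) (f i)"
      using c2 by simp
    also have "\<dots> = Cp C (X i) (Z i) (Z (Suc i)) (d'' i) (Cp C (X i) (Y i) (Z i) (g i) (f i))"
      using m by (simp add: Cp_assoc)
    finally show ?thesis by (simp add: ccomp_def)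
  qed
qed

lemma cmor_cadd:
  assumes X: "is_cx C n X d" and Y: "is_cx C n Y d'"
    and f: "is_cmor C n X d Y d' f" and g: "is_cmor C n X d Y d' g"
  shows "is_cmor C n X d Y d' (cadd X Y f g)"
proof (rule cmorI)
  fix i assume "i \<le> Suc n" then show "cadd X Y f g i \<in> Hm C (X i) (Y i)"
    using gmor_Hm[OF cmor_gmor[OF f]] gmor_Hm[OF cmor_gmor[OF g]] by (simp add: cadd_def)
next
  fix i assume i: "i \<le> n"
  have m: "f i \<in> Hm C (X i) (Y i)" "g i \<in> Hm C (X i) (Y i)" "f (Suc i) \<in> Hm C (X (Suc i)) (Y (Suc i))"
    "g (Suc i) \<in> Hm C (X (Suc i)) (Y (Suc i))" "d i \<in> Hm C (X i) (X (Suc i))" "d' i \<in> Hm C (Y i) (Y (Suc i))"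
    using i gmor_Hm[OF cmor_gmor[OF f]] gmor_Hm[OF cmor_gmor[OF g]] cx_diff_Hm[OF X] cx_diff_Hm[OF Y] by auto
  show "Cp C (X i) (X (Suc i)) (Y (Suc i)) (cadd X Y f g (Suc i)) (d i) = Cp C (X i) (Y i) (Y (Suc i)) (d' i) (cadd X Y f g i)"
    using m by (simp add: cadd_def Cp_Ad_left Cp_Ad_right cmor_commute[OF f i] cmor_commute[OF g i])
qed

lemma cmor_cneg:
  assumes X: "is_cx C n X d" and Y: "is_cx C n Y d'" and f: "is_cmor C n X d Y d' f"
  shows "is_cmor C n X d Y d' (cneg X Y f)"
proof (rule cmorI)
  fix i assume "i \<le> Suc n" then show "cneg X Y f i \<in> Hm C (X i) (Y i)"
    using gmor_Hm[OF cmor_gmor[OF f]] by (simp add: cneg_def)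
next
  fix i assume i: "i \<le> n"
  have m: "f i \<in> Hm C (X i) (Y i)" "f (Suc i) \<in> Hm C (X (Suc i)) (Y (Suc i))"
    "d i \<in> Hm C (X i) (X (Suc i))" "d' i \<in> Hm C (Y i) (Y (Suc i))"
    using i gmor_Hm[OF cmor_gmor[OF f]] cx_diff_Hm[OF X] cx_diff_Hm[OF Y] by auto
  show "Cp C (X i) (X (Suc i)) (Y (Suc i)) (cneg X Y f (Suc i)) (d i) = Cp C (X i) (Y i) (Y (Suc i)) (d' i) (cneg X Y f i)"
    using m by (simp add: cneg_def Cp_neg_left Cp_neg_right cmor_commute[OF f i])
qed

lemma cmor_cidn:
  assumes X: "is_cx C n X d"
  shows "is_cmor C n X d X d (cidn X)"
proof (rule cmorI)
  fix i assume "i \<le> Suc n" then show "cidn X i \<in> Hm C (X i) (X i)"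
    using cx_Ob[OF X] by (simp add: cidn_def)
next
  fix i assume i: "i \<le> n"
  have m: "d i \<in> Hm C (X i) (X (Suc i))"
    using i cx_diff_Hm[OF X] by auto
  show "Cp C (X i) (X (Suc i)) (X (Suc i)) (cidn X (Suc i)) (d i) = Cp C (X i) (X i) (X (Suc i)) (d i) (cidn X i)"
    using m by (simp add: cidn_def)
qed

definition idem_cmor :: "nat \<Rightarrow> (nat \<Rightarrow> 'o) \<Rightarrow> (nat \<Rightarrow> 'm) \<Rightarrow> (nat \<Rightarrow> 'm) \<Rightarrow> bool" where
  "idem_cmor n X d e \<longleftrightarrow> is_cmor C n X d X d e \<and> (\<forall>i\<le>Suc n. Cp C (X i) (X i) (X i) (e i) (e i) = e i)"

lemma idem_Hm: "idem_cmor n X d e \<Longrightarrow> i \<le> Suc n \<Longrightarrow> e i \<in> Hm C (X i) (X i)"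
  unfolding idem_cmor_def using gmor_Hm cmor_gmor by blast
lemma idem_idem: "idem_cmor n X d e \<Longrightarrow> i \<le> Suc n \<Longrightarrow> Cp C (X i) (X i) (X i) (e i) (e i) = e i"
  unfolding idem_cmor_def by blast
lemma idem_commute: "idem_cmor n X d e \<Longrightarrow> i \<le> n \<Longrightarrow>
   Cp C (X i) (X (Suc i)) (X (Suc i)) (e (Suc i)) (d i) = Cp C (X i) (X i) (X (Suc i)) (d i) (e i)"
  unfolding idem_cmor_def using cmor_commute by blast

lemma htpy_term_diff_cong:
  assumes "\<And>i. i \<le> n \<Longrightarrow> d i = dq i" "\<And>i. i \<le> n \<Longrightarrow> d' i = dq' i" and i: "i \<le> Suc n"
  shows "htpy_term n X d Y d' \<phi> i = htpy_term n X dq Y dq' \<phi> i"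
proof -
  have a: "i \<noteq> 0 \<Longrightarrow> d' (i - 1) = dq' (i - 1)" using assms(2)[of "i - 1"] i by simp
  have b: "i \<noteq> Suc n \<Longrightarrow> d i = dq i" using assms(1)[of i] i by simp
  have c: "d' n = dq' n" using assms(2)[of n] by simp
  show ?thesis unfolding htpy_term_def using a b c by simp
qed

lemma homotopic_diff_cong:
  assumes "\<And>i. i \<le> n \<Longrightarrow> d i = dq i" "\<And>i. i \<le> n \<Longrightarrow> d' i = dq' i"
  shows "homotopic C n X d Y d' f g = homotopic C n X dq Y dq' f g"
  unfolding homotopic_iff using htpy_term_diff_cong[OF assms] by simp

lemma is_cx_diff_cong:
  assumes "\<And>i. i \<le> n \<Longrightarrow> d i = dq i"
  shows "is_cx C n X d = is_cx C n X dq"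
  unfolding is_cx_def using assms by simp

lemma is_cmor_diff_cong:
  assumes "\<And>i. i \<le> n \<Longrightarrow> d i = dq i" "\<And>i. i \<le> n \<Longrightarrow> d' i = dq' i"
  shows "is_cmor C n X d Y d' f = is_cmor C n X dq Y dq' f"
  unfolding is_cmor_def using assms by simp

lemma heq_diff_cong:
  assumes h: "heq C n A B X d Y d'" and e: "\<And>i. i \<le> n \<Longrightarrow> d i = dq i"
  shows "heq C n A B X dq Y d'"
proof -
  have cx: "is_cx C n X d = is_cx C n X dq"
    by (rule is_cx_diff_cong) (simp add: e)
  have cmor_from: "is_cmor C n X d Y d' f = is_cmor C n X dq Y d' f" for f
    by (rule is_cmor_diff_cong) (simp_all add: e)
  have cmor_to: "is_cmor C n Y d' X d f = is_cmor C n Y d' X dq f" for f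
    by (rule is_cmor_diff_cong) (simp_all add: e)
  have htpy: "homotopic C n X d X d f g = homotopic C n X dq X dq f g" for f g
    by (rule homotopic_diff_cong) (simp_all add: e)
  show ?thesis
    using h unfolding heq_def cxAC_def cx cmor_from cmor_to htpy .
qed

section \<open>Homotopy equivalence\<close>

lemma heq_iff: "heq C n A B X d Y d' \<longleftrightarrow> cxAC C n A B X d \<and> cxAC C n A B Y d' \<and>
     (\<exists>f g. is_cmor C n X d Y d' f \<and> f 0 = Idn C A \<and> f (Suc n) = Idn C B \<and>
            is_cmor C n Y d' X d g \<and> g 0 = Idn C A \<and> g (Suc n) = Idn C B \<and>
            homotopic C n X d X d (ccomp X Y X g f) (cidn X) \<and>
            homotopic C n Y d' Y d' (ccomp Y X Y f g) (cidn Y))"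
  unfolding heq_def ccomp_def cidn_def by simp

lemma cxAC_cx: "cxAC C n A B X d \<Longrightarrow> is_cx C n X d" unfolding cxAC_def by blast

lemma heq_sym: "heq C n A B X d Y d' \<Longrightarrow> heq C n A B Y d' X d"
  unfolding heq_iff by blast

lemma heq_refl:
  assumes a: "cxAC C n A B X d" shows "heq C n A B X d X d"
proof -
  have X: "is_cx C n X d" using a by (rule cxAC_cx)
  have "homotopic C n X d X d (ccomp X X X (cidn X) (cidn X)) (cidn X)"
    by (rule homotopic_eq[OF X X]) (auto simp: ccomp_def cidn_def gmor_def cx_Ob[OF X])
  moreover have "cidn X 0 = Idn C A" "cidn X (Suc n) = Idn C B" using a by (auto simp: cidn_def cxAC_def)
  ultimately show ?thesis unfolding heq_iff using a cmor_cidn[OF X] by blast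
qed

lemma homotopic_comp_inverse:
  assumes X: "is_cx C n X d" and Y: "is_cx C n Y d'" and Z: "is_cx C n Z d''"
    and f: "is_cmor C n X d Y d' f" and g: "is_cmor C n Y d' X d g"
    and f': "is_cmor C n Y d' Z d'' f'" and g': "is_cmor C n Z d'' Y d' g'"
    and gf: "homotopic C n X d X d (ccomp X Y X g f) (cidn X)"
    and gf': "homotopic C n Y d' Y d' (ccomp Y Z Y g' f') (cidn Y)"
  shows "homotopic C n X d X d (ccomp X Z X (ccomp Z Y X g g') (ccomp X Y Z f' f)) (cidn X)"
proof -
  have "homotopic C n X d Y d' (ccomp X Y Y (ccomp Y Z Y g' f') f) (ccomp X Y Y (cidn Y) f)"
    by (rule homotopic_pre[OF X Y Y gmor_cidn[OF Y] f gf'])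
  then have "homotopic C n X d X d (ccomp X Y X g (ccomp X Y Y (ccomp Y Z Y g' f') f))
      (ccomp X Y X g (ccomp X Y Y (cidn Y) f))"
    by (rule homotopic_post[OF X Y X gmor_ccomp[OF cmor_gmor[OF f] gmor_cidn[OF Y]] g])
  then have "homotopic C n X d X d (ccomp X Z X (ccomp Z Y X g g') (ccomp X Y Z f' f)) (ccomp X Y X g f)"
    by (rule homotopic_cong)
      (use gmor_Hm[OF cmor_gmor[OF f]] gmor_Hm[OF cmor_gmor[OF g]] gmor_Hm[OF cmor_gmor[OF f']]
        gmor_Hm[OF cmor_gmor[OF g']] in \<open>simp_all add: ccomp_def cidn_def Cp_assoc\<close>)
  then show ?thesis by (rule homotopic_trans[OF X X gmor_cidn[OF X] _ gf])
qed

lemma heq_trans: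
  assumes h1: "heq C n A B X d Y d'" and h2: "heq C n A B Y d' Z d''"
  shows "heq C n A B X d Z d''"
proof -
  have cX: "cxAC C n A B X d" and cY: "cxAC C n A B Y d'" and cZ: "cxAC C n A B Z d''"
    using h1 h2 unfolding heq_iff by blast+
  have X: "is_cx C n X d" and Y: "is_cx C n Y d'" and Z: "is_cx C n Z d''"
    using cX cY cZ cxAC_cx by blast+
  obtain f g where f: "is_cmor C n X d Y d' f" and f_ends: "f 0 = Idn C A" "f (Suc n) = Idn C B"
    and g: "is_cmor C n Y d' X d g" and g_ends: "g 0 = Idn C A" "g (Suc n) = Idn C B"
    and gf: "homotopic C n X d X d (ccomp X Y X g f) (cidn X)"
    and fg: "homotopic C n Y d' Y d' (ccomp Y X Y f g) (cidn Y)"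
    using h1 unfolding heq_iff by blast
  obtain f' g' where f': "is_cmor C n Y d' Z d'' f'" and f'_ends: "f' 0 = Idn C A" "f' (Suc n) = Idn C B"
    and g': "is_cmor C n Z d'' Y d' g'" and g'_ends: "g' 0 = Idn C A" "g' (Suc n) = Idn C B"
    and gf': "homotopic C n Y d' Y d' (ccomp Y Z Y g' f') (cidn Y)"
    and fg': "homotopic C n Z d'' Z d'' (ccomp Z Y Z f' g') (cidn Z)"
    using h2 unfolding heq_iff by blast
  have "A = X 0" "B = X (Suc n)" using cX unfolding cxAC_def by auto
  then have "A \<in> Ob C" "B \<in> Ob C" using cx_Ob[OF X, of 0] cx_Ob[OF X, of "Suc n"] by auto
  then have "ccomp X Y Z f' f 0 = Idn C A" "ccomp X Y Z f' f (Suc n) = Idn C B"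
    "ccomp Z Y X g g' 0 = Idn C A" "ccomp Z Y X g g' (Suc n) = Idn C B"
    using cX cY cZ f_ends g_ends f'_ends g'_ends by (auto simp: ccomp_def cxAC_def)
  then show ?thesis
    unfolding heq_iff
    using cX cZ cmor_ccomp[OF X Y Z f f'] cmor_ccomp[OF Z Y X g' g]
      homotopic_comp_inverse[OF X Y Z f g f' g' gf gf'] homotopic_comp_inverse[OF Z Y X g' f' g f fg' fg]
    by blast
qed

section \<open>Exact complexes\<close>

text \<open>Exactness of the sequences \<open>C(X\<^sub>\<bullet>, W)\<close> at \<open>C(X\<^sub>i, W)\<close> for \<open>1 \<le> i \<le> n\<close>: the part of the
  exactness of an n-exangle that the argument needs.\<close>

definition hom_exact :: "nat \<Rightarrow> (nat \<Rightarrow> 'o) \<Rightarrow> (nat \<Rightarrow> 'm) \<Rightarrow> bool" where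
  "hom_exact n X d \<longleftrightarrow> (\<forall>W\<in>Ob C. \<forall>i. 1 \<le> i \<and> i \<le> n \<longrightarrow> (\<forall>h\<in>Hm C (X i) W.
            Cp C (X (i - 1)) (X i) W h (d (i - 1)) = Zr C (X (i - 1)) W \<longrightarrow>
            (\<exists>h'\<in>Hm C (X (Suc i)) W. h = Cp C (X i) (X (Suc i)) W h' (d i))))"

lemma hom_exactD: "hom_exact n X d \<Longrightarrow> W \<in> Ob C \<Longrightarrow> Suc j \<le> n \<Longrightarrow> h \<in> Hm C (X (Suc j)) W \<Longrightarrow>
   Cp C (X j) (X (Suc j)) W h (d j) = Zr C (X j) W \<Longrightarrow>
   \<exists>h'. h' \<in> Hm C (X (Suc (Suc j))) W \<and> h = Cp C (X (Suc j)) (X (Suc (Suc j))) W h' (d (Suc j))"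
  unfolding hom_exact_def by (drule bspec[where x=W], assumption, drule spec[where x="Suc j"]) auto

lemma diff_htpy_term:
  assumes X: "is_cx C n X d" and Y: "is_cx C n Y d'" and h: "is_htpy j X Y \<phi>" and j: "j \<le> n"
  shows "Cp C (X j) (Y j) (Y (Suc j)) (d' j) (htpy_term n X d Y d' \<phi> j)
       = Cp C (X j) (X (Suc j)) (Y (Suc j)) (Cp C (X (Suc j)) (Y j) (Y (Suc j)) (d' j) (\<phi> (Suc j))) (d j)"
proof -
  have m: "\<phi> (Suc j) \<in> Hm C (X (Suc j)) (Y j)" "d j \<in> Hm C (X j) (X (Suc j))"
    "d' j \<in> Hm C (Y j) (Y (Suc j))"
    using is_htpy_Hm[OF h, of "Suc j"] cx_diff_Hm[OF X j] cx_diff_Hm[OF Y j] j by auto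
  show ?thesis
  proof (cases j)
    case 0
    then show ?thesis using m Hm_Ob by (simp add: htpy_term_0 Cp_assoc)
  next
    case (Suc k)
    have mk: "\<phi> j \<in> Hm C (X j) (Y k)" "d' k \<in> Hm C (Y k) (Y j)"
      using is_htpy_Hm[OF h, of j] cx_diff_Hm[OF Y, of k] j Suc by auto
    have "Cp C (X j) (Y k) (Y (Suc j)) (Cp C (Y k) (Y j) (Y (Suc j)) (d' j) (d' k)) (\<phi> j)
        = Zr C (X j) (Y (Suc j))"
      using cx_diff_diff[OF Y, of k] cx_Ob[OF Y, of "Suc j"] mk j Suc by simp
    then show ?thesis using m mk Suc j
      by (simp add: htpy_term_mid Cp_Ad_right Cp_assoc)
  qed
qed

lemma hom_exact_extend_htpy:
  assumes X: "is_cx C n X d" and Y: "is_cx C n Y d'" and ex: "hom_exact n X d"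
    and N: "is_cmor C n X d Y d' N" and j: "Suc j \<le> n"
    and p: "p \<in> Hm C (X (Suc j)) (Y j)"
    and pd: "Cp C (X j) (Y j) (Y (Suc j)) (d' j) (Cp C (X j) (X (Suc j)) (Y j) p (d j))
           = Cp C (X j) (Y j) (Y (Suc j)) (d' j) (N j)"
  shows "\<exists>q. q \<in> Hm C (X (Suc (Suc j))) (Y (Suc j)) \<and>
           Cp C (X (Suc j)) (X (Suc (Suc j))) (Y (Suc j)) q (d (Suc j))
             = Ad C (X (Suc j)) (Y (Suc j)) (N (Suc j)) (neg (X (Suc j)) (Y (Suc j)) (Cp C (X (Suc j)) (Y j) (Y (Suc j)) (d' j) p))"
proof -
  define r where "r = Ad C (X (Suc j)) (Y (Suc j)) (N (Suc j))
    (neg (X (Suc j)) (Y (Suc j)) (Cp C (X (Suc j)) (Y j) (Y (Suc j)) (d' j) p))"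
  have m: "d j \<in> Hm C (X j) (X (Suc j))" "d' j \<in> Hm C (Y j) (Y (Suc j))"
    "N j \<in> Hm C (X j) (Y j)" "N (Suc j) \<in> Hm C (X (Suc j)) (Y (Suc j))"
    using cx_diff_Hm[OF X, of j] cx_diff_Hm[OF Y, of j] gmor_Hm[OF cmor_gmor[OF N]] j by auto
  have "Cp C (X j) (X (Suc j)) (Y (Suc j)) r (d j)
      = Ad C (X j) (Y (Suc j)) (Cp C (X j) (Y j) (Y (Suc j)) (d' j) (N j))
          (neg (X j) (Y (Suc j)) (Cp C (X j) (Y j) (Y (Suc j)) (d' j) (N j)))"
    using m p cmor_commute[OF N, of j] j
    by (simp add: r_def Cp_Ad_left Cp_neg_left Cp_assoc flip: pd)
  then have rd: "Cp C (X j) (X (Suc j)) (Y (Suc j)) r (d j) = Zr C (X j) (Y (Suc j))"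
    using m by simp
  have "r \<in> Hm C (X (Suc j)) (Y (Suc j))" using m p by (simp add: r_def)
  from hom_exactD[OF ex _ j this rd] show ?thesis
    using cx_Ob[OF Y, of "Suc j"] j unfolding r_def by auto
qed

lemma null_homotopic_below_top:
  assumes X: "is_cx C n X d" and Y: "is_cx C n Y d'" and ex: "hom_exact n X d"
    and N: "is_cmor C n X d Y d' N" and N0: "N 0 = Zr C (X 0) (Y 0)"
  shows "\<exists>\<phi>. is_htpy n X Y \<phi> \<and> (\<forall>i\<le>n. N i = htpy_term n X d Y d' \<phi> i)"
proof -
  define extend where "extend j p = (SOME q. q \<in> Hm C (X (Suc (Suc j))) (Y (Suc j)) \<and>
    Cp C (X (Suc j)) (X (Suc (Suc j))) (Y (Suc j)) q (d (Suc j))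
      = Ad C (X (Suc j)) (Y (Suc j)) (N (Suc j)) (neg (X (Suc j)) (Y (Suc j)) (Cp C (X (Suc j)) (Y j) (Y (Suc j)) (d' j) p)))"
    for j p
  define \<phi> where "\<phi> = rec_nat undefined (\<lambda>i p. if i = 0 then Zr C (X 1) (Y 0) else extend (i - 1) p)"
  have \<phi>_1: "\<phi> (Suc 0) = Zr C (X 1) (Y 0)" and \<phi>_SS: "\<phi> (Suc (Suc j)) = extend j (\<phi> (Suc j))" for j
    by (simp_all add: \<phi>_def)
  have step: "j \<le> n \<Longrightarrow> is_htpy j X Y \<phi> \<and> N j = htpy_term n X d Y d' \<phi> j" for j
  proof (induction j)
    case 0
    have "X (Suc 0) \<in> Ob C" "Y 0 \<in> Ob C" using cx_Ob[OF X, of "Suc 0"] cx_Ob[OF Y, of 0] by simp_all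
    then have "is_htpy 0 X Y \<phi>" by (auto simp: is_htpy_def \<phi>_1 le_Suc_eq)
    moreover have "N 0 = htpy_term n X d Y d' \<phi> 0"
      using cx_Ob[OF X, of 0] cx_Ob[OF Y, of 0] cx_diff_Hm[OF X, of 0] N0
      by (simp add: \<phi>_1 htpy_term_0)
    ultimately show ?case ..
  next
    case (Suc j)
    then have h: "is_htpy j X Y \<phi>" and Nj: "N j = htpy_term n X d Y d' \<phi> j" and j: "Suc j \<le> n"
      by auto
    have p: "\<phi> (Suc j) \<in> Hm C (X (Suc j)) (Y j)" using is_htpy_Hm[OF h, of "Suc j"] by simp
    have "Cp C (X j) (Y j) (Y (Suc j)) (d' j) (Cp C (X j) (X (Suc j)) (Y j) (\<phi> (Suc j)) (d j))
        = Cp C (X j) (Y j) (Y (Suc j)) (d' j) (N j)"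
      using diff_htpy_term[OF X Y h] p cx_diff_Hm[OF X, of j] cx_diff_Hm[OF Y, of j] j
      by (simp add: Nj Cp_assoc)
    from someI_ex[OF hom_exact_extend_htpy[OF X Y ex N j p this]]
    have q: "\<phi> (Suc (Suc j)) \<in> Hm C (X (Suc (Suc j))) (Y (Suc j))"
      and qd: "Cp C (X (Suc j)) (X (Suc (Suc j))) (Y (Suc j)) (\<phi> (Suc (Suc j))) (d (Suc j))
             = Ad C (X (Suc j)) (Y (Suc j)) (N (Suc j))
                 (neg (X (Suc j)) (Y (Suc j)) (Cp C (X (Suc j)) (Y j) (Y (Suc j)) (d' j) (\<phi> (Suc j))))"
      unfolding \<phi>_SS extend_def by blast+
    have "is_htpy (Suc j) X Y \<phi>"
      using h q unfolding is_htpy_def by (auto simp: le_Suc_eq)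
    moreover have "N (Suc j) = htpy_term n X d Y d' \<phi> (Suc j)"
      using j p q cx_diff_Hm[OF Y, of j] gmor_Hm[OF cmor_gmor[OF N], of "Suc j"]
      by (simp add: htpy_term_mid qd)
    ultimately show ?case ..
  qed
  then show ?thesis using step[of n] by blast
qed

lemma comp_null_homotopic:
  assumes X: "is_cx C n X d" and Y: "is_cx C n Y d'" and R: "is_cx C n R dR" and ex: "hom_exact n X d"
    and N: "is_cmor C n X d Y d' N" and N0: "N 0 = Zr C (X 0) (Y 0)"
    and M: "is_cmor C n Y d' R dR M" and M1: "M (Suc n) = Zr C (Y (Suc n)) (R (Suc n))"
  shows "homotopic C n X d R dR (ccomp X Y R M N) (czero X R)"
proof -
  obtain \<phi> where p: "is_htpy n X Y \<phi>" and e: "\<And>i. i \<le> n \<Longrightarrow> N i = htpy_term n X d Y d' \<phi> i"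
    using null_homotopic_below_top[OF X Y ex N N0] by blast
  show ?thesis
  proof (rule homotopicI[OF is_htpy_hpost[OF p cmor_gmor[OF M]]])
    fix i assume i: "i \<le> Suc n"
    have m: "htpy_term n X d Y d' \<phi> i \<in> Hm C (X i) (Y i)" "M i \<in> Hm C (Y i) (R i)" "N i \<in> Hm C (X i) (Y i)"
      using htpy_term_Hm[OF X Y p i] gmor_Hm[OF cmor_gmor[OF M] i] gmor_Hm[OF cmor_gmor[OF N] i] by auto
    have h: "htpy_term n X d R dR (hpost X Y R M \<phi>) i = Cp C (X i) (Y i) (R i) (M i) (htpy_term n X d Y d' \<phi> i)"
      using htpy_term_post[OF X Y R p M i] by simp
    show "ccomp X Y R M N i = Ad C (X i) (R i) (czero X R i) (htpy_term n X d R dR (hpost X Y R M \<phi>) i)"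
    proof (cases "i \<le> n")
      case True
      then show ?thesis using m h e[OF True] by (simp add: ccomp_def czero_def)
    next
      case False
      then have "i = Suc n" using i by simp
      then show ?thesis using m h M1 cx_Ob[OF R i] cx_Ob[OF X i] by (simp add: ccomp_def czero_def)
    qed
  qed
qed

section \<open>Retracts of homotopy equivalent complexes\<close>

lemma homotopy_inverse_one_minus:
  assumes P: "is_cx C n P dP" and N: "is_cmor C n P dP P dP N"
    and T: "homotopic C n P dP P dP T (cadd P P (cidn P) N)"
    and NN: "homotopic C n P dP P dP (ccomp P P P N N) (czero P P)"
  shows "homotopic C n P dP P dP (ccomp P P P (cadd P P (cidn P) (cneg P P N)) T) (cidn P)"
    and "homotopic C n P dP P dP (ccomp P P P T (cadd P P (cidn P) (cneg P P N))) (cidn P)"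
proof -
  define h where "h = cadd P P (cidn P) (cneg P P N)"
  have h: "is_cmor C n P dP P dP h"
    unfolding h_def by (rule cmor_cadd[OF P P cmor_cidn[OF P] cmor_cneg[OF P P N]])
  have one_plus: "gmor n P P (cadd P P (cidn P) N)"
    by (rule gmor_cadd[OF gmor_cidn[OF P] cmor_gmor[OF N]])
  note mN = gmor_Hm[OF cmor_gmor[OF N]]
  have "homotopic C n P dP P dP (cadd P P (cidn P) (cneg P P (ccomp P P P N N)))
      (cadd P P (cidn P) (cneg P P (czero P P)))"
    by (rule homotopic_add_left[OF P P gmor_cneg[OF gmor_czero[OF P P]] gmor_cidn[OF P]
          homotopic_neg[OF P P gmor_czero[OF P P] NN]])
  then have square: "homotopic C n P dP P dP (cadd P P (cidn P) (cneg P P (ccomp P P P N N))) (cidn P)"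
    by (rule homotopic_cong) (use cx_Ob[OF P] in \<open>simp_all add: cadd_def cneg_def cidn_def czero_def\<close>)
  have "homotopic C n P dP P dP (ccomp P P P h (cadd P P (cidn P) N)) (cidn P)"
    by (rule homotopic_cong[OF square])
      (use mN cx_Ob[OF P] in \<open>simp_all add: h_def ccomp_def cadd_def cneg_def cidn_def
          Cp_Ad_left Cp_Ad_right Cp_neg_left Ad_assoc\<close>)
  with homotopic_post[OF P P P one_plus h T]
  show "homotopic C n P dP P dP (ccomp P P P h T) (cidn P)"
    by (rule homotopic_trans[OF P P gmor_cidn[OF P]])
  have "homotopic C n P dP P dP (ccomp P P P (cadd P P (cidn P) N) h) (cidn P)"
    by (rule homotopic_cong[OF square])
      (use mN cx_Ob[OF P] in \<open>simp_all add: h_def ccomp_def cadd_def cneg_def cidn_def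
          Cp_Ad_left Cp_Ad_right Cp_neg_right Ad_assoc neg_Ad\<close>)
  with homotopic_pre[OF P P P one_plus h T]
  show "homotopic C n P dP P dP (ccomp P P P T h) (cidn P)"
    by (rule homotopic_trans[OF P P gmor_cidn[OF P]])
qed

lemma heq_of_homotopy_inverses:
  assumes cP: "cxAC C n A B P dP" and cQ: "cxAC C n A B Q dQ"
    and u: "is_cmor C n P dP Q dQ u" and v': "is_cmor C n Q dQ P dP v'"
    and v'': "is_cmor C n Q dQ P dP v''"
    and u_ends: "u 0 = Idn C A" "u (Suc n) = Idn C B"
    and v'_ends: "v' 0 = Idn C A" "v' (Suc n) = Idn C B"
    and left: "homotopic C n P dP P dP (ccomp P Q P v' u) (cidn P)"
    and right: "homotopic C n Q dQ Q dQ (ccomp Q P Q u v'') (cidn Q)"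
  shows "heq C n A B P dP Q dQ"
proof -
  have P: "is_cx C n P dP" and Q: "is_cx C n Q dQ" using cP cQ cxAC_cx by auto
  note mu = gmor_Hm[OF cmor_gmor[OF u]] and mv' = gmor_Hm[OF cmor_gmor[OF v']]
    and mv'' = gmor_Hm[OF cmor_gmor[OF v'']]
  have "homotopic C n Q dQ P dP (ccomp Q Q P v' (ccomp Q P Q u v'')) (ccomp Q Q P v' (cidn Q))"
    by (rule homotopic_post[OF Q Q P gmor_cidn[OF Q] v' right])
  from homotopic_sym[OF Q P gmor_ccomp[OF gmor_cidn[OF Q] cmor_gmor[OF v']] this]
  have v'_uv'': "homotopic C n Q dQ P dP v' (ccomp Q Q P v' (ccomp Q P Q u v''))"
    by (rule homotopic_cong) (use mv' in \<open>auto simp: ccomp_def cidn_def\<close>)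
  have "homotopic C n Q dQ P dP (ccomp Q P P (ccomp P Q P v' u) v'') (ccomp Q P P (cidn P) v'')"
    by (rule homotopic_pre[OF Q P P gmor_cidn[OF P] v'' left])
  then have "homotopic C n Q dQ P dP (ccomp Q Q P v' (ccomp Q P Q u v'')) v''"
    by (rule homotopic_cong) (use mv' mv'' mu in \<open>auto simp: ccomp_def cidn_def Cp_assoc\<close>)
  with v'_uv'' have "homotopic C n Q dQ P dP v' v''"
    by (rule homotopic_trans[OF Q P cmor_gmor[OF v'']])
  then have "homotopic C n Q dQ Q dQ (ccomp Q P Q u v') (cidn Q)"
    by (rule homotopic_trans[OF Q Q gmor_cidn[OF Q] homotopic_post[OF Q P Q cmor_gmor[OF v''] u] right])
  then show ?thesis
    unfolding heq_iff using cP cQ u v' u_ends v'_ends left by blast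
qed

lemma heq_of_inverse_up_to_nilpotent:
  assumes cP: "cxAC C n A B P dP" and cQ: "cxAC C n A B Q dQ"
    and u: "is_cmor C n P dP Q dQ u" and v: "is_cmor C n Q dQ P dP v"
    and N: "is_cmor C n P dP P dP N" and M: "is_cmor C n Q dQ Q dQ M"
    and vu: "homotopic C n P dP P dP (ccomp P Q P v u) (cadd P P (cidn P) N)"
    and uv: "homotopic C n Q dQ Q dQ (ccomp Q P Q u v) (cadd Q Q (cidn Q) M)"
    and NN: "homotopic C n P dP P dP (ccomp P P P N N) (czero P P)"
    and MM: "homotopic C n Q dQ Q dQ (ccomp Q Q Q M M) (czero Q Q)"
    and u_ends: "u 0 = Idn C A" "u (Suc n) = Idn C B"
    and v_ends: "v 0 = Idn C A" "v (Suc n) = Idn C B"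
    and N_ends: "N 0 = Zr C A A" "N (Suc n) = Zr C B B"
  shows "heq C n A B P dP Q dQ"
proof -
  have P: "is_cx C n P dP" and Q: "is_cx C n Q dQ" using cP cQ cxAC_cx by auto
  have PQ: "P 0 = A" "P (Suc n) = B" "Q 0 = A" "Q (Suc n) = B" using cP cQ unfolding cxAC_def by auto
  define v' where "v' = ccomp Q P P (cadd P P (cidn P) (cneg P P N)) v"
  define v'' where "v'' = ccomp Q Q P v (cadd Q Q (cidn Q) (cneg Q Q M))"
  have v': "is_cmor C n Q dQ P dP v'" unfolding v'_def
    by (rule cmor_ccomp[OF Q P P v cmor_cadd[OF P P cmor_cidn[OF P] cmor_cneg[OF P P N]]])
  have v'': "is_cmor C n Q dQ P dP v''" unfolding v''_def
    by (rule cmor_ccomp[OF Q Q P cmor_cadd[OF Q Q cmor_cidn[OF Q] cmor_cneg[OF Q Q M]] v])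
  note mN = gmor_Hm[OF cmor_gmor[OF N]] and mM = gmor_Hm[OF cmor_gmor[OF M]]
    and mu = gmor_Hm[OF cmor_gmor[OF u]] and mv = gmor_Hm[OF cmor_gmor[OF v]]
  have left: "homotopic C n P dP P dP (ccomp P Q P v' u) (cidn P)"
    by (rule homotopic_cong[OF homotopy_inverse_one_minus(1)[OF P N vu NN]])
      (use mu mv mN cx_Ob[OF P] in \<open>simp_all add: v'_def ccomp_def cadd_def cneg_def cidn_def Cp_assoc\<close>)
  have right: "homotopic C n Q dQ Q dQ (ccomp Q P Q u v'') (cidn Q)"
    by (rule homotopic_cong[OF homotopy_inverse_one_minus(2)[OF Q M uv MM]])
      (use mu mv mM cx_Ob[OF Q] in \<open>simp_all add: v''_def ccomp_def cadd_def cneg_def cidn_def Cp_assoc\<close>)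
  have v'_ends: "v' 0 = Idn C A" "v' (Suc n) = Idn C B"
    using v_ends N_ends cx_Ob[OF P, of 0] cx_Ob[OF P, of "Suc n"] PQ
    by (simp_all add: v'_def ccomp_def cadd_def cidn_def cneg_def)
  show ?thesis by (rule heq_of_homotopy_inverses[OF cP cQ u v' v'' u_ends v'_ends left right])
qed

lemma retract_comp_homotopic:
  assumes Xh: "is_cx C n Xh dX" and Yh: "is_cx C n Yh dY" and P: "is_cx C n P dP" and Q: "is_cx C n Q dQ"
    and f: "is_cmor C n Xh dX Yh dY f" and g: "is_cmor C n Yh dY Xh dX g"
    and gf: "homotopic C n Xh dX Xh dX (ccomp Xh Yh Xh g f) (cidn Xh)"
    and iX: "is_cmor C n P dP Xh dX iX" and pX: "is_cmor C n Xh dX P dP pX"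
    and iY: "is_cmor C n Q dQ Yh dY iY" and pY: "is_cmor C n Yh dY Q dQ pY"
    and piX: "\<And>i. i \<le> Suc n \<Longrightarrow> Cp C (P i) (Xh i) (P i) (pX i) (iX i) = Idn C (P i)"
  shows "homotopic C n P dP P dP
     (ccomp P Q P (ccomp Q Yh P (ccomp Yh Xh P pX g) iY) (ccomp P Xh Q (ccomp Xh Yh Q pY f) iX))
     (cadd P P (cidn P) (ccomp P Xh P (ccomp Xh Yh P (ccomp Yh Xh P pX g)
        (cadd Xh Yh (ccomp Xh Yh Yh (ccomp Yh Q Yh iY pY) f)
           (cneg Xh Yh (ccomp Xh Xh Yh f (ccomp Xh P Xh iX pX))))) iX))"
    (is "homotopic C n P dP P dP ?vu (cadd P P (cidn P) ?N)")
proof -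
  note mf = gmor_Hm[OF cmor_gmor[OF f]] and mg = gmor_Hm[OF cmor_gmor[OF g]]
   and miX = gmor_Hm[OF cmor_gmor[OF iX]] and mpX = gmor_Hm[OF cmor_gmor[OF pX]]
   and miY = gmor_Hm[OF cmor_gmor[OF iY]] and mpY = gmor_Hm[OF cmor_gmor[OF pY]]
  have piX': "Cp C (P i) (Xh i) Z (Cp C (Xh i) (P i) Z h (pX i)) (iX i) = h"
    if "i \<le> Suc n" "h \<in> Hm C (P i) Z" for i Z h
    using that miX mpX piX by (simp flip: Cp_assoc)
  have "gmor n P P ?N"
    using mf mg miX mpX miY mpY
    by (auto simp: gmor_def ccomp_def cadd_def cneg_def)
  moreover have "homotopic C n P dP Xh dX (ccomp P Xh Xh (ccomp Xh Yh Xh g f) iX) (ccomp P Xh Xh (cidn Xh) iX)"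
    by (rule homotopic_pre[OF P Xh Xh gmor_cidn[OF Xh] iX gf])
  then have "homotopic C n P dP P dP (ccomp P Xh P pX (ccomp P Xh Xh (ccomp Xh Yh Xh g f) iX))
      (ccomp P Xh P pX (ccomp P Xh Xh (cidn Xh) iX))"
    by (rule homotopic_post[OF P Xh P gmor_ccomp[OF cmor_gmor[OF iX] gmor_cidn[OF Xh]] pX])
  ultimately have "homotopic C n P dP P dP (cadd P P (ccomp P Xh P pX (ccomp P Xh Xh (ccomp Xh Yh Xh g f) iX)) ?N)
      (cadd P P (ccomp P Xh P pX (ccomp P Xh Xh (cidn Xh) iX)) ?N)"
    by (rule homotopic_add_right[OF P P gmor_ccomp[OF gmor_ccomp[OF cmor_gmor[OF iX] gmor_cidn[OF Xh]]
          cmor_gmor[OF pX]]])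
  then show ?thesis
  proof (rule homotopic_cong)
    fix i assume i: "i \<le> Suc n"
    note m = mf[OF i] mg[OF i] miX[OF i] mpX[OF i] miY[OF i] mpY[OF i]
    show "cadd P P (ccomp P Xh P pX (ccomp P Xh Xh (ccomp Xh Yh Xh g f) iX)) ?N i = ?vu i"
      using m i by (simp add: cadd_def ccomp_def cneg_def Cp_assoc
          Cp_Ad_left Cp_Ad_right Cp_neg_left Cp_neg_right piX')
    show "cadd P P (ccomp P Xh P pX (ccomp P Xh Xh (cidn Xh) iX)) ?N i = cadd P P (cidn P) ?N i"
      using m i by (simp add: cadd_def ccomp_def cidn_def piX)
  qed
qed

lemma comp_square_null_homotopic:
  assumes Xh: "is_cx C n Xh dX" and Yh: "is_cx C n Yh dY" and P: "is_cx C n P dP"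
    and ex: "hom_exact n Xh dX" and w: "is_cmor C n Xh dX Yh dY w"
    and w0: "w 0 = Zr C (Xh 0) (Yh 0)" and w1: "w (Suc n) = Zr C (Xh (Suc n)) (Yh (Suc n))"
    and k: "is_cmor C n Yh dY P dP k" and i: "is_cmor C n P dP Xh dX i"
  shows "homotopic C n P dP P dP
    (ccomp P P P (ccomp P Xh P (ccomp Xh Yh P k w) i) (ccomp P Xh P (ccomp Xh Yh P k w) i)) (czero P P)"
proof -
  define N where "N = ccomp P Xh P (ccomp Xh Yh P k w) i"
  define K where "K = ccomp Yh P P N k"
  have N: "is_cmor C n P dP P dP N"
    unfolding N_def by (rule cmor_ccomp[OF P Xh P i cmor_ccomp[OF Xh Yh P w k]])
  have K: "is_cmor C n Yh dY P dP K" unfolding K_def by (rule cmor_ccomp[OF Yh P P k N])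
  note mk = gmor_Hm[OF cmor_gmor[OF k]] and mi = gmor_Hm[OF cmor_gmor[OF i]]
    and mw = gmor_Hm[OF cmor_gmor[OF w]]
  have "K (Suc n) = Zr C (Yh (Suc n)) (P (Suc n))"
    using mk[of "Suc n"] mi[of "Suc n"] w1 cx_Ob[OF P, of "Suc n"] cx_Ob[OF Xh, of "Suc n"]
    by (simp add: K_def N_def ccomp_def)
  from comp_null_homotopic[OF Xh Yh P ex w w0 K this]
  have "homotopic C n P dP P dP (ccomp P Xh P (ccomp Xh Yh P K w) i) (ccomp P Xh P (czero Xh P) i)"
    by (rule homotopic_pre[OF P Xh P gmor_czero[OF Xh P] i])
  then show ?thesis
    unfolding N_def[symmetric]
    by (rule homotopic_cong)
      (use mk mi mw cx_Ob[OF P] in \<open>simp_all add: ccomp_def czero_def K_def N_def Cp_assoc\<close>)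
qed

lemma retracts_heq:
  assumes Xh: "is_cx C n Xh dX" and Yh: "is_cx C n Yh dY"
    and cP: "cxAC C n A B P dP" and cQ: "cxAC C n A B Q dQ"
    and exX: "hom_exact n Xh dX"
    and f: "is_cmor C n Xh dX Yh dY f" and g: "is_cmor C n Yh dY Xh dX g"
    and f0: "f 0 = Idn C (Xh 0)" and f1: "f (Suc n) = Idn C (Xh (Suc n))"
    and g0: "g 0 = Idn C (Xh 0)" and g1: "g (Suc n) = Idn C (Xh (Suc n))"
    and XY0: "Yh 0 = Xh 0" and XY1: "Yh (Suc n) = Xh (Suc n)"
    and gf: "homotopic C n Xh dX Xh dX (ccomp Xh Yh Xh g f) (cidn Xh)"
    and fg: "homotopic C n Yh dY Yh dY (ccomp Yh Xh Yh f g) (cidn Yh)"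
    and iX: "is_cmor C n P dP Xh dX iX" and pX: "is_cmor C n Xh dX P dP pX"
    and iY: "is_cmor C n Q dQ Yh dY iY" and pY: "is_cmor C n Yh dY Q dQ pY"
    and piX: "\<And>i. i \<le> Suc n \<Longrightarrow> Cp C (P i) (Xh i) (P i) (pX i) (iX i) = Idn C (P i)"
    and piY: "\<And>i. i \<le> Suc n \<Longrightarrow> Cp C (Q i) (Yh i) (Q i) (pY i) (iY i) = Idn C (Q i)"
    and e0: "iY 0 = iX 0" "pY 0 = pX 0" and e1: "iY (Suc n) = iX (Suc n)" "pY (Suc n) = pX (Suc n)"
  shows "heq C n A B P dP Q dQ"
proof -
  have P: "is_cx C n P dP" and Q: "is_cx C n Q dQ" using cP cQ cxAC_cx by auto
  have PQ: "P 0 = A" "Q 0 = A" "P (Suc n) = B" "Q (Suc n) = B" using cP cQ unfolding cxAC_def by auto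
  note mf = gmor_Hm[OF cmor_gmor[OF f]] and mg = gmor_Hm[OF cmor_gmor[OF g]]
   and miX = gmor_Hm[OF cmor_gmor[OF iX]] and mpX = gmor_Hm[OF cmor_gmor[OF pX]]
   and miY = gmor_Hm[OF cmor_gmor[OF iY]] and mpY = gmor_Hm[OF cmor_gmor[OF pY]]
  have piY': "Cp C (Q i) (Yh i) Z (Cp C (Yh i) (Q i) Z h (pY i)) (iY i) = h"
    if "i \<le> Suc n" "h \<in> Hm C (Q i) Z" for i Z h
    using that miY mpY piY by (simp flip: Cp_assoc)
  define w where "w = cadd Xh Yh (ccomp Xh Yh Yh (ccomp Yh Q Yh iY pY) f)
    (cneg Xh Yh (ccomp Xh Xh Yh f (ccomp Xh P Xh iX pX)))"
  define u where "u = ccomp P Xh Q (ccomp Xh Yh Q pY f) iX"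
  define v where "v = ccomp Q Yh P (ccomp Yh Xh P pX g) iY"
  define N where "N = ccomp P Xh P (ccomp Xh Yh P (ccomp Yh Xh P pX g) w) iX"
  define M where "M = ccomp Q Xh Q (ccomp Xh Yh Q pY (cneg Xh Yh w)) (ccomp Q Yh Xh g iY)"
  have w: "is_cmor C n Xh dX Yh dY w" unfolding w_def
    by (rule cmor_cadd[OF Xh Yh cmor_ccomp[OF Xh Yh Yh f cmor_ccomp[OF Yh Q Yh pY iY]]
          cmor_cneg[OF Xh Yh cmor_ccomp[OF Xh Xh Yh cmor_ccomp[OF Xh P Xh pX iX] f]]])
  have u: "is_cmor C n P dP Q dQ u" unfolding u_def
    by (rule cmor_ccomp[OF P Xh Q iX cmor_ccomp[OF Xh Yh Q f pY]])
  have v: "is_cmor C n Q dQ P dP v" unfolding v_def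
    by (rule cmor_ccomp[OF Q Yh P iY cmor_ccomp[OF Yh Xh P g pX]])
  have N: "is_cmor C n P dP P dP N" unfolding N_def
    by (rule cmor_ccomp[OF P Xh P iX cmor_ccomp[OF Xh Yh P w cmor_ccomp[OF Yh Xh P g pX]]])
  have M: "is_cmor C n Q dQ Q dQ M" unfolding M_def
    by (rule cmor_ccomp[OF Q Xh Q cmor_ccomp[OF Q Yh Xh iY g] cmor_ccomp[OF Xh Yh Q cmor_cneg[OF Xh Yh w] pY]])
  note mw = gmor_Hm[OF cmor_gmor[OF w]]
  have w0: "w 0 = Zr C (Xh 0) (Yh 0)" "cneg Xh Yh w 0 = Zr C (Xh 0) (Yh 0)"
    using mf[of 0] mpX[of 0] miX[of 0] f0 e0 XY0 PQ cx_Ob[OF Xh, of 0]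
    by (simp_all add: w_def ccomp_def cadd_def cneg_def)
  have w1: "w (Suc n) = Zr C (Xh (Suc n)) (Yh (Suc n))" "cneg Xh Yh w (Suc n) = Zr C (Xh (Suc n)) (Yh (Suc n))"
    using mf[of "Suc n"] mpX[of "Suc n"] miX[of "Suc n"] f1 e1 XY1 PQ cx_Ob[OF Xh, of "Suc n"]
    by (simp_all add: w_def ccomp_def cadd_def cneg_def)
  have vu: "homotopic C n P dP P dP (ccomp P Q P v u) (cadd P P (cidn P) N)"
    using retract_comp_homotopic[OF Xh Yh P Q f g gf iX pX iY pY piX]
    unfolding u_def v_def N_def w_def .
  have uv: "homotopic C n Q dQ Q dQ (ccomp Q P Q u v) (cadd Q Q (cidn Q) M)"
    using retract_comp_homotopic[OF Yh Xh Q P g f fg iY pY iX pX piY]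
    by (rule homotopic_cong)
      (use mf mg miX mpX miY mpY in \<open>simp_all add: u_def v_def M_def w_def cadd_def ccomp_def cneg_def
          Cp_assoc Cp_Ad_left Cp_Ad_right Cp_neg_left Cp_neg_right piY piY' neg_Ad Ad_commute\<close>)
  have NN: "homotopic C n P dP P dP (ccomp P P P N N) (czero P P)"
    unfolding N_def
    by (rule comp_square_null_homotopic[OF Xh Yh P exX w w0(1) w1(1) cmor_ccomp[OF Yh Xh P g pX] iX])
  have MM: "homotopic C n Q dQ Q dQ (ccomp Q Q Q M M) (czero Q Q)"
    unfolding M_def
    by (rule comp_square_null_homotopic[OF Xh Yh Q exX cmor_cneg[OF Xh Yh w] w0(2) w1(2) pY
          cmor_ccomp[OF Q Yh Xh iY g]])
  have u_ends: "u 0 = Idn C A" "u (Suc n) = Idn C B"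
    using mf[of 0] miX[of 0] mpX[of 0] piX[of 0] f0 e0 XY0 PQ
      mf[of "Suc n"] miX[of "Suc n"] mpX[of "Suc n"] piX[of "Suc n"] f1 e1 XY1
    by (simp_all add: u_def ccomp_def)
  have v_ends: "v 0 = Idn C A" "v (Suc n) = Idn C B"
    using mg[of 0] miY[of 0] mpY[of 0] piY[of 0] e0 XY0 PQ
      mg[of "Suc n"] miY[of "Suc n"] mpY[of "Suc n"] piY[of "Suc n"] e1 XY1 g0 g1
    by (simp_all add: v_def ccomp_def)
  have N_ends: "N 0 = Zr C A A" "N (Suc n) = Zr C B B"
    using mg[of 0] miX[of 0] mpX[of 0] w0 XY0 PQ mg[of "Suc n"] miX[of "Suc n"] mpX[of "Suc n"] w1 XY1
      cx_Ob[OF Xh, of 0] cx_Ob[OF Xh, of "Suc n"] cx_Ob[OF P, of 0] cx_Ob[OF P, of "Suc n"]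
    by (simp_all add: N_def ccomp_def)
  show ?thesis
    by (rule heq_of_inverse_up_to_nilpotent[OF cP cQ u v N M vu uv NN MM u_ends v_ends N_ends])
qed

end

section \<open>Additive functors\<close>

locale additive_functor = C: preadditive C + D: preadditive D
  for C :: "('o,'m) addcat" and D :: "('p,'q) addcat" +
  fixes Fo :: "'o \<Rightarrow> 'p" and Fm :: "'o \<Rightarrow> 'o \<Rightarrow> 'm \<Rightarrow> 'q"
  assumes add_functor: "is_add_functor C D Fo Fm"
begin

lemma Fo_Ob: "X \<in> Ob C \<Longrightarrow> Fo X \<in> Ob D"
  using add_functor unfolding is_add_functor_def by blast

lemma Fm_Hm: "f \<in> Hm C X Y \<Longrightarrow> Fm X Y f \<in> Hm D (Fo X) (Fo Y)"
  using add_functor C.Hm_Ob unfolding is_add_functor_def by blast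

lemma Fm_Idn: "X \<in> Ob C \<Longrightarrow> Fm X X (Idn C X) = Idn D (Fo X)"
  using add_functor unfolding is_add_functor_def by blast

lemma Fm_Cp: "f \<in> Hm C X Y \<Longrightarrow> g \<in> Hm C Y Z \<Longrightarrow>
   Fm X Z (Cp C X Y Z g f) = Cp D (Fo X) (Fo Y) (Fo Z) (Fm Y Z g) (Fm X Y f)"
  using add_functor C.Hm_Ob unfolding is_add_functor_def by metis

lemma Fm_Ad: "f \<in> Hm C X Y \<Longrightarrow> g \<in> Hm C X Y \<Longrightarrow>
   Fm X Y (Ad C X Y f g) = Ad D (Fo X) (Fo Y) (Fm X Y f) (Fm X Y g)"
  using add_functor C.Hm_Ob unfolding is_add_functor_def by metis

lemma Fm_Zr:
  assumes "X \<in> Ob C" "Y \<in> Ob C"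
  shows "Fm X Y (Zr C X Y) = Zr D (Fo X) (Fo Y)"
proof -
  have z: "Zr C X Y \<in> Hm C X Y" using assms by simp
  have m: "Fm X Y (Zr C X Y) \<in> Hm D (Fo X) (Fo Y)" using Fm_Hm[OF z] .
  have "Ad D (Fo X) (Fo Y) (Fm X Y (Zr C X Y)) (Fm X Y (Zr C X Y))
      = Ad D (Fo X) (Fo Y) (Fm X Y (Zr C X Y)) (Zr D (Fo X) (Fo Y))"
    using Fm_Ad[OF z z, symmetric] z m by simp
  then show ?thesis using D.Ad_left_cancel[OF m m] m D.Hm_Ob[OF m] by simp
qed

definition FX :: "(nat \<Rightarrow> 'o) \<Rightarrow> nat \<Rightarrow> 'p" where "FX X = (\<lambda>i. Fo (X i))"
definition Fd :: "(nat \<Rightarrow> 'o) \<Rightarrow> (nat \<Rightarrow> 'm) \<Rightarrow> nat \<Rightarrow> 'q" where "Fd X d = (\<lambda>i. Fm (X i) (X (Suc i)) (d i))"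
definition Ff :: "(nat \<Rightarrow> 'o) \<Rightarrow> (nat \<Rightarrow> 'o) \<Rightarrow> (nat \<Rightarrow> 'm) \<Rightarrow> nat \<Rightarrow> 'q" where "Ff X Y f = (\<lambda>i. Fm (X i) (Y i) (f i))"

lemma cx_map: assumes X: "is_cx C n X d" shows "is_cx D n (FX X) (Fd X d)"
  unfolding is_cx_def FX_def Fd_def
proof (intro conjI allI impI)
  fix i assume "i \<le> Suc n" then show "Fo (X i) \<in> Ob D" using Fo_Ob C.cx_Ob[OF X] by blast
next
  fix i assume "i \<le> n" then show "Fm (X i) (X (Suc i)) (d i) \<in> Hm D (Fo (X i)) (Fo (X (Suc i)))"
    using Fm_Hm C.cx_diff_Hm[OF X] by blast
next
  fix i assume i: "i < n"
  have m: "d i \<in> Hm C (X i) (X (Suc i))" "d (Suc i) \<in> Hm C (X (Suc i)) (X (Suc (Suc i)))" using C.cx_diff_Hm[OF X] i by auto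
  show "Cp D (Fo (X i)) (Fo (X (Suc i))) (Fo (X (Suc (Suc i)))) (Fm (X (Suc i)) (X (Suc (Suc i))) (d (Suc i))) (Fm (X i) (X (Suc i)) (d i)) =
       Zr D (Fo (X i)) (Fo (X (Suc (Suc i))))"
    using Fm_Cp[OF m, symmetric] C.cx_diff_diff[OF X i] Fm_Zr C.cx_Ob[OF X, of i] C.cx_Ob[OF X, of "Suc (Suc i)"] i by simp
qed

lemma cxAC_map: "cxAC C n A B X d \<Longrightarrow> cxAC D n (Fo A) (Fo B) (FX X) (Fd X d)"
  unfolding cxAC_def using cx_map by (auto simp: FX_def)

lemma gmor_map: "C.gmor n X Y f \<Longrightarrow> D.gmor n (FX X) (FX Y) (Ff X Y f)"
  unfolding C.gmor_def D.gmor_def FX_def Ff_def using Fm_Hm by blast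

lemma cmor_map: assumes X: "is_cx C n X d" and Y: "is_cx C n Y d'" and f: "is_cmor C n X d Y d' f"
  shows "is_cmor D n (FX X) (Fd X d) (FX Y) (Fd Y d') (Ff X Y f)"
proof (rule D.cmorI)
  fix i assume "i \<le> Suc n" then show "Ff X Y f i \<in> Hm D (FX X i) (FX Y i)"
    using gmor_map[OF C.cmor_gmor[OF f]] D.gmor_Hm by blast
next
  fix i assume i: "i \<le> n"
  have m: "d i \<in> Hm C (X i) (X (Suc i))" "d' i \<in> Hm C (Y i) (Y (Suc i))" "f i \<in> Hm C (X i) (Y i)"
    "f (Suc i) \<in> Hm C (X (Suc i)) (Y (Suc i))"
    using C.cx_diff_Hm[OF X] C.cx_diff_Hm[OF Y] C.gmor_Hm[OF C.cmor_gmor[OF f]] i by auto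
  show "Cp D (FX X i) (FX X (Suc i)) (FX Y (Suc i)) (Ff X Y f (Suc i)) (Fd X d i) = Cp D (FX X i) (FX Y i) (FX Y (Suc i)) (Fd Y d' i) (Ff X Y f i)"
    unfolding FX_def Ff_def Fd_def using Fm_Cp[OF m(1) m(4)] Fm_Cp[OF m(3) m(2)] C.cmor_commute[OF f i] by simp
qed

lemma htpy_term_map:
  assumes X: "is_cx C n X d" and Y: "is_cx C n Y d'" and p: "C.is_htpy n X Y \<phi>" and i: "i \<le> Suc n"
  shows "Fm (X i) (Y i) (C.htpy_term n X d Y d' \<phi> i) = D.htpy_term n (FX X) (Fd X d) (FX Y) (Fd Y d') (\<lambda>i. Fm (X i) (Y (i - 1)) (\<phi> i)) i"
  using i
proof (rule C.degree_cases)
  assume a: "i = 0" "i \<noteq> Suc n"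
  have m: "\<phi> (Suc 0) \<in> Hm C (X (Suc 0)) (Y 0)" "d 0 \<in> Hm C (X 0) (X (Suc 0))"
    using C.is_htpy_Hm[OF p, of 1] C.cx_diff_Hm[OF X, of 0] a by auto
  show ?thesis using a m C.Hm_Ob[OF m(1)] C.Hm_Ob[OF m(2)] Fm_Hm[OF m(1)] Fm_Hm[OF m(2)]
    by (simp add: C.htpy_term_0 D.htpy_term_0 FX_def Fd_def Fm_Ad Fm_Cp Fm_Zr Fo_Ob)
next
  assume a: "i = Suc n" "i \<noteq> 0"
  have m: "\<phi> (Suc n) \<in> Hm C (X (Suc n)) (Y n)" "d' n \<in> Hm C (Y n) (Y (Suc n))"
    using C.is_htpy_Hm[OF p, of "Suc n"] C.cx_diff_Hm[OF Y, of n] by auto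
  show ?thesis using a m C.Hm_Ob[OF m(1)] C.Hm_Ob[OF m(2)] Fm_Hm[OF m(1)] Fm_Hm[OF m(2)]
    by (simp add: C.htpy_term_top D.htpy_term_top FX_def Fd_def Fm_Ad Fm_Cp Fm_Zr Fo_Ob)
next
  assume a: "i \<noteq> 0" "i \<noteq> Suc n" "i \<le> n"
  then obtain j where j: "i = Suc j" by (cases i) auto
  have m: "\<phi> (Suc j) \<in> Hm C (X (Suc j)) (Y j)" "d' j \<in> Hm C (Y j) (Y (Suc j))"
    "\<phi> (Suc (Suc j)) \<in> Hm C (X (Suc (Suc j))) (Y (Suc j))" "d (Suc j) \<in> Hm C (X (Suc j)) (X (Suc (Suc j)))"
    using C.is_htpy_Hm[OF p, of i] C.is_htpy_Hm[OF p, of "Suc i"] C.cx_diff_Hm[OF Y, of j] C.cx_diff_Hm[OF X, of i] a j by auto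
  show ?thesis using a j m Fm_Hm[OF m(1)] Fm_Hm[OF m(2)] Fm_Hm[OF m(3)] Fm_Hm[OF m(4)]
    by (simp add: C.htpy_term_mid D.htpy_term_mid FX_def Fd_def Fm_Ad Fm_Cp)
qed

lemma homotopic_map:
  assumes X: "is_cx C n X d" and Y: "is_cx C n Y d'" and g: "C.gmor n X Y g"
    and h: "homotopic C n X d Y d' f g"
  shows "homotopic D n (FX X) (Fd X d) (FX Y) (Fd Y d') (Ff X Y f) (Ff X Y g)"
proof -
  obtain \<phi> where p: "C.is_htpy n X Y \<phi>" and e: "\<And>i. i \<le> Suc n \<Longrightarrow> f i = Ad C (X i) (Y i) (g i) (C.htpy_term n X d Y d' \<phi> i)"
    using h unfolding C.homotopic_iff by blast
  have p': "D.is_htpy n (FX X) (FX Y) (\<lambda>i. Fm (X i) (Y (i - 1)) (\<phi> i))"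
    unfolding D.is_htpy_def FX_def using C.is_htpy_Hm[OF p] Fm_Hm by simp
  show ?thesis
  proof (rule D.homotopicI[OF p'])
    fix i assume i: "i \<le> Suc n"
    show "Ff X Y f i = Ad D (FX X i) (FX Y i) (Ff X Y g i) (D.htpy_term n (FX X) (Fd X d) (FX Y) (Fd Y d') (\<lambda>i. Fm (X i) (Y (i - 1)) (\<phi> i)) i)"
      using e[OF i] Fm_Ad[OF C.gmor_Hm[OF g i] C.htpy_term_Hm[OF X Y p i]] htpy_term_map[OF X Y p i]
      by (simp add: Ff_def FX_def)
  qed
qed

lemma heq_map:
  assumes h: "heq C n A B X d Y d'"
  shows "heq D n (Fo A) (Fo B) (FX X) (Fd X d) (FX Y) (Fd Y d')"
proof -
  have cX: "cxAC C n A B X d" and cY: "cxAC C n A B Y d'" using h unfolding heq_def by blast+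
  have X: "is_cx C n X d" and Y: "is_cx C n Y d'" using cX cY C.cxAC_cx by blast+
  obtain f g where f: "is_cmor C n X d Y d' f" and f0: "f 0 = Idn C A" and f1: "f (Suc n) = Idn C B"
    and g: "is_cmor C n Y d' X d g" and g0: "g 0 = Idn C A" and g1: "g (Suc n) = Idn C B"
    and gf: "homotopic C n X d X d (C.ccomp X Y X g f) (C.cidn X)" and fg: "homotopic C n Y d' Y d' (C.ccomp Y X Y f g) (C.cidn Y)"
    using h unfolding C.heq_iff by blast
  have A: "A = X 0" "B = X (Suc n)" using cX unfolding cxAC_def by auto
  have oA: "A \<in> Ob C" "B \<in> Ob C" using C.cx_Ob[OF X, of 0] C.cx_Ob[OF X, of "Suc n"] A by auto
  have gf': "homotopic D n (FX X) (Fd X d) (FX X) (Fd X d) (D.ccomp (FX X) (FX Y) (FX X) (Ff Y X g) (Ff X Y f)) (D.cidn (FX X))"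
    by (rule D.homotopic_cong[OF homotopic_map[OF X X C.gmor_cidn[OF X] gf]])
      (use C.gmor_Hm[OF C.cmor_gmor[OF f]] C.gmor_Hm[OF C.cmor_gmor[OF g]] C.cx_Ob[OF X] in \<open>auto simp: Ff_def FX_def C.ccomp_def D.ccomp_def C.cidn_def D.cidn_def Fm_Cp Fm_Idn\<close>)
  have fg': "homotopic D n (FX Y) (Fd Y d') (FX Y) (Fd Y d') (D.ccomp (FX Y) (FX X) (FX Y) (Ff X Y f) (Ff Y X g)) (D.cidn (FX Y))"
    by (rule D.homotopic_cong[OF homotopic_map[OF Y Y C.gmor_cidn[OF Y] fg]])
      (use C.gmor_Hm[OF C.cmor_gmor[OF f]] C.gmor_Hm[OF C.cmor_gmor[OF g]] C.cx_Ob[OF Y] in \<open>auto simp: Ff_def FX_def C.ccomp_def D.ccomp_def C.cidn_def D.cidn_def Fm_Cp Fm_Idn\<close>)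
  have e: "Ff X Y f 0 = Idn D (Fo A)" "Ff X Y f (Suc n) = Idn D (Fo B)" "Ff Y X g 0 = Idn D (Fo A)" "Ff Y X g (Suc n) = Idn D (Fo B)"
    using f0 f1 g0 g1 oA A cY unfolding cxAC_def by (auto simp: Ff_def Fm_Idn)
  show ?thesis unfolding D.heq_iff
    using cxAC_map[OF cX] cxAC_map[OF cY] cmor_map[OF X Y f] cmor_map[OF Y X g] e gf' fg' by blast
qed

lemma idem_cmor_map: assumes X: "is_cx C n X d" and e: "C.idem_cmor n X d e"
  shows "D.idem_cmor n (FX X) (Fd X d) (Ff X X e)"
  unfolding D.idem_cmor_def
proof
  show "is_cmor D n (FX X) (Fd X d) (FX X) (Fd X d) (Ff X X e)"
    using cmor_map[OF X X] e unfolding C.idem_cmor_def by blast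
  show "\<forall>i\<le>Suc n. Cp D (FX X i) (FX X i) (FX X i) (Ff X X e i) (Ff X X e i) = Ff X X e i"
    using C.idem_Hm[OF e] C.idem_idem[OF e] by (simp add: FX_def Ff_def flip: Fm_Cp)
qed

end

section \<open>The idempotent completion\<close>

context preadditive begin

lemma ic_Ob: "(X, e) \<in> Ob (ic C) \<longleftrightarrow> X \<in> Ob C \<and> e \<in> Hm C X X \<and> Cp C X X X e e = e"
  unfolding ic_def by simp

lemma ic_Hm: "x \<in> Hm (ic C) (X, eX) (Y, eY) \<longleftrightarrow> (X, eX) \<in> Ob (ic C) \<and> (Y, eY) \<in> Ob (ic C) \<and>
   (\<exists>f. x = (eY, f, eX) \<and> f \<in> Hm C X Y \<and> Cp C X X Y f eX = f \<and> Cp C X Y Y eY f = f)"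
  unfolding ic_def by auto

lemma ic_Hm_triple: "(a, f, b) \<in> Hm (ic C) (X, eX) (Y, eY) \<longleftrightarrow> (X, eX) \<in> Ob (ic C) \<and> (Y, eY) \<in> Ob (ic C) \<and>
   a = eY \<and> b = eX \<and> f \<in> Hm C X Y \<and> Cp C X X Y f eX = f \<and> Cp C X Y Y eY f = f"
  unfolding ic_Hm by auto

lemma ic_Cp[simp]: "Cp (ic C) (X, eX) (Y, eY) (Z, eZ) (a, g, b) (a', f, b') = (eZ, Cp C X Y Z g f, eX)"
  unfolding ic_def by simp
lemma ic_Idn[simp]: "Idn (ic C) (X, e) = (e, e, e)"
  unfolding ic_def by simp
lemma ic_Ad[simp]: "Ad (ic C) (X, eX) (Y, eY) (a, f, b) (a', g, b') = (eY, Ad C X Y f g, eX)"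
  unfolding ic_def by simp
lemma ic_Zr[simp]: "Zr (ic C) (X, eX) (Y, eY) = (eY, Zr C X Y, eX)"
  unfolding ic_def by simp

lemma ic_category: "is_category (ic C)"
  unfolding is_category_def
  by (auto simp: ic_Hm ic_Ob Cp_assoc split_paired_all) (metis Cp_assoc)+

lemma ic_hom_comm_group:
  assumes XO: "X \<in> Ob (ic C)" and YO: "Y \<in> Ob (ic C)"
  shows "comm_group (hom_group (ic C) X Y)"
proof -
  obtain X1 X2 Y1 Y2 where o: "X = (X1, X2)" "Y = (Y1, Y2)" by (cases X, cases Y) auto
  have ob: "X1 \<in> Ob C" "X2 \<in> Hm C X1 X1" "Cp C X1 X1 X1 X2 X2 = X2" "Y1 \<in> Ob C" "Y2 \<in> Hm C Y1 Y1" "Cp C Y1 Y1 Y1 Y2 Y2 = Y2"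
    using XO YO unfolding o ic_Ob by auto
  have car: "x \<in> carrier (hom_group (ic C) X Y) \<longleftrightarrow> (\<exists>f. x = (Y2, f, X2) \<and> f \<in> Hm C X1 Y1 \<and> Cp C X1 X1 Y1 f X2 = f \<and> Cp C X1 Y1 Y1 Y2 f = f)" for x
    using XO YO unfolding o hom_group_def by (simp add: ic_Hm)
  show ?thesis
  proof (rule comm_groupI)
    fix x y assume "x \<in> carrier (hom_group (ic C) X Y)" "y \<in> carrier (hom_group (ic C) X Y)"
    then obtain f g where "x = (Y2, f, X2)" "f \<in> Hm C X1 Y1" "Cp C X1 X1 Y1 f X2 = f" "Cp C X1 Y1 Y1 Y2 f = f"
      "y = (Y2, g, X2)" "g \<in> Hm C X1 Y1" "Cp C X1 X1 Y1 g X2 = g" "Cp C X1 Y1 Y1 Y2 g = g" unfolding car by blast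
    then show "x \<otimes>\<^bsub>hom_group (ic C) X Y\<^esub> y \<in> carrier (hom_group (ic C) X Y)"
      "x \<otimes>\<^bsub>hom_group (ic C) X Y\<^esub> y = y \<otimes>\<^bsub>hom_group (ic C) X Y\<^esub> x"
      using ob unfolding car by (auto simp: hom_group_def o Cp_Ad_left Cp_Ad_right Ad_commute)
  next
    show "\<one>\<^bsub>hom_group (ic C) X Y\<^esub> \<in> carrier (hom_group (ic C) X Y)"
      using ob unfolding car by (auto simp: hom_group_def o)
  next
    fix x y z assume "x \<in> carrier (hom_group (ic C) X Y)" "y \<in> carrier (hom_group (ic C) X Y)" "z \<in> carrier (hom_group (ic C) X Y)"
    then obtain f g h where "x = (Y2, f, X2)" "f \<in> Hm C X1 Y1" "y = (Y2, g, X2)" "g \<in> Hm C X1 Y1" "z = (Y2, h, X2)" "h \<in> Hm C X1 Y1"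
      unfolding car by blast
    then show "x \<otimes>\<^bsub>hom_group (ic C) X Y\<^esub> y \<otimes>\<^bsub>hom_group (ic C) X Y\<^esub> z = x \<otimes>\<^bsub>hom_group (ic C) X Y\<^esub> (y \<otimes>\<^bsub>hom_group (ic C) X Y\<^esub> z)"
      by (auto simp: hom_group_def o Ad_assoc)
  next
    fix x assume "x \<in> carrier (hom_group (ic C) X Y)"
    then obtain f where "x = (Y2, f, X2)" "f \<in> Hm C X1 Y1" unfolding car by blast
    then show "\<one>\<^bsub>hom_group (ic C) X Y\<^esub> \<otimes>\<^bsub>hom_group (ic C) X Y\<^esub> x = x"
      by (auto simp: hom_group_def o)
  next
    fix x assume "x \<in> carrier (hom_group (ic C) X Y)"
    then obtain f where x: "x = (Y2, f, X2)" "f \<in> Hm C X1 Y1" "Cp C X1 X1 Y1 f X2 = f" "Cp C X1 Y1 Y1 Y2 f = f" unfolding car by blast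
    have "(Y2, neg X1 Y1 f, X2) \<in> carrier (hom_group (ic C) X Y)"
      using x ob unfolding car by (auto simp: Cp_neg_left Cp_neg_right)
    moreover have "(Y2, neg X1 Y1 f, X2) \<otimes>\<^bsub>hom_group (ic C) X Y\<^esub> x = \<one>\<^bsub>hom_group (ic C) X Y\<^esub>"
      using x by (auto simp: hom_group_def o)
    ultimately show "\<exists>y\<in>carrier (hom_group (ic C) X Y). y \<otimes>\<^bsub>hom_group (ic C) X Y\<^esub> x = \<one>\<^bsub>hom_group (ic C) X Y\<^esub>" by blast
  qed
qed

lemma ic_preadditive: "is_preadditive (ic C)"
  unfolding is_preadditive_def
  using ic_category ic_hom_comm_group
  by (auto simp: ic_Hm Cp_Ad_left Cp_Ad_right split_paired_all)

end

lemma preadditive_ic: "preadditive C \<Longrightarrow> preadditive (ic C)"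
  using preadditive.ic_preadditive preadditive_def by blast

context additive_functor begin

lemma ic_add_functor: "is_add_functor (ic C) (ic D) (icFo Fo Fm) (icFm Fm)"
  unfolding is_add_functor_def
proof (intro conjI ballI)
  fix X assume a: "X \<in> Ob (ic C)"
  obtain X1 X2 where o: "X = (X1, X2)" by (cases X) auto
  show "icFo Fo Fm X \<in> Ob (ic D)"
    using a unfolding o by (auto simp: icFo_def C.ic_Ob D.ic_Ob Fo_Ob Fm_Hm simp flip: Fm_Cp)
next
  fix X Y f assume a: "X \<in> Ob (ic C)" "Y \<in> Ob (ic C)" "f \<in> Hm (ic C) X Y"
  obtain X1 X2 Y1 Y2 where o: "X = (X1, X2)" "Y = (Y1, Y2)" by (cases X, cases Y) auto
  obtain f1 f2 f3 where fg: "f = (f1, f2, f3)" by (cases f) auto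
  show "icFm Fm X Y f \<in> Hm (ic D) (icFo Fo Fm X) (icFo Fo Fm Y)"
    using a unfolding o fg by (auto simp: icFo_def icFm_def C.ic_Ob D.ic_Ob C.ic_Hm_triple D.ic_Hm_triple Fo_Ob Fm_Hm simp flip: Fm_Cp)
next
  fix X assume a: "X \<in> Ob (ic C)"
  obtain X1 X2 where o: "X = (X1, X2)" by (cases X) auto
  show "icFm Fm X X (Idn (ic C) X) = Idn (ic D) (icFo Fo Fm X)"
    using a unfolding o by (auto simp: icFo_def icFm_def)
next
  fix X Y Z f g assume a: "X \<in> Ob (ic C)" "Y \<in> Ob (ic C)" "Z \<in> Ob (ic C)" "f \<in> Hm (ic C) X Y" "g \<in> Hm (ic C) Y Z"
  obtain X1 X2 Y1 Y2 Z1 Z2 where o: "X = (X1, X2)" "Y = (Y1, Y2)" "Z = (Z1, Z2)" by (cases X, cases Y, cases Z) auto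
  obtain f1 f2 f3 g1 g2 g3 where fg: "f = (f1, f2, f3)" "g = (g1, g2, g3)" by (cases f, cases g) auto
  show "icFm Fm X Z (Cp (ic C) X Y Z g f) = Cp (ic D) (icFo Fo Fm X) (icFo Fo Fm Y) (icFo Fo Fm Z) (icFm Fm Y Z g) (icFm Fm X Y f)"
    using a unfolding o fg by (auto simp: icFo_def icFm_def C.ic_Hm_triple Fm_Cp)
next
  fix X Y f g assume a: "X \<in> Ob (ic C)" "Y \<in> Ob (ic C)" "f \<in> Hm (ic C) X Y" "g \<in> Hm (ic C) X Y"
  obtain X1 X2 Y1 Y2 where o: "X = (X1, X2)" "Y = (Y1, Y2)" by (cases X, cases Y) auto
  obtain f1 f2 f3 g1 g2 g3 where fg: "f = (f1, f2, f3)" "g = (g1, g2, g3)" by (cases f, cases g) auto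
  show "icFm Fm X Y (Ad (ic C) X Y f g) = Ad (ic D) (icFo Fo Fm X) (icFo Fo Fm Y) (icFm Fm X Y f) (icFm Fm X Y g)"
    using a unfolding o fg by (auto simp: icFo_def icFm_def C.ic_Hm_triple Fm_Ad)
qed

end

context preadditive begin

lemma incl_add_functor: "is_add_functor C (ic C) (\<lambda>X. (X, Idn C X)) (\<lambda>X Y f. (Idn C Y, f, Idn C X))"
  unfolding is_add_functor_def
  by (auto simp: ic_Ob ic_Hm_triple)

lemma incl_additive_functor: "additive_functor C (ic C) (\<lambda>X. (X, Idn C X)) (\<lambda>X Y f. (Idn C Y, f, Idn C X))"
  unfolding additive_functor_def additive_functor_axioms_def using preadditive_ic preadditive_axioms incl_add_functor by blast

lemma lift_fst: "fst (lift_cx C X d e) = (\<lambda>i. (X i, e i))" unfolding lift_cx_def by simp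
lemma lift_snd:
  "snd (lift_cx C X d e) = (\<lambda>i. (e (Suc i), Cp C (X i) (X (Suc i)) (X (Suc i)) (e (Suc i)) (d i), e i))"
  unfolding lift_cx_def by simp

lemma cxAC_lift_cx:
  assumes X: "is_cx C n X d" and e: "idem_cmor n X d e"
  shows "cxAC (ic C) n (X 0, e 0) (X (Suc n), e (Suc n)) (fst (lift_cx C X d e)) (snd (lift_cx C X d e))"
  unfolding cxAC_def is_cx_def lift_fst lift_snd
proof (intro conjI allI impI)
  fix i assume i: "i \<le> Suc n"
  show "(X i, e i) \<in> Ob (ic C)" using idem_Hm[OF e i] idem_idem[OF e i] cx_Ob[OF X i] by (simp add: ic_Ob)
next
  fix i assume i: "i \<le> n"
  have m: "e i \<in> Hm C (X i) (X i)" "e (Suc i) \<in> Hm C (X (Suc i)) (X (Suc i))" "d i \<in> Hm C (X i) (X (Suc i))"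
    using idem_Hm[OF e] cx_diff_Hm[OF X] i by auto
  have ee: "Cp C (X i) (X i) (X i) (e i) (e i) = e i" "Cp C (X (Suc i)) (X (Suc i)) (X (Suc i)) (e (Suc i)) (e (Suc i)) = e (Suc i)"
    using idem_idem[OF e] i by auto
  have c: "Cp C (X i) (X (Suc i)) (X (Suc i)) (e (Suc i)) (d i) = Cp C (X i) (X i) (X (Suc i)) (d i) (e i)"
    using idem_commute[OF e i] .
  have 1: "Cp C (X i) (X i) (X (Suc i)) (Cp C (X i) (X (Suc i)) (X (Suc i)) (e (Suc i)) (d i)) (e i) = Cp C (X i) (X (Suc i)) (X (Suc i)) (e (Suc i)) (d i)"
    unfolding c using m ee by (simp flip: Cp_assoc)
  have 2: "Cp C (X i) (X (Suc i)) (X (Suc i)) (e (Suc i)) (Cp C (X i) (X (Suc i)) (X (Suc i)) (e (Suc i)) (d i)) = Cp C (X i) (X (Suc i)) (X (Suc i)) (e (Suc i)) (d i)"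
    using m ee by (simp add: Cp_assoc)
  show "(e (Suc i), Cp C (X i) (X (Suc i)) (X (Suc i)) (e (Suc i)) (d i), e i) \<in> Hm (ic C) (X i, e i) (X (Suc i), e (Suc i))"
    using m ee 1 2 cx_Ob[OF X, of i] cx_Ob[OF X, of "Suc i"] i by (simp add: ic_Hm_triple ic_Ob)
next
  fix i assume i: "i < n"
  define X0 X1 X2 where "X0 = X i" and "X1 = X (Suc i)" and "X2 = X (Suc (Suc i))"
  define e0 e1 e2 d0 d1 where "e0 = e i" and "e1 = e (Suc i)" and "e2 = e (Suc (Suc i))"
    and "d0 = d i" and "d1 = d (Suc i)"
  have m: "e0 \<in> Hm C X0 X0" "e1 \<in> Hm C X1 X1" "d0 \<in> Hm C X0 X1" "d1 \<in> Hm C X1 X2" "X2 \<in> Ob C"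
    using idem_Hm[OF e] cx_diff_Hm[OF X] cx_Ob[OF X, of "Suc (Suc i)"] i
    unfolding X0_def X1_def X2_def e0_def e1_def d0_def d1_def by auto
  have e1e1: "Cp C X1 X1 X1 e1 e1 = e1"
    using idem_idem[OF e, of "Suc i"] i unfolding X1_def e1_def by simp
  have c0: "Cp C X0 X1 X1 e1 d0 = Cp C X0 X0 X1 d0 e0" and c1: "Cp C X1 X2 X2 e2 d1 = Cp C X1 X1 X2 d1 e1"
    using idem_commute[OF e, of i] idem_commute[OF e, of "Suc i"] i
    unfolding X0_def X1_def X2_def e0_def e1_def e2_def d0_def d1_def by auto
  have dd: "Cp C X0 X1 X2 d1 d0 = Zr C X0 X2"
    using cx_diff_diff[OF X i] unfolding X0_def X1_def X2_def d0_def d1_def .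
  have "Cp C X0 X1 X2 (Cp C X1 X2 X2 e2 d1) (Cp C X0 X1 X1 e1 d0)
      = Cp C X0 X1 X2 d1 (Cp C X0 X1 X1 (Cp C X1 X1 X1 e1 e1) d0)"
    using m by (simp add: c1 Cp_assoc)
  also have "\<dots> = Cp C X0 X0 X2 (Cp C X0 X1 X2 d1 d0) e0"
    using m by (simp add: e1e1 c0 flip: Cp_assoc)
  also have "\<dots> = Zr C X0 X2"
    using m dd by simp
  finally show "Cp (ic C) (X i, e i) (X (Suc i), e (Suc i)) (X (Suc (Suc i)), e (Suc (Suc i)))
        (e (Suc (Suc i)), Cp C (X (Suc i)) (X (Suc (Suc i))) (X (Suc (Suc i))) (e (Suc (Suc i))) (d (Suc i)), e (Suc i))
        (e (Suc i), Cp C (X i) (X (Suc i)) (X (Suc i)) (e (Suc i)) (d i), e i) =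
      Zr (ic C) (X i, e i) (X (Suc (Suc i)), e (Suc (Suc i)))"
    unfolding X0_def X1_def X2_def e0_def e1_def e2_def d0_def d1_def by simp
qed auto

lemma hom_exact_incl:
  assumes X: "is_cx C n X d" and ex: "hom_exact n X d"
  shows "preadditive.hom_exact (ic C) n (\<lambda>i. (X i, Idn C (X i))) (\<lambda>i. (Idn C (X (Suc i)), d i, Idn C (X i)))"
  unfolding preadditive.hom_exact_def[OF preadditive_ic[OF preadditive_axioms]]
proof (intro ballI allI impI)
  fix W i h
  assume W: "W \<in> Ob (ic C)" and i: "1 \<le> i \<and> i \<le> n"
    and h: "h \<in> Hm (ic C) (X i, Idn C (X i)) W"
    and z: "Cp (ic C) (X (i - 1), Idn C (X (i - 1))) (X i, Idn C (X i)) W h (Idn C (X (Suc (i - 1))), d (i - 1), Idn C (X (i - 1))) =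
       Zr (ic C) (X (i - 1), Idn C (X (i - 1))) W"
  obtain j where j: "i = Suc j" using i by (cases i) auto
  obtain W1 W2 where o: "W = (W1, W2)" by (cases W) auto
  obtain h1 h2 h3 where hh: "h = (h1, h2, h3)" by (cases h) auto
  have hf: "h1 = W2" "h3 = Idn C (X i)" "h2 \<in> Hm C (X i) W1" "Cp C (X i) W1 W1 W2 h2 = h2"
    using h unfolding o hh ic_Hm_triple by auto
  have Wf: "W1 \<in> Ob C" "W2 \<in> Hm C W1 W1" "Cp C W1 W1 W1 W2 W2 = W2" using W unfolding o ic_Ob by auto
  have z': "Cp C (X j) (X (Suc j)) W1 h2 (d j) = Zr C (X j) W1"
    using z unfolding o hh j by simp
  obtain h' where h': "h' \<in> Hm C (X (Suc (Suc j))) W1" "h2 = Cp C (X (Suc j)) (X (Suc (Suc j))) W1 h' (d (Suc j))"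
    using hom_exactD[OF ex Wf(1) _ _ z'] hf i j by auto
  have dj: "d (Suc j) \<in> Hm C (X (Suc j)) (X (Suc (Suc j)))" using cx_diff_Hm[OF X, of "Suc j"] i j by simp
  have ob: "X (Suc (Suc j)) \<in> Ob C" using cx_Ob[OF X, of "Suc (Suc j)"] i j by simp
  have m: "(W2, Cp C (X (Suc (Suc j))) W1 W1 W2 h', Idn C (X (Suc (Suc j)))) \<in> Hm (ic C) (X (Suc i), Idn C (X (Suc i))) W"
    unfolding o j ic_Hm_triple using W o h' Wf ob by (simp add: ic_Ob Cp_assoc)
  have e: "h = Cp (ic C) (X i, Idn C (X i)) (X (Suc i), Idn C (X (Suc i))) W (W2, Cp C (X (Suc (Suc j))) W1 W1 W2 h', Idn C (X (Suc (Suc j)))) (Idn C (X (Suc i)), d i, Idn C (X i))"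
  proof -
    have "Cp C (X (Suc j)) (X (Suc (Suc j))) W1 (Cp C (X (Suc (Suc j))) W1 W1 W2 h') (d (Suc j)) = Cp C (X (Suc j)) W1 W1 W2 h2"
      using h'(1) dj Wf by (simp add: h'(2) Cp_assoc)
    then show ?thesis unfolding o hh j using hf j by simp
  qed
  show "\<exists>h'\<in>Hm (ic C) (X (Suc i), Idn C (X (Suc i))) W.
            h = Cp (ic C) (X i, Idn C (X i)) (X (Suc i), Idn C (X (Suc i))) W h' (Idn C (X (Suc i)), d i, Idn C (X i))"
    using m e j by blast
qed

lemma cmor_lift_incl:
  assumes X: "is_cx C n X d" and e: "idem_cmor n X d e"
  shows "is_cmor (ic C) n (fst (lift_cx C X d e)) (snd (lift_cx C X d e)) (\<lambda>i. (X i, Idn C (X i))) (\<lambda>i. (Idn C (X (Suc i)), d i, Idn C (X i)))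
     (\<lambda>i. (Idn C (X i), e i, e i))"
  unfolding is_cmor_def lift_fst lift_snd
proof (intro conjI allI impI)
  fix i assume i: "i \<le> Suc n"
  show "(Idn C (X i), e i, e i) \<in> Hm (ic C) (X i, e i) (X i, Idn C (X i))"
    using idem_Hm[OF e i] idem_idem[OF e i] cx_Ob[OF X i] by (simp add: ic_Hm_triple ic_Ob)
next
  fix i assume i: "i \<le> n"
  have m: "e i \<in> Hm C (X i) (X i)" "e (Suc i) \<in> Hm C (X (Suc i)) (X (Suc i))" "d i \<in> Hm C (X i) (X (Suc i))"
    using idem_Hm[OF e] cx_diff_Hm[OF X] i by auto
  have "Cp C (X i) (X (Suc i)) (X (Suc i)) (e (Suc i)) (Cp C (X i) (X (Suc i)) (X (Suc i)) (e (Suc i)) (d i)) = Cp C (X i) (X i) (X (Suc i)) (d i) (e i)"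
  proof -
    have "Cp C (X i) (X (Suc i)) (X (Suc i)) (e (Suc i)) (Cp C (X i) (X (Suc i)) (X (Suc i)) (e (Suc i)) (d i))
      = Cp C (X i) (X (Suc i)) (X (Suc i)) (Cp C (X (Suc i)) (X (Suc i)) (X (Suc i)) (e (Suc i)) (e (Suc i))) (d i)"
      using m Cp_assoc[of "d i" "X i" "X (Suc i)" "e (Suc i)" "X (Suc i)" "e (Suc i)" "X (Suc i)"] by simp
    then show ?thesis using idem_idem[OF e, of "Suc i"] idem_commute[OF e i] i by simp
  qed
  then show "Cp (ic C) (X i, e i) (X (Suc i), e (Suc i)) (X (Suc i), Idn C (X (Suc i))) (Idn C (X (Suc i)), e (Suc i), e (Suc i))
        (e (Suc i), Cp C (X i) (X (Suc i)) (X (Suc i)) (e (Suc i)) (d i), e i) =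
       Cp (ic C) (X i, e i) (X i, Idn C (X i)) (X (Suc i), Idn C (X (Suc i))) (Idn C (X (Suc i)), d i, Idn C (X i))
        (Idn C (X i), e i, e i)" by simp
qed

lemma cmor_lift_proj:
  assumes X: "is_cx C n X d" and e: "idem_cmor n X d e"
  shows "is_cmor (ic C) n (\<lambda>i. (X i, Idn C (X i))) (\<lambda>i. (Idn C (X (Suc i)), d i, Idn C (X i))) (fst (lift_cx C X d e)) (snd (lift_cx C X d e))
     (\<lambda>i. (e i, e i, Idn C (X i)))"
  unfolding is_cmor_def lift_fst lift_snd
proof (intro conjI allI impI)
  fix i assume i: "i \<le> Suc n"
  show "(e i, e i, Idn C (X i)) \<in> Hm (ic C) (X i, Idn C (X i)) (X i, e i)"
    using idem_Hm[OF e i] idem_idem[OF e i] cx_Ob[OF X i] by (simp add: ic_Hm_triple ic_Ob)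
next
  fix i assume i: "i \<le> n"
  have m: "e i \<in> Hm C (X i) (X i)" "e (Suc i) \<in> Hm C (X (Suc i)) (X (Suc i))" "d i \<in> Hm C (X i) (X (Suc i))"
    using idem_Hm[OF e] cx_diff_Hm[OF X] i by auto
  have "Cp C (X i) (X i) (X (Suc i)) (Cp C (X i) (X (Suc i)) (X (Suc i)) (e (Suc i)) (d i)) (e i) = Cp C (X i) (X (Suc i)) (X (Suc i)) (e (Suc i)) (d i)"
  proof -
    have "Cp C (X i) (X i) (X (Suc i)) (Cp C (X i) (X i) (X (Suc i)) (d i) (e i)) (e i) = Cp C (X i) (X i) (X (Suc i)) (d i) (Cp C (X i) (X i) (X i) (e i) (e i))"
      using m Cp_assoc[of "e i" "X i" "X i" "e i" "X i" "d i" "X (Suc i)"] by simp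
    then show ?thesis unfolding idem_commute[OF e i] using idem_idem[OF e, of i] i by simp
  qed
  then show "Cp (ic C) (X i, Idn C (X i)) (X (Suc i), Idn C (X (Suc i))) (X (Suc i), e (Suc i)) (e (Suc i), e (Suc i), Idn C (X (Suc i)))
        (Idn C (X (Suc i)), d i, Idn C (X i)) =
       Cp (ic C) (X i, Idn C (X i)) (X i, e i) (X (Suc i), e (Suc i)) (e (Suc i), Cp C (X i) (X (Suc i)) (X (Suc i)) (e (Suc i)) (d i), e i)
        (e i, e i, Idn C (X i))" by simp
qed

lemma lift_proj_incl:
  assumes e: "idem_cmor n X d e" and i: "i \<le> Suc n"
  shows "Cp (ic C) (fst (lift_cx C X d e) i) (X i, Idn C (X i)) (fst (lift_cx C X d e) i) (e i, e i, Idn C (X i)) (Idn C (X i), e i, e i)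
    = Idn (ic C) (fst (lift_cx C X d e) i)"
  using idem_idem[OF e i] by (simp add: lift_fst)

text \<open>\<open>(X, e)\<close> and \<open>(Y, e')\<close> are retracts of the images of \<open>X\<close> and \<open>Y\<close> under the inclusion of
  \<open>C\<close> into its idempotent completion, so \<open>retracts_heq\<close> applies.\<close>

lemma lift_cx_heq:
  assumes X: "is_cx C n X dX" and Y: "is_cx C n Y dY" and exX: "hom_exact n X dX"
    and hXY: "heq C n A B X dX Y dY"
    and eX: "idem_cmor n X dX e" and eY: "idem_cmor n Y dY e'"
    and e0: "e' 0 = e 0" and e1: "e' (Suc n) = e (Suc n)"
  shows "heq (ic C) n (A, e 0) (B, e (Suc n)) (fst (lift_cx C X dX e)) (snd (lift_cx C X dX e))
           (fst (lift_cx C Y dY e')) (snd (lift_cx C Y dY e'))"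
proof -
  interpret K: preadditive "ic C" using preadditive_ic[OF preadditive_axioms] .
  interpret J: additive_functor C "ic C" "\<lambda>X. (X, Idn C X)" "\<lambda>X Y f. (Idn C Y, f, Idn C X)"
    using incl_additive_functor .
  define JX where "JX = (\<lambda>i. (X i, Idn C (X i)))"
  define JdX where "JdX = (\<lambda>i. (Idn C (X (Suc i)), dX i, Idn C (X i)))"
  define JY where "JY = (\<lambda>i. (Y i, Idn C (Y i)))"
  define JdY where "JdY = (\<lambda>i. (Idn C (Y (Suc i)), dY i, Idn C (Y i)))"
  have AB: "X 0 = A" "Y 0 = A" "X (Suc n) = B" "Y (Suc n) = B"
    using hXY unfolding heq_def cxAC_def by auto
  have hJ: "heq (ic C) n (A, Idn C A) (B, Idn C B) JX JdX JY JdY"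
    using J.heq_map[OF hXY] unfolding J.FX_def J.Fd_def JX_def JdX_def JY_def JdY_def .
  then have JX: "is_cx (ic C) n JX JdX" and JY: "is_cx (ic C) n JY JdY"
    unfolding heq_def cxAC_def by auto
  obtain f g where f: "is_cmor (ic C) n JX JdX JY JdY f"
    and f_ends: "f 0 = Idn (ic C) (A, Idn C A)" "f (Suc n) = Idn (ic C) (B, Idn C B)"
    and g: "is_cmor (ic C) n JY JdY JX JdX g"
    and g_ends: "g 0 = Idn (ic C) (A, Idn C A)" "g (Suc n) = Idn (ic C) (B, Idn C B)"
    and gf: "homotopic (ic C) n JX JdX JX JdX (K.ccomp JX JY JX g f) (K.cidn JX)"
    and fg: "homotopic (ic C) n JY JdY JY JdY (K.ccomp JY JX JY f g) (K.cidn JY)"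
    using hJ unfolding K.heq_iff by blast
  have "cxAC (ic C) n (A, e 0) (B, e (Suc n)) (fst (lift_cx C X dX e)) (snd (lift_cx C X dX e))"
    using cxAC_lift_cx[OF X eX] AB by simp
  moreover have "cxAC (ic C) n (A, e 0) (B, e (Suc n)) (fst (lift_cx C Y dY e')) (snd (lift_cx C Y dY e'))"
    using cxAC_lift_cx[OF Y eY] AB e0 e1 by simp
  ultimately show ?thesis
    using K.retracts_heq[OF JX JY _ _ hom_exact_incl[OF X exX, folded JX_def JdX_def] f g _ _ _ _ _ _ gf fg
        cmor_lift_incl[OF X eX, folded JX_def JdX_def] cmor_lift_proj[OF X eX, folded JX_def JdX_def]
        cmor_lift_incl[OF Y eY, folded JY_def JdY_def] cmor_lift_proj[OF Y eY, folded JY_def JdY_def]]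
      f_ends g_ends AB e0 e1 lift_proj_incl[OF eX] lift_proj_incl[OF eY]
    by (simp add: JX_def JY_def)
qed

end

section \<open>Extensions and realisations\<close>

lemma nexangulated_preadditive: "is_nexangulated C E s n \<Longrightarrow> preadditive C"
  unfolding is_nexangulated_def is_additive_def preadditive_def by blast

lemma nexangulated_hom_exact:
  assumes nC: "is_nexangulated C E s n"
    and "Cc \<in> Ob C" "A \<in> Ob C" "\<delta> \<in> Ex E Cc A" "(X, d) \<in> s Cc A \<delta>"
  shows "preadditive.hom_exact C n X d"
proof -
  have "\<forall>Cc\<in>Ob C. \<forall>A\<in>Ob C. \<forall>\<delta>\<in>Ex E Cc A. \<forall>X d. (X, d) \<in> s Cc A \<delta> \<longrightarrow> nexangle C E n X d \<delta>"
    using nC unfolding is_nexangulated_def by (elim conjE) assumption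
  then have "nexangle C E n X d \<delta>" using assms by blast
  then show ?thesis
    unfolding preadditive.hom_exact_def[OF nexangulated_preadditive[OF nC]] nexangle_def by blast
qed

lemma icE_Ex: "\<delta> \<in> Ex (icE C E) (C1, eC) (A1, eA) \<longleftrightarrow> (C1, eC) \<in> Ob (ic C) \<and> (A1, eA) \<in> Ob (ic C) \<and>
   (\<exists>\<alpha>. \<delta> = (eA, \<alpha>, eC) \<and> \<alpha> \<in> Ex E C1 A1 \<and> pushE C E C1 A1 A1 eA \<alpha> = \<alpha> \<and> pullE C E C1 C1 A1 eC \<alpha> = \<alpha>)"
  unfolding icE_def by auto

lemma ics_mem: "Z \<in> ics C s n (C1, eC) (A1, eA) (x, \<alpha>, y) \<longleftrightarrow>
  (\<exists>X d e. (X, d) \<in> s C1 A1 \<alpha> \<and> is_cmor C n X d X d e \<and>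
          (\<forall>i\<le>Suc n. Cp C (X i) (X i) (X i) (e i) (e i) = e i) \<and>
          e 0 = eA \<and> e (Suc n) = eC \<and>
          heq (ic C) n (A1, eA) (C1, eC) (fst (lift_cx C X d e)) (snd (lift_cx C X d e)) (fst Z) (snd Z))"
  unfolding ics_def by simp

lemma icE_EAd[simp]: "EAd (icE C E) (C1, eC) (A1, eA) (x, \<alpha>, y) (x', \<beta>, y') = (eA, EAd E C1 A1 \<alpha> \<beta>, eC)"
  unfolding icE_def by simp
lemma icE_EMp[simp]: "EMp (icE C E) (C', eC') (Cc, eC) (A, eA) (A', eA') (x, c, y) (x', a, y') (u, \<alpha>, v) =
   (x', EMp E C' Cc A A' c a \<alpha>, y)"
  unfolding icE_def by simp
lemma ic\<Gamma>_apply[simp]: "ic\<Gamma> Fm \<Gamma> (Cc, eC) (A, eA) (x, \<alpha>, y) = (Fm A A x, \<Gamma> Cc A \<alpha>, Fm Cc Cc y)"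
  unfolding ic\<Gamma>_def by simp
lemma icFo_apply[simp]: "icFo Fo Fm (X, e) = (Fo X, Fm X X e)" unfolding icFo_def by simp
lemma icFm_apply[simp]: "icFm Fm (X, eX) (Y, eY) (a, f, b) = (Fm Y Y a, Fm X Y f, Fm X X b)"
  unfolding icFm_def by simp

lemma hom_ext_group_iff:
  "h \<in> hom (ext_group E Cc A) (ext_group F Cc' A') \<longleftrightarrow>
     (\<forall>\<alpha>\<in>Ex E Cc A. h \<alpha> \<in> Ex F Cc' A') \<and>
     (\<forall>\<alpha>\<in>Ex E Cc A. \<forall>\<beta>\<in>Ex E Cc A. h (EAd E Cc A \<alpha> \<beta>) = EAd F Cc' A' (h \<alpha>) (h \<beta>))"
  by (auto simp: hom_def ext_group_def)

context additive_functor
begin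

lemma ic_nat_trans:
  assumes nt: "is_nat_trans C E D F Fo Fm \<Gamma>"
  shows "is_nat_trans (ic C) (icE C E) (ic D) (icE D F) (icFo Fo Fm) (icFm Fm) (ic\<Gamma> Fm \<Gamma>)"
proof -
  have hom: "\<And>Cc A. Cc \<in> Ob C \<Longrightarrow> A \<in> Ob C \<Longrightarrow> \<Gamma> Cc A \<in> hom (ext_group E Cc A) (ext_group F (Fo Cc) (Fo A))"
    using nt unfolding is_nat_trans_def by blast
  have nat: "\<And>C' Cc A A' c a \<alpha>. C' \<in> Ob C \<Longrightarrow> Cc \<in> Ob C \<Longrightarrow> A \<in> Ob C \<Longrightarrow> A' \<in> Ob C \<Longrightarrow>
      c \<in> Hm C C' Cc \<Longrightarrow> a \<in> Hm C A A' \<Longrightarrow> \<alpha> \<in> Ex E Cc A \<Longrightarrow>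
      \<Gamma> C' A' (EMp E C' Cc A A' c a \<alpha>)
        = EMp F (Fo C') (Fo Cc) (Fo A) (Fo A') (Fm C' Cc c) (Fm A A' a) (\<Gamma> Cc A \<alpha>)"
    using nt unfolding is_nat_trans_def by blast
  have "ic\<Gamma> Fm \<Gamma> Cc A \<in> hom (ext_group (icE C E) Cc A) (ext_group (icE D F) (icFo Fo Fm Cc) (icFo Fo Fm A))"
    if Cc: "Cc \<in> Ob (ic C)" and A: "A \<in> Ob (ic C)" for Cc A
  proof -
    obtain C1 eC A1 eA where o: "Cc = (C1, eC)" "A = (A1, eA)" by (cases Cc, cases A) auto
    have ob: "C1 \<in> Ob C" "A1 \<in> Ob C" "eC \<in> Hm C C1 C1" "eA \<in> Hm C A1 A1"
      using Cc A unfolding o C.ic_Ob by auto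
    have obD: "icFo Fo Fm Cc \<in> Ob (ic D)" "icFo Fo Fm A \<in> Ob (ic D)"
      using ic_add_functor Cc A unfolding is_add_functor_def by blast+
    have \<Gamma>: "\<forall>\<alpha>\<in>Ex E C1 A1. \<Gamma> C1 A1 \<alpha> \<in> Ex F (Fo C1) (Fo A1)"
      "\<forall>\<alpha>\<in>Ex E C1 A1. \<forall>\<beta>\<in>Ex E C1 A1.
         \<Gamma> C1 A1 (EAd E C1 A1 \<alpha> \<beta>) = EAd F (Fo C1) (Fo A1) (\<Gamma> C1 A1 \<alpha>) (\<Gamma> C1 A1 \<beta>)"
      using hom[OF ob(1,2)] unfolding hom_ext_group_iff by blast+
    have "pushE D F (Fo C1) (Fo A1) (Fo A1) (Fm A1 A1 eA) (\<Gamma> C1 A1 \<alpha>) = \<Gamma> C1 A1 \<alpha>"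
      if "\<alpha> \<in> Ex E C1 A1" "pushE C E C1 A1 A1 eA \<alpha> = \<alpha>" for \<alpha>
      using nat[OF ob(1) ob(1) ob(2) ob(2) C.Idn_Hm[OF ob(1)] ob(4) that(1)] that(2) Fm_Idn[OF ob(1)]
      unfolding pushE_def by simp
    moreover have "pullE D F (Fo C1) (Fo C1) (Fo A1) (Fm C1 C1 eC) (\<Gamma> C1 A1 \<alpha>) = \<Gamma> C1 A1 \<alpha>"
      if "\<alpha> \<in> Ex E C1 A1" "pullE C E C1 C1 A1 eC \<alpha> = \<alpha>" for \<alpha>
      using nat[OF ob(1) ob(1) ob(2) ob(2) ob(3) C.Idn_Hm[OF ob(2)] that(1)] that(2) Fm_Idn[OF ob(2)]
      unfolding pullE_def by simp
    ultimately show ?thesis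
      using obD \<Gamma> unfolding o hom_ext_group_iff by (auto simp: icE_Ex)
  qed
  moreover have "ic\<Gamma> Fm \<Gamma> C' A' (EMp (icE C E) C' Cc A A' c a \<alpha>) =
      EMp (icE D F) (icFo Fo Fm C') (icFo Fo Fm Cc) (icFo Fo Fm A) (icFo Fo Fm A')
        (icFm Fm C' Cc c) (icFm Fm A A' a) (ic\<Gamma> Fm \<Gamma> Cc A \<alpha>)"
    if ob: "C' \<in> Ob (ic C)" "Cc \<in> Ob (ic C)" "A \<in> Ob (ic C)" "A' \<in> Ob (ic C)"
      and c: "c \<in> Hm (ic C) C' Cc" and a: "a \<in> Hm (ic C) A A'" and \<alpha>: "\<alpha> \<in> Ex (icE C E) Cc A"
    for C' Cc A A' c a \<alpha>
  proof -
    obtain C'1 eC' C1 eC A1 eA A'1 eA' where o: "C' = (C'1, eC')" "Cc = (C1, eC)" "A = (A1, eA)" "A' = (A'1, eA')"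
      by (cases C', cases Cc, cases A, cases A') auto
    obtain c1 c2 c3 a1 a2 a3 where ca: "c = (c1, c2, c3)" "a = (a1, a2, a3)" by (cases c, cases a) auto
    have cc: "c1 = eC" "c3 = eC'" "c2 \<in> Hm C C'1 C1" "a1 = eA'" "a3 = eA" "a2 \<in> Hm C A1 A'1"
      using c a unfolding o ca C.ic_Hm_triple by auto
    obtain \<alpha>2 where al: "\<alpha> = (eA, \<alpha>2, eC)" "\<alpha>2 \<in> Ex E C1 A1" using \<alpha> unfolding o by (auto simp: icE_Ex)
    have "C'1 \<in> Ob C" "C1 \<in> Ob C" "A1 \<in> Ob C" "A'1 \<in> Ob C" using ob unfolding o C.ic_Ob by auto
    then show ?thesis unfolding o ca al using cc nat[OF _ _ _ _ cc(3) cc(6) al(2)] by simp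
  qed
  ultimately show ?thesis unfolding is_nat_trans_def by blast
qed

end

lemma hclass_mem: "Z \<in> hclass K n A B X d \<longleftrightarrow> heq K n A B X d (fst Z) (snd Z)"
  unfolding hclass_def by (cases Z) auto

lemma (in preadditive) hclass_eq_of_heq:
  assumes h: "heq C n A B X d Y d'"
  shows "hclass C n A B X d = hclass C n A B Y d'"
  unfolding hclass_def using heq_trans[OF heq_sym[OF h]] heq_trans[OF h] by blast

lemma (in preadditive) ics_eq_hclass_lift:
  assumes s: "s Cc A \<alpha> = hclass C n A Cc Y dY"
    and exact: "\<And>X d. (X, d) \<in> s Cc A \<alpha> \<Longrightarrow> hom_exact n X d"
    and cY: "cxAC C n A Cc Y dY" and e: "idem_cmor n Y dY e"
  shows "ics C s n (Cc, e (Suc n)) (A, e 0) (x, \<alpha>, y)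
       = hclass (ic C) n (A, e 0) (Cc, e (Suc n)) (fst (lift_cx C Y dY e)) (snd (lift_cx C Y dY e))"
proof (rule Set.set_eqI)
  fix Z
  have Y: "is_cx C n Y dY" using cY by (rule cxAC_cx)
  show "Z \<in> ics C s n (Cc, e (Suc n)) (A, e 0) (x, \<alpha>, y) \<longleftrightarrow>
    Z \<in> hclass (ic C) n (A, e 0) (Cc, e (Suc n)) (fst (lift_cx C Y dY e)) (snd (lift_cx C Y dY e))"
    unfolding ics_mem hclass_mem
  proof
    assume "\<exists>X d e'. (X, d) \<in> s Cc A \<alpha> \<and> is_cmor C n X d X d e' \<and>
      (\<forall>i\<le>Suc n. Cp C (X i) (X i) (X i) (e' i) (e' i) = e' i) \<and> e' 0 = e 0 \<and> e' (Suc n) = e (Suc n) \<and>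
      heq (ic C) n (A, e 0) (Cc, e (Suc n)) (fst (lift_cx C X d e')) (snd (lift_cx C X d e')) (fst Z) (snd Z)"
    then obtain X d e' where Xd: "(X, d) \<in> s Cc A \<alpha>" and e': "idem_cmor n X d e'"
      and ends: "e' 0 = e 0" "e' (Suc n) = e (Suc n)"
      and hZ: "heq (ic C) n (A, e 0) (Cc, e (Suc n)) (fst (lift_cx C X d e')) (snd (lift_cx C X d e')) (fst Z) (snd Z)"
      unfolding idem_cmor_def by blast
    have hXY: "heq C n A Cc X d Y dY" using Xd heq_sym unfolding s hclass_def by blast
    then have X: "is_cx C n X d" unfolding heq_def cxAC_def by blast
    from lift_cx_heq[OF X Y exact[OF Xd] hXY e' e] ends
    have "heq (ic C) n (A, e 0) (Cc, e (Suc n)) (fst (lift_cx C X d e')) (snd (lift_cx C X d e'))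
        (fst (lift_cx C Y dY e)) (snd (lift_cx C Y dY e))"
      by simp
    then show "heq (ic C) n (A, e 0) (Cc, e (Suc n)) (fst (lift_cx C Y dY e)) (snd (lift_cx C Y dY e)) (fst Z) (snd Z)"
      using preadditive.heq_trans[OF preadditive_ic[OF preadditive_axioms] preadditive.heq_sym[OF preadditive_ic[OF preadditive_axioms]] hZ]
      by blast
  next
    assume "heq (ic C) n (A, e 0) (Cc, e (Suc n)) (fst (lift_cx C Y dY e)) (snd (lift_cx C Y dY e)) (fst Z) (snd Z)"
    moreover have "(Y, dY) \<in> s Cc A \<alpha>" unfolding s hclass_def using heq_refl[OF cY] by simp
    ultimately show "\<exists>X d e'. (X, d) \<in> s Cc A \<alpha> \<and> is_cmor C n X d X d e' \<and>
      (\<forall>i\<le>Suc n. Cp C (X i) (X i) (X i) (e' i) (e' i) = e' i) \<and> e' 0 = e 0 \<and> e' (Suc n) = e (Suc n) \<and>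
      heq (ic C) n (A, e 0) (Cc, e (Suc n)) (fst (lift_cx C X d e')) (snd (lift_cx C X d e')) (fst Z) (snd Z)"
      using e unfolding idem_cmor_def by blast
  qed
qed

context additive_functor
begin

lemma ic_additive_functor: "additive_functor (ic C) (ic D) (icFo Fo Fm) (icFm Fm)"
  using ic_add_functor preadditive_ic[OF C.preadditive_axioms] preadditive_ic[OF D.preadditive_axioms]
  by (simp add: additive_functor_def additive_functor_axioms_def)

lemma heq_lift_map:
  assumes X: "is_cx C n X d" and e: "C.idem_cmor n X d e"
    and h: "heq (ic C) n A B (fst (lift_cx C X d e)) (snd (lift_cx C X d e)) Z dZ"
  shows "heq (ic D) n (icFo Fo Fm A) (icFo Fo Fm B)
     (fst (lift_cx D (FX X) (Fd X d) (Ff X X e))) (snd (lift_cx D (FX X) (Fd X d) (Ff X X e)))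
     (\<lambda>i. icFo Fo Fm (Z i)) (\<lambda>i. icFm Fm (Z i) (Z (Suc i)) (dZ i))"
proof -
  interpret ICF: additive_functor "ic C" "ic D" "icFo Fo Fm" "icFm Fm"
    by (rule ic_additive_functor)
  have "ICF.FX (fst (lift_cx C X d e)) = fst (lift_cx D (FX X) (Fd X d) (Ff X X e))"
    by (simp add: ICF.FX_def C.lift_fst D.lift_fst FX_def Ff_def)
  moreover have "ICF.Fd (fst (lift_cx C X d e)) (snd (lift_cx C X d e)) i
      = snd (lift_cx D (FX X) (Fd X d) (Ff X X e)) i" if i: "i \<le> n" for i
    using C.idem_Hm[OF e, of "Suc i"] C.cx_diff_Hm[OF X i] i
    by (simp add: ICF.Fd_def C.lift_fst C.lift_snd D.lift_snd FX_def Fd_def Ff_def Fm_Cp)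
  ultimately show ?thesis
    using ICF.D.heq_diff_cong[OF ICF.heq_map[OF h]] by (simp add: ICF.FX_def ICF.Fd_def)
qed

lemma ic_realisation_map:
  assumes nC: "is_nexangulated C E s n" and nD: "is_nexangulated D F t n"
    and nf: "is_nexfun C E s D F t n Fo Fm \<Gamma>"
  shows "\<forall>Cc\<in>Ob (ic C). \<forall>A\<in>Ob (ic C). \<forall>\<delta>\<in>Ex (icE C E) Cc A. \<forall>X d. (X, d) \<in> ics C s n Cc A \<delta> \<longrightarrow>
        ics D t n (icFo Fo Fm Cc) (icFo Fo Fm A) (ic\<Gamma> Fm \<Gamma> Cc A \<delta>)
          = hclass (ic D) n (icFo Fo Fm A) (icFo Fo Fm Cc) (\<lambda>i. icFo Fo Fm (X i)) (\<lambda>i. icFm Fm (X i) (X (Suc i)) (d i))"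
proof (intro ballI allI impI)
  fix Cc A \<delta> X d
  assume Cc: "Cc \<in> Ob (ic C)" and A: "A \<in> Ob (ic C)" and \<delta>: "\<delta> \<in> Ex (icE C E) Cc A"
    and Xd: "(X, d) \<in> ics C s n Cc A \<delta>"
  obtain C1 eC A1 eA where o: "Cc = (C1, eC)" "A = (A1, eA)" by (cases Cc, cases A) auto
  obtain \<alpha> where \<alpha>: "\<delta> = (eA, \<alpha>, eC)" "\<alpha> \<in> Ex E C1 A1" using \<delta> unfolding o by (auto simp: icE_Ex)
  have ob: "C1 \<in> Ob C" "A1 \<in> Ob C" using Cc A unfolding o C.ic_Ob by auto
  obtain X0 d0 e0 where s0: "(X0, d0) \<in> s C1 A1 \<alpha>" and e0: "C.idem_cmor n X0 d0 e0"
    and ends: "e0 0 = eA" "e0 (Suc n) = eC"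
    and hl: "heq (ic C) n (A1, eA) (C1, eC) (fst (lift_cx C X0 d0 e0)) (snd (lift_cx C X0 d0 e0)) X d"
    using Xd unfolding o \<alpha> ics_mem C.idem_cmor_def by auto
  have "is_realisation C E n s" using nC unfolding is_nexangulated_def by blast
  then obtain Xr dr where "s C1 A1 \<alpha> = hclass C n A1 C1 Xr dr"
    using ob \<alpha>(2) unfolding is_realisation_def by blast
  then have cX0: "cxAC C n A1 C1 X0 d0" using s0 unfolding hclass_def heq_def by blast
  then have X0: "is_cx C n X0 d0" and X0_ends: "X0 0 = A1" "X0 (Suc n) = C1" unfolding cxAC_def by auto
  have \<Gamma>\<alpha>: "\<Gamma> C1 A1 \<alpha> \<in> Ex F (Fo C1) (Fo A1)"
    using nf ob \<alpha>(2) unfolding is_nexfun_def is_nat_trans_def hom_ext_group_iff by blast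
  have t: "t (Fo C1) (Fo A1) (\<Gamma> C1 A1 \<alpha>) = hclass D n (Fo A1) (Fo C1) (FX X0) (Fd X0 d0)"
    using nf ob \<alpha>(2) s0 unfolding is_nexfun_def FX_def Fd_def by blast
  have exact: "D.hom_exact n X' d'" if "(X', d') \<in> t (Fo C1) (Fo A1) (\<Gamma> C1 A1 \<alpha>)" for X' d'
    by (rule nexangulated_hom_exact[OF nD Fo_Ob[OF ob(1)] Fo_Ob[OF ob(2)] \<Gamma>\<alpha> that])
  have Fe0_ends: "Ff X0 X0 e0 0 = Fm A1 A1 eA" "Ff X0 X0 e0 (Suc n) = Fm C1 C1 eC"
    using ends X0_ends by (simp_all add: Ff_def)
  have "ics D t n (Fo C1, Fm C1 C1 eC) (Fo A1, Fm A1 A1 eA) (Fm A1 A1 eA, \<Gamma> C1 A1 \<alpha>, Fm C1 C1 eC)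
      = hclass (ic D) n (Fo A1, Fm A1 A1 eA) (Fo C1, Fm C1 C1 eC)
          (fst (lift_cx D (FX X0) (Fd X0 d0) (Ff X0 X0 e0))) (snd (lift_cx D (FX X0) (Fd X0 d0) (Ff X0 X0 e0)))"
    using D.ics_eq_hclass_lift[where s=t and Cc="Fo C1" and A="Fo A1" and \<alpha>="\<Gamma> C1 A1 \<alpha>", OF t exact cxAC_map[OF cX0] idem_cmor_map[OF X0 e0]]
    unfolding Fe0_ends .
  also have "\<dots> = hclass (ic D) n (Fo A1, Fm A1 A1 eA) (Fo C1, Fm C1 C1 eC)
      (\<lambda>i. icFo Fo Fm (X i)) (\<lambda>i. icFm Fm (X i) (X (Suc i)) (d i))"
    using preadditive.hclass_eq_of_heq[OF preadditive_ic[OF D.preadditive_axioms] heq_lift_map[OF X0 e0 hl]]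
    by simp
  finally show "ics D t n (icFo Fo Fm Cc) (icFo Fo Fm A) (ic\<Gamma> Fm \<Gamma> Cc A \<delta>)
      = hclass (ic D) n (icFo Fo Fm A) (icFo Fo Fm Cc) (\<lambda>i. icFo Fo Fm (X i)) (\<lambda>i. icFm Fm (X i) (X (Suc i)) (d i))"
    unfolding o \<alpha> by simp
qed

end

theorem lemma3p6:
  fixes C :: "('o,'m) addcat" and E :: "('o,'m,'x) bifun"
    and s :: "'o \<Rightarrow> 'o \<Rightarrow> 'x \<Rightarrow> ('o,'m) cx set"
    and D :: "('p,'q) addcat" and F :: "('p,'q,'y) bifun"
    and t :: "'p \<Rightarrow> 'p \<Rightarrow> 'y \<Rightarrow> ('p,'q) cx set"
    and n :: nat
    and Fo :: "'o \<Rightarrow> 'p" and Fm :: "'o \<Rightarrow> 'o \<Rightarrow> 'm \<Rightarrow> 'q" and \<Gamma> :: "'o \<Rightarrow> 'o \<Rightarrow> 'x \<Rightarrow> 'y"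
  assumes "is_nexangulated C E s n"
    and "is_nexangulated D F t n"
    and "is_nexfun C E s D F t n Fo Fm \<Gamma>"
  shows "is_nexfun (ic C) (icE C E) (ics C s n) (ic D) (icE D F) (ics D t n) n
           (icFo Fo Fm) (icFm Fm) (ic\<Gamma> Fm \<Gamma>)"
proof -
  have add_functor: "is_add_functor C D Fo Fm" and nt: "is_nat_trans C E D F Fo Fm \<Gamma>"
    using assms(3) unfolding is_nexfun_def by blast+
  interpret F: additive_functor C D Fo Fm
    using nexangulated_preadditive[OF assms(1)] nexangulated_preadditive[OF assms(2)] add_functor
    by (simp add: additive_functor_def additive_functor_axioms_def)
  show ?thesis
    unfolding is_nexfun_def
    using F.ic_add_functor F.ic_nat_trans[OF nt] F.ic_realisation_map[OF assms] by blast
qed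

end
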